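(* Assume $s\le n+2$ and let ${\mathcal L}={\mathcal L}_{n,d}(m_1,\dots,m_s)$ be a non-empty linear system. Let $0\le r\le \min(n,s)-1$. Then for every $I\subseteq\{1,\dots,s\}$ with $|I|=r+1$, the linear system ${\mathcal L}$ contains the cycle $L_I$ in its base locus with multiplicity (exactly) $k_I$ (in particular, if $k_I=0$, $L_I$ is not contained in the base locus).
   Context: ${\mathcal L}_{n,d}(m_1,\dots,m_s)$ is the linear system of degree-$d$ hypersurfaces in complex ${\mathbb P}^n$ with multiplicity at least $m_i$ at general points $p_1,\dots,p_s$. For $I\subseteq\{1,\dots,s\}$ with $|I|=r+1$, $L_I\cong{\mathbb P}^r$ is the linear span of the points $p_i$, $i\in I$, and $k_I:=\max\left(\sum_{i\in I}m_i-rd,\,0\right)$. *)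

theory Defs
  imports Complex_Main
begin

definition pmonos :: "'v set \<Rightarrow> nat \<Rightarrow> ('v \<Rightarrow> nat) set" where
  "pmonos V D = {\<alpha>. (\<forall>v. v \<notin> V \<longrightarrow> \<alpha> v = 0) \<and> (\<Sum>v\<in>V. \<alpha> v) \<le> D}"

definition peval :: "'v set \<Rightarrow> nat \<Rightarrow> (('v \<Rightarrow> nat) \<Rightarrow> complex) \<Rightarrow> ('v \<Rightarrow> complex) \<Rightarrow> complex" where
  "peval V D g y = (\<Sum>\<alpha>\<in>pmonos V D. g \<alpha> * (\<Prod>v\<in>V. y v ^ \<alpha> v))"

definition hmonos :: "nat \<Rightarrow> nat \<Rightarrow> (nat \<Rightarrow> nat) set" where
  "hmonos n d = {\<alpha>. (\<forall>i>n. \<alpha> i = 0) \<and> (\<Sum>i\<le>n. \<alpha> i) = d}"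

(* A degree-d form F = sum c(alpha) x^alpha (coefficients taken on hmonos n d);
   value at x of the partial derivative d^beta F. *)
definition dpeval :: "nat \<Rightarrow> nat \<Rightarrow> ((nat \<Rightarrow> nat) \<Rightarrow> complex) \<Rightarrow> (nat \<Rightarrow> nat) \<Rightarrow> (nat \<Rightarrow> complex) \<Rightarrow> complex" where
  "dpeval n d c \<beta> x = (\<Sum>\<alpha>\<in>hmonos n d. c \<alpha> *
      (\<Prod>i\<le>n. of_nat ((\<alpha> i choose \<beta> i) * fact (\<beta> i)) * x i ^ (\<alpha> i - \<beta> i)))"

definition mult_ge :: "nat \<Rightarrow> nat \<Rightarrow> ((nat \<Rightarrow> nat) \<Rightarrow> complex) \<Rightarrow> (nat \<Rightarrow> complex) \<Rightarrow> nat \<Rightarrow> bool" where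
  "mult_ge n d c x k \<longleftrightarrow> (\<forall>\<beta>. (\<forall>i>n. \<beta> i = 0) \<longrightarrow> (\<Sum>i\<le>n. \<beta> i) < k \<longrightarrow> dpeval n d c \<beta> x = 0)"

definition hs_nonzero :: "nat \<Rightarrow> nat \<Rightarrow> ((nat \<Rightarrow> nat) \<Rightarrow> complex) \<Rightarrow> bool" where
  "hs_nonzero n d c \<longleftrightarrow> (\<exists>\<alpha>\<in>hmonos n d. c \<alpha> \<noteq> 0)"

(* The linear system L_{n,d}(m_1,...,m_s) with base points p_1,...,p_s (as vectors of C^{n+1}). *)
definition linsys :: "nat \<Rightarrow> nat \<Rightarrow> nat \<Rightarrow> (nat \<Rightarrow> nat) \<Rightarrow> (nat \<Rightarrow> nat \<Rightarrow> complex)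
    \<Rightarrow> ((nat \<Rightarrow> nat) \<Rightarrow> complex) set" where
  "linsys n d s m p = {c. \<forall>i\<in>{1..s}. mult_ge n d c (p i) (m i)}"

(* Nonzero vectors of the linear span of the p_i, i in I: the cone over L_I. *)
definition span_pts :: "nat \<Rightarrow> (nat \<Rightarrow> nat \<Rightarrow> complex) \<Rightarrow> nat set \<Rightarrow> (nat \<Rightarrow> complex) set" where
  "span_pts n p I = {x. (\<exists>a. \<forall>j\<le>n. x j = (\<Sum>i\<in>I. a i * p i j)) \<and> (\<exists>j\<le>n. x j \<noteq> 0)}"

definition mult_along :: "nat \<Rightarrow> nat \<Rightarrow> ((nat \<Rightarrow> nat) \<Rightarrow> complex) \<Rightarrow> (nat \<Rightarrow> complex) set \<Rightarrow> nat \<Rightarrow> bool" where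
  "mult_along n d c L k \<longleftrightarrow> (\<forall>q\<in>L. mult_ge n d c q k)"

definition base_mult_exact :: "nat \<Rightarrow> nat \<Rightarrow> nat \<Rightarrow> (nat \<Rightarrow> nat) \<Rightarrow> (nat \<Rightarrow> nat \<Rightarrow> complex)
    \<Rightarrow> nat set \<Rightarrow> nat \<Rightarrow> bool" where
  "base_mult_exact n d s m p I k \<longleftrightarrow>
     (\<forall>c\<in>linsys n d s m p. mult_along n d c (span_pts n p I) k) \<and>
     (\<exists>c\<in>linsys n d s m p. hs_nonzero n d c \<and> \<not> mult_along n d c (span_pts n p I) (Suc k))"

definition kI :: "nat \<Rightarrow> (nat \<Rightarrow> nat) \<Rightarrow> nat \<Rightarrow> nat set \<Rightarrow> nat" where
  "kI d m r I = nat (int (\<Sum>i\<in>I. m i) - int r * int d)"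

end

theory Submission
  imports Defs "HOL-Computational_Algebra.Polynomial" "HOL-Library.FuncSet" "Jordan_Normal_Form.Determinant"
begin

(*
  When the determinants collected in the polynomial g do not vanish, a linear change of
  coordinates turns the points into the coordinate points e_0, ..., e_n and, if s = n + 2, one more
  point w with no zero coordinate.  A form of degree d has multiplicity at least m_l at e_l iff each
  of its monomials has x_l-degree at most d - m_l; counting degrees, every such form vanishes to
  order at least k_I = d - sum_{i in I} (d - m_i) along L_I.  Restricting a nonzero member of the
  system to the rational normal curve through all the points yields sum_l m_l + m_{n+2} <= n d, and
  this inequality is exactly what allows one to write down a product of d hyperplanes in the system
  (coordinate hyperplanes, and hyperplanes through w spanned by all but two coordinate points)
  containing L_I exactly k_I times.
*)

section \<open>Forms, monomials and Taylor expansion\<close>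

definition mono_eval :: "nat \<Rightarrow> (nat\<Rightarrow>nat) \<Rightarrow> (nat \<Rightarrow> complex) \<Rightarrow> complex" where
  "mono_eval n \<alpha> x = (\<Prod>i\<le>n. x i ^ \<alpha> i)"

definition form_eval :: "nat \<Rightarrow> nat \<Rightarrow> ((nat\<Rightarrow>nat)\<Rightarrow>complex) \<Rightarrow> (nat\<Rightarrow>complex) \<Rightarrow> complex" where
  "form_eval n d c x = (\<Sum>\<alpha>\<in>hmonos n d. c \<alpha> * mono_eval n \<alpha> x)"

definition exp_box :: "nat \<Rightarrow> nat \<Rightarrow> (nat \<Rightarrow> nat) set" where
  "exp_box n d = {\<beta>. (\<forall>i>n. \<beta> i = 0) \<and> (\<forall>i\<le>n. \<beta> i \<le> d)}"

lemma finite_exp_box: "finite (exp_box n d)"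
proof -
  have "exp_box n d \<subseteq> {f. \<forall>x. (x\<in>{..n} \<longrightarrow> f x \<in> {..d}) \<and> (x\<notin>{..n} \<longrightarrow> f x = 0)}"
    unfolding exp_box_def by (simp add: subset_iff not_le)
  then show ?thesis using finite_set_of_finite_funs[of "{..n}" "{..d}" 0] finite_subset by blast
qed

lemma hmonos_subset_exp_box: "hmonos n d \<subseteq> exp_box n d"
proof
  fix \<alpha> assume a: "\<alpha> \<in> hmonos n d"
  then have s: "(\<Sum>i\<le>n. \<alpha> i) = d" and z: "\<forall>i>n. \<alpha> i = 0" unfolding hmonos_def by auto
  have "\<forall>i\<le>n. \<alpha> i \<le> d"
  proof (intro allI impI)
    fix i assume "i \<le> n"
    then have "\<alpha> i \<le> (\<Sum>i\<le>n. \<alpha> i)" by (intro member_le_sum) auto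
    then show "\<alpha> i \<le> d" using s by simp
  qed
  then show "\<alpha> \<in> exp_box n d" using z unfolding exp_box_def by auto
qed

lemma finite_hmonos: "finite (hmonos n d)"
  using finite_subset[OF hmonos_subset_exp_box finite_exp_box] .

lemma binomial_ring_atMost:
  fixes x z :: complex assumes "a \<le> d"
  shows "(x + z) ^ a = (\<Sum>b\<le>d. of_nat (a choose b) * x ^ (a - b) * z ^ b)"
proof -
  have "(x + z) ^ a = (z + x) ^ a" by (simp add: add.commute)
  also have "\<dots> = (\<Sum>b\<le>a. of_nat (a choose b) * z ^ b * x ^ (a - b))"
    by (rule binomial_ring)
  also have "\<dots> = (\<Sum>b\<le>a. of_nat (a choose b) * x ^ (a - b) * z ^ b)"
    by (simp add: mult_ac)
  also have "\<dots> = (\<Sum>b\<le>d. of_nat (a choose b) * x ^ (a - b) * z ^ b)"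
    by (rule sum.mono_neutral_left) (use assms in auto)
  finally show ?thesis .
qed

definition extend_zero :: "nat \<Rightarrow> (nat \<Rightarrow> nat) \<Rightarrow> (nat \<Rightarrow> nat)" where
  "extend_zero n g = (\<lambda>i. if i \<le> n then g i else 0)"

lemma bij_betw_extend_zero: "bij_betw (extend_zero n) (PiE {..n} (\<lambda>_. {..d})) (exp_box n d)"
proof (rule bij_betw_imageI)
  show "inj_on (extend_zero n) (PiE {..n} (\<lambda>_. {..d}))"
  proof (rule inj_onI)
    fix g h assume g: "g \<in> PiE {..n} (\<lambda>_. {..d})" and h: "h \<in> PiE {..n} (\<lambda>_. {..d})"
      and e: "extend_zero n g = extend_zero n h"
    show "g = h"
    proof (rule PiE_ext[OF g h])
      fix i assume "i \<in> {..n}"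
      then show "g i = h i" using fun_cong[OF e, of i] by (simp add: extend_zero_def)
    qed
  qed
  show "extend_zero n ` PiE {..n} (\<lambda>_. {..d}) = exp_box n d"
  proof
    show "extend_zero n ` PiE {..n} (\<lambda>_. {..d}) \<subseteq> exp_box n d"
      by (auto simp: extend_zero_def exp_box_def PiE_def Pi_def)
    show "exp_box n d \<subseteq> extend_zero n ` PiE {..n} (\<lambda>_. {..d})"
    proof
      fix \<beta> assume b: "\<beta> \<in> exp_box n d"
      have "extend_zero n (restrict \<beta> {..n}) = \<beta>"
        using b by (auto simp: extend_zero_def exp_box_def)
      moreover have "restrict \<beta> {..n} \<in> PiE {..n} (\<lambda>_. {..d})"
        using b by (auto simp: exp_box_def)
      ultimately show "\<beta> \<in> extend_zero n ` PiE {..n} (\<lambda>_. {..d})" by (metis image_eqI)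
    qed
  qed
qed

lemma mono_eval_shift:
  assumes "\<alpha> \<in> exp_box n d"
  shows "mono_eval n \<alpha> (\<lambda>i. x i + z i) =
    (\<Sum>\<beta>\<in>exp_box n d. \<Prod>i\<le>n. of_nat (\<alpha> i choose \<beta> i) * x i ^ (\<alpha> i - \<beta> i) * z i ^ \<beta> i)"
proof -
  let ?f = "\<lambda>i b. of_nat (\<alpha> i choose b) * x i ^ (\<alpha> i - b) * z i ^ b"
  have "mono_eval n \<alpha> (\<lambda>i. x i + z i) = (\<Prod>i\<le>n. \<Sum>b\<le>d. ?f i b)"
    unfolding mono_eval_def
    by (rule prod.cong[OF refl], rule binomial_ring_atMost) (use assms in \<open>auto simp: exp_box_def\<close>)
  also have "\<dots> = (\<Sum>g\<in>PiE {..n} (\<lambda>_. {..d}). \<Prod>i\<le>n. ?f i (g i))"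
    by (rule prod_sum_PiE) auto
  also have "\<dots> = (\<Sum>g\<in>PiE {..n} (\<lambda>_. {..d}). \<Prod>i\<le>n. ?f i (extend_zero n g i))"
    by (rule sum.cong[OF refl], rule prod.cong[OF refl]) (simp add: extend_zero_def)
  also have "\<dots> = (\<Sum>\<beta>\<in>exp_box n d. \<Prod>i\<le>n. ?f i (\<beta> i))"
    using sum.reindex_bij_betw[OF bij_betw_extend_zero, of "\<lambda>\<beta>. \<Prod>i\<le>n. ?f i (\<beta> i)" n d]
    by simp
  finally show ?thesis .
qed

definition fact_prod :: "nat \<Rightarrow> (nat \<Rightarrow> nat) \<Rightarrow> complex" where
  "fact_prod n \<beta> = of_nat (\<Prod>i\<le>n. fact (\<beta> i))"

lemma fact_prod_nonzero: "fact_prod n \<beta> \<noteq> 0"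
  unfolding fact_prod_def by (simp add: prod_zero_iff)

lemma shift_term_split:
  "(\<Prod>i\<le>n. of_nat (\<alpha> i choose \<beta> i) * x i ^ (\<alpha> i - \<beta> i) * z i ^ \<beta> i) =
   mono_eval n \<beta> z / fact_prod n \<beta> * (\<Prod>i\<le>n. of_nat ((\<alpha> i choose \<beta> i) * fact (\<beta> i)) * x i ^ (\<alpha> i - \<beta> i))"
proof -
  have "(\<Prod>i\<le>n. of_nat ((\<alpha> i choose \<beta> i) * fact (\<beta> i)) * x i ^ (\<alpha> i - \<beta> i)) =
     (\<Prod>i\<le>n. (of_nat (fact (\<beta> i))::complex)) * (\<Prod>i\<le>n. of_nat (\<alpha> i choose \<beta> i) * x i ^ (\<alpha> i - \<beta> i))"
    by (simp add: prod.distrib[symmetric] mult_ac)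
  moreover have "(\<Prod>i\<le>n. (of_nat (fact (\<beta> i))::complex)) = fact_prod n \<beta>"
    unfolding fact_prod_def by simp
  ultimately have e: "(\<Prod>i\<le>n. of_nat ((\<alpha> i choose \<beta> i) * fact (\<beta> i)) * x i ^ (\<alpha> i - \<beta> i)) =
     fact_prod n \<beta> * (\<Prod>i\<le>n. of_nat (\<alpha> i choose \<beta> i) * x i ^ (\<alpha> i - \<beta> i))" by simp
  have "(\<Prod>i\<le>n. of_nat (\<alpha> i choose \<beta> i) * x i ^ (\<alpha> i - \<beta> i) * z i ^ \<beta> i) =
     (\<Prod>i\<le>n. of_nat (\<alpha> i choose \<beta> i) * x i ^ (\<alpha> i - \<beta> i)) * mono_eval n \<beta> z"
    unfolding mono_eval_def by (simp add: prod.distrib)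
  then show ?thesis unfolding e using fact_prod_nonzero[of n \<beta>] by (simp add: field_simps)
qed

theorem form_eval_taylor:
  "form_eval n d c (\<lambda>i. x i + z i) = (\<Sum>\<beta>\<in>exp_box n d. mono_eval n \<beta> z / fact_prod n \<beta> * dpeval n d c \<beta> x)"
proof -
  have "form_eval n d c (\<lambda>i. x i + z i) = (\<Sum>\<alpha>\<in>hmonos n d. \<Sum>\<beta>\<in>exp_box n d.
      c \<alpha> * (mono_eval n \<beta> z / fact_prod n \<beta> * (\<Prod>i\<le>n. of_nat ((\<alpha> i choose \<beta> i) * fact (\<beta> i)) * x i ^ (\<alpha> i - \<beta> i))))"
    unfolding form_eval_def
  proof (rule sum.cong[OF refl])
    fix \<alpha> assume "\<alpha> \<in> hmonos n d"
    then have "\<alpha> \<in> exp_box n d" using hmonos_subset_exp_box by blast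
    then show "c \<alpha> * mono_eval n \<alpha> (\<lambda>i. x i + z i) = (\<Sum>\<beta>\<in>exp_box n d.
      c \<alpha> * (mono_eval n \<beta> z / fact_prod n \<beta> * (\<Prod>i\<le>n. of_nat ((\<alpha> i choose \<beta> i) * fact (\<beta> i)) * x i ^ (\<alpha> i - \<beta> i))))"
      by (simp only: mono_eval_shift shift_term_split sum_distrib_left)
  qed
  also have "\<dots> = (\<Sum>\<beta>\<in>exp_box n d. \<Sum>\<alpha>\<in>hmonos n d.
      c \<alpha> * (mono_eval n \<beta> z / fact_prod n \<beta> * (\<Prod>i\<le>n. of_nat ((\<alpha> i choose \<beta> i) * fact (\<beta> i)) * x i ^ (\<alpha> i - \<beta> i))))"
    by (rule sum.swap)
  also have "\<dots> = (\<Sum>\<beta>\<in>exp_box n d. mono_eval n \<beta> z / fact_prod n \<beta> * dpeval n d c \<beta> x)"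
    unfolding dpeval_def by (simp add: sum_distrib_left mult_ac)
  finally show ?thesis .
qed

lemma sum_powers_eq_0_imp_coeffs_0:
  fixes b :: "nat \<Rightarrow> complex"
  assumes "finite E" "\<forall>t. (\<Sum>e\<in>E. b e * t ^ e) = 0"
  shows "\<forall>e\<in>E. b e = 0"
proof -
  define p where "p = (\<Sum>e\<in>E. monom (b e) e)"
  have "\<forall>t. poly p t = 0" using assms(2) unfolding p_def by (simp add: poly_sum poly_monom)
  then have p0: "p = 0" using poly_all_0_iff_0 by blast
  show ?thesis
  proof
    fix e assume e: "e \<in> E"
    have "coeff p e = (\<Sum>e'\<in>E. if e' = e then b e' else 0)"
      unfolding p_def by (simp add: coeff_sum coeff_monom)
    also have "\<dots> = b e" using e assms(1) by (simp add: sum.delta)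
    finally show "b e = 0" using p0 by simp
  qed
qed

text \<open>Grouping by the exponent of \<open>z k\<close> turns a vanishing polynomial in \<open>z 0, \<dots>, z k\<close> into a
  vanishing univariate one, whose coefficients are the slices below.\<close>

lemma mono_sum_slice_eq_0:
  fixes a :: "(nat \<Rightarrow> nat) \<Rightarrow> complex"
  assumes fS: "finite S" and s: "\<forall>z. (\<Sum>\<beta>\<in>S. a \<beta> * (\<Prod>i<Suc k. z i ^ \<beta> i)) = 0"
  shows "(\<Sum>\<beta>\<in>{\<beta>\<in>S. \<beta> k = e}. a \<beta> * (\<Prod>i<k. z i ^ \<beta> i)) = 0"
proof -
  let ?f = "\<lambda>\<beta>. a \<beta> * (\<Prod>i<k. z i ^ \<beta> i)"
  have "(\<Sum>e\<in>(\<lambda>\<beta>. \<beta> k) ` S. (\<Sum>\<beta>\<in>{\<beta>\<in>S. \<beta> k = e}. ?f \<beta>) * t ^ e) = 0" for t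
  proof -
    have "(\<Sum>e\<in>(\<lambda>\<beta>. \<beta> k) ` S. (\<Sum>\<beta>\<in>{\<beta>\<in>S. \<beta> k = e}. ?f \<beta>) * t ^ e)
       = (\<Sum>e\<in>(\<lambda>\<beta>. \<beta> k) ` S. (\<Sum>\<beta>\<in>{\<beta>\<in>S. \<beta> k = e}. ?f \<beta> * t ^ \<beta> k))"
      by (simp add: sum_distrib_right)
    also have "\<dots> = (\<Sum>\<beta>\<in>S. ?f \<beta> * t ^ \<beta> k)"
      by (rule sum.image_gen[symmetric]) (rule fS)
    also have "\<dots> = (\<Sum>\<beta>\<in>S. a \<beta> * (\<Prod>i<Suc k. (z(k:=t)) i ^ \<beta> i))"
      by (rule sum.cong[OF refl]) (simp add: lessThan_Suc mult_ac)
    also have "\<dots> = 0" using s by blast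
    finally show ?thesis .
  qed
  from sum_powers_eq_0_imp_coeffs_0[OF _ allI[OF this]] fS
  have "\<forall>e\<in>(\<lambda>\<beta>. \<beta> k) ` S. (\<Sum>\<beta>\<in>{\<beta>\<in>S. \<beta> k = e}. ?f \<beta>) = 0" by blast
  then show ?thesis by (cases "e \<in> (\<lambda>\<beta>. \<beta> k) ` S") (auto intro: sum.neutral)
qed

lemma mono_sum_eq_0_imp_coeffs_0_lessThan:
  "\<forall>S a. finite S \<longrightarrow> (\<forall>\<beta>\<in>S. \<forall>i\<ge>k. \<beta> i = 0) \<longrightarrow>
     (\<forall>z::nat\<Rightarrow>complex. (\<Sum>\<beta>\<in>S. a \<beta> * (\<Prod>i<k. z i ^ \<beta> i)) = 0) \<longrightarrow> (\<forall>\<beta>\<in>S. a \<beta> = 0)"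
proof (induction k)
  case 0
  show ?case
  proof (intro allI impI ballI)
    fix S a \<beta> assume z: "\<forall>\<beta>\<in>S. \<forall>i\<ge>0. \<beta> i = (0::nat)"
      and s: "\<forall>z::nat\<Rightarrow>complex. (\<Sum>\<beta>\<in>S. a \<beta> * (\<Prod>i<0. z i ^ \<beta> i)) = 0" and b: "\<beta> \<in> S"
    have "\<forall>\<gamma>\<in>S. \<gamma> = \<beta>" using z b by (simp add: fun_eq_iff) metis
    then have "S = {\<beta>}" using b by blast
    then show "a \<beta> = 0" using s by simp
  qed
next
  case (Suc k)
  show ?case
  proof (intro allI impI ballI)
    fix S a \<beta>0 assume fS: "finite S" and zS: "\<forall>\<beta>\<in>S. \<forall>i\<ge>Suc k. \<beta> i = (0::nat)"
      and s: "\<forall>z::nat\<Rightarrow>complex. (\<Sum>\<beta>\<in>S. a \<beta> * (\<Prod>i<Suc k. z i ^ \<beta> i)) = 0" and b0: "\<beta>0 \<in> S"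
    define S0 where "S0 = {\<beta>\<in>S. \<beta> k = \<beta>0 k}"
    define a' where "a' = (\<lambda>\<gamma>. a (\<gamma>(k := \<beta>0 k)))"
    have inj: "inj_on (\<lambda>\<beta>. \<beta>(k:=0)) S0"
      unfolding S0_def by (rule inj_onI) (metis (mono_tags, lifting) fun_upd_idem_iff fun_upd_upd mem_Collect_eq)
    have f3: "\<forall>z. (\<Sum>\<beta>\<in>(\<lambda>\<beta>. \<beta>(k:=0)) ` S0. a' \<beta> * (\<Prod>i<k. z i ^ \<beta> i)) = 0"
    proof
      fix z :: "nat \<Rightarrow> complex"
      have "(\<Sum>\<beta>\<in>(\<lambda>\<beta>. \<beta>(k:=0)) ` S0. a' \<beta> * (\<Prod>i<k. z i ^ \<beta> i)) =
          (\<Sum>\<beta>\<in>S0. a' (\<beta>(k:=0)) * (\<Prod>i<k. z i ^ (\<beta>(k:=0)) i))"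
        by (rule sum.reindex[OF inj, unfolded comp_def])
      also have "\<dots> = (\<Sum>\<beta>\<in>S0. a \<beta> * (\<Prod>i<k. z i ^ \<beta> i))"
        unfolding a'_def S0_def by (intro sum.cong refl arg_cong2[where f = "(*)"] prod.cong) (auto simp: fun_upd_idem)
      finally show "(\<Sum>\<beta>\<in>(\<lambda>\<beta>. \<beta>(k:=0)) ` S0. a' \<beta> * (\<Prod>i<k. z i ^ \<beta> i)) = 0"
        using mono_sum_slice_eq_0[OF fS s] unfolding S0_def by simp
    qed
    have f1: "finite ((\<lambda>\<beta>. \<beta>(k:=0)) ` S0)" unfolding S0_def using fS by simp
    have f2: "\<forall>\<beta>\<in>(\<lambda>\<beta>. \<beta>(k:=0)) ` S0. \<forall>i\<ge>k. \<beta> i = 0" unfolding S0_def using zS by auto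
    have "\<forall>\<gamma>\<in>(\<lambda>\<beta>. \<beta>(k:=0)) ` S0. a' \<gamma> = 0" using Suc.IH f1 f2 f3 by blast
    moreover have "\<beta>0(k:=0) \<in> (\<lambda>\<beta>. \<beta>(k:=0)) ` S0" unfolding S0_def using b0 by auto
    ultimately have "a' (\<beta>0(k:=0)) = 0" by blast
    then show "a \<beta>0 = 0" unfolding a'_def by simp
  qed
qed

lemma mono_sum_eq_0_imp_coeffs_0:
  assumes "finite S" "\<forall>\<beta>\<in>S. \<forall>i>n. \<beta> i = 0" "\<forall>z. (\<Sum>\<beta>\<in>S. a \<beta> * mono_eval n \<beta> z) = 0"
  shows "\<forall>\<beta>\<in>S. a \<beta> = 0"
proof
  fix \<beta> assume "\<beta> \<in> S"
  moreover have "\<forall>\<beta>\<in>S. \<forall>i\<ge>Suc n. \<beta> i = 0" using assms(2) by auto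
  moreover have "\<forall>z::nat\<Rightarrow>complex. (\<Sum>\<beta>\<in>S. a \<beta> * (\<Prod>i<Suc n. z i ^ \<beta> i)) = 0"
    using assms(3) unfolding mono_eval_def by (simp add: lessThan_Suc_atMost)
  ultimately show "a \<beta> = 0" using mono_sum_eq_0_imp_coeffs_0_lessThan[of "Suc n"] assms(1) by blast
qed

lemma form_eval_cong: "(\<And>i. i \<le> n \<Longrightarrow> x i = x' i) \<Longrightarrow> form_eval n d c x = form_eval n d c x'"
  unfolding form_eval_def mono_eval_def by (intro sum.cong refl arg_cong2[where f = "(*)"] prod.cong) auto

lemma hs_nonzeroI: "form_eval n d c x \<noteq> 0 \<Longrightarrow> hs_nonzero n d c"
  unfolding hs_nonzero_def form_eval_def by (metis (no_types, lifting) mult_eq_0_iff sum.neutral)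

lemma hs_nonzeroD: "hs_nonzero n d c \<Longrightarrow> \<exists>x. form_eval n d c x \<noteq> 0"
proof (rule ccontr)
  assume h: "hs_nonzero n d c" and "\<not> (\<exists>x. form_eval n d c x \<noteq> 0)"
  then have "\<forall>z. (\<Sum>\<beta>\<in>hmonos n d. c \<beta> * mono_eval n \<beta> z) = 0" unfolding form_eval_def by simp
  from mono_sum_eq_0_imp_coeffs_0[OF finite_hmonos _ this] have "\<forall>\<beta>\<in>hmonos n d. c \<beta> = 0"
    unfolding hmonos_def by auto
  then show False using h unfolding hs_nonzero_def by blast
qed

definition exp_degree :: "nat \<Rightarrow> (nat \<Rightarrow> nat) \<Rightarrow> nat" where
  "exp_degree n \<beta> = (\<Sum>i\<le>n. \<beta> i)"

lemma mono_eval_scale: "mono_eval n \<beta> (\<lambda>i. t * y i) = t ^ exp_degree n \<beta> * mono_eval n \<beta> y"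
  unfolding mono_eval_def exp_degree_def by (simp add: power_mult_distrib prod.distrib power_sum)

lemma form_eval_homogeneous: "form_eval n d c (\<lambda>i. K * x i) = K ^ d * form_eval n d c x"
proof -
  have "\<And>\<alpha>. \<alpha> \<in> hmonos n d \<Longrightarrow> exp_degree n \<alpha> = d" unfolding hmonos_def exp_degree_def by auto
  then show ?thesis unfolding form_eval_def mono_eval_scale by (simp add: sum_distrib_left mult_ac)
qed

section \<open>Multiplicity along lines\<close>

definition vanishes_to_order :: "((nat \<Rightarrow> complex) \<Rightarrow> complex) \<Rightarrow> (nat \<Rightarrow> complex) \<Rightarrow> nat \<Rightarrow> bool" where
  "vanishes_to_order f x k \<longleftrightarrow> (\<forall>y. \<exists>Q. \<forall>t. f (\<lambda>i. x i + t * y i) = t ^ k * poly Q t)"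

definition line_poly :: "nat \<Rightarrow> nat \<Rightarrow> ((nat\<Rightarrow>nat)\<Rightarrow>complex) \<Rightarrow> (nat\<Rightarrow>complex) \<Rightarrow> (nat\<Rightarrow>complex) \<Rightarrow> complex poly" where
  "line_poly n d c x y = (\<Sum>\<beta>\<in>exp_box n d. monom (mono_eval n \<beta> y / fact_prod n \<beta> * dpeval n d c \<beta> x) (exp_degree n \<beta>))"

lemma poly_line_poly: "poly (line_poly n d c x y) t = form_eval n d c (\<lambda>i. x i + t * y i)"
  unfolding line_poly_def form_eval_taylor by (simp add: poly_sum poly_monom mono_eval_scale mult_ac)

lemma coeff_line_poly: "coeff (line_poly n d c x y) j =
   (\<Sum>\<beta>\<in>{\<beta>\<in>exp_box n d. exp_degree n \<beta> = j}. (dpeval n d c \<beta> x / fact_prod n \<beta>) * mono_eval n \<beta> y)"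
proof -
  have "coeff (line_poly n d c x y) j = (\<Sum>\<beta>\<in>exp_box n d. if exp_degree n \<beta> = j then mono_eval n \<beta> y * dpeval n d c \<beta> x / fact_prod n \<beta> else 0)"
    unfolding line_poly_def by (simp add: coeff_sum coeff_monom)
  also have "\<dots> = (\<Sum>\<beta>\<in>{\<beta>\<in>exp_box n d. exp_degree n \<beta> = j}. mono_eval n \<beta> y * dpeval n d c \<beta> x / fact_prod n \<beta>)"
    by (rule sum.inter_filter[symmetric, OF finite_exp_box])
  finally show ?thesis by (simp add: mult_ac)
qed

lemma dpeval_eq_0_if_exp_gt:
  assumes "i \<le> n" "\<beta> i > d"
  shows "dpeval n d c \<beta> x = 0"
  unfolding dpeval_def
proof (rule sum.neutral, intro ballI)
  fix \<alpha> assume "\<alpha> \<in> hmonos n d"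
  then have "\<alpha> \<in> exp_box n d" using hmonos_subset_exp_box by blast
  then have "\<alpha> i < \<beta> i" using assms unfolding exp_box_def by force
  then have "(\<Prod>i\<le>n. of_nat ((\<alpha> i choose \<beta> i) * fact (\<beta> i)) * x i ^ (\<alpha> i - \<beta> i)) = (0::complex)"
    using assms(1) by (intro prod_zero bexI[of _ i]) auto
  then show "c \<alpha> * (\<Prod>i\<le>n. of_nat ((\<alpha> i choose \<beta> i) * fact (\<beta> i)) * x i ^ (\<alpha> i - \<beta> i)) = 0"
    by simp
qed

lemma vanishes_to_order_if_mult_ge:
  assumes mg: "mult_ge n d c x k"
  shows "vanishes_to_order (form_eval n d c) x k"
  unfolding vanishes_to_order_def
proof
  fix y
  define Q where "Q = (\<Sum>\<beta>\<in>{\<beta>\<in>exp_box n d. k \<le> exp_degree n \<beta>}. monom (mono_eval n \<beta> y / fact_prod n \<beta> * dpeval n d c \<beta> x) (exp_degree n \<beta> - k))"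
  have "\<forall>t. form_eval n d c (\<lambda>i. x i + t * y i) = t ^ k * poly Q t"
  proof
    fix t
    have "form_eval n d c (\<lambda>i. x i + t * y i) = (\<Sum>\<beta>\<in>exp_box n d. mono_eval n \<beta> y / fact_prod n \<beta> * dpeval n d c \<beta> x * t ^ exp_degree n \<beta>)"
      unfolding form_eval_taylor by (simp add: mono_eval_scale mult_ac)
    also have "\<dots> = (\<Sum>\<beta>\<in>{\<beta>\<in>exp_box n d. k \<le> exp_degree n \<beta>}. mono_eval n \<beta> y / fact_prod n \<beta> * dpeval n d c \<beta> x * t ^ exp_degree n \<beta>)"
    proof (rule sum.mono_neutral_right)
      show "finite (exp_box n d)" by (rule finite_exp_box)
      show "{\<beta> \<in> exp_box n d. k \<le> exp_degree n \<beta>} \<subseteq> exp_box n d" by auto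
      show "\<forall>\<beta>\<in>exp_box n d - {\<beta> \<in> exp_box n d. k \<le> exp_degree n \<beta>}. mono_eval n \<beta> y / fact_prod n \<beta> * dpeval n d c \<beta> x * t ^ exp_degree n \<beta> = 0"
      proof
        fix \<beta> assume "\<beta> \<in> exp_box n d - {\<beta> \<in> exp_box n d. k \<le> exp_degree n \<beta>}"
        then have "\<beta> \<in> exp_box n d" "exp_degree n \<beta> < k" by auto
        then have "dpeval n d c \<beta> x = 0" using mg unfolding mult_ge_def exp_box_def exp_degree_def by auto
        then show "mono_eval n \<beta> y / fact_prod n \<beta> * dpeval n d c \<beta> x * t ^ exp_degree n \<beta> = 0" by simp
      qed
    qed
    also have "\<dots> = t ^ k * poly Q t"
      unfolding Q_def poly_sum poly_monom sum_distrib_left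
      by (rule sum.cong[OF refl]) (auto simp: power_add[symmetric])
    finally show "form_eval n d c (\<lambda>i. x i + t * y i) = t ^ k * poly Q t" .
  qed
  then show "\<exists>Q. \<forall>t. form_eval n d c (\<lambda>i. x i + t * y i) = t ^ k * poly Q t" by blast
qed

lemma mult_ge_if_vanishes_to_order:
  assumes mg: "vanishes_to_order (form_eval n d c) x k"
  shows "mult_ge n d c x k"
  unfolding mult_ge_def
proof (intro allI impI)
  fix \<beta> assume b0: "\<forall>i>n. \<beta> i = 0" and bk: "(\<Sum>i\<le>n. \<beta> i) < k"
  show "dpeval n d c \<beta> x = 0"
  proof (cases "\<beta> \<in> exp_box n d")
    case False
    then obtain i where "i \<le> n" "\<beta> i > d" using b0 unfolding exp_box_def by force
    then show ?thesis by (rule dpeval_eq_0_if_exp_gt)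
  next
    case True
    let ?j = "exp_degree n \<beta>"
    let ?S = "{\<gamma>\<in>exp_box n d. exp_degree n \<gamma> = ?j}"
    have zero: "\<forall>y. (\<Sum>\<gamma>\<in>?S. (dpeval n d c \<gamma> x / fact_prod n \<gamma>) * mono_eval n \<gamma> y) = 0"
    proof
      fix y
      obtain Q where Q: "\<forall>t. form_eval n d c (\<lambda>i. x i + t * y i) = t ^ k * poly Q t"
        using mg unfolding vanishes_to_order_def by blast
      have "poly (line_poly n d c x y) = poly (monom 1 k * Q)"
        using Q by (simp add: fun_eq_iff poly_line_poly poly_monom)
      then have e: "line_poly n d c x y = monom 1 k * Q" by (simp add: poly_eq_poly_eq_iff)
      have "coeff (line_poly n d c x y) ?j = 0"
        unfolding e coeff_monom_mult using bk unfolding exp_degree_def by simp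
      then show "(\<Sum>\<gamma>\<in>?S. (dpeval n d c \<gamma> x / fact_prod n \<gamma>) * mono_eval n \<gamma> y) = 0"
        by (simp add: coeff_line_poly)
    qed
    have fin: "finite ?S" using finite_exp_box by simp
    have supp: "\<forall>\<gamma>\<in>?S. \<forall>i>n. \<gamma> i = 0" by (simp add: exp_box_def)
    from mono_sum_eq_0_imp_coeffs_0[OF fin supp zero] have "\<forall>\<gamma>\<in>?S. dpeval n d c \<gamma> x / fact_prod n \<gamma> = 0" .
    then have "dpeval n d c \<beta> x / fact_prod n \<beta> = 0" using True by auto
    then show ?thesis using fact_prod_nonzero[of n \<beta>] by simp
  qed
qed

lemma mult_ge_iff_vanishes_to_order: "mult_ge n d c x k \<longleftrightarrow> vanishes_to_order (form_eval n d c) x k"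
  using vanishes_to_order_if_mult_ge mult_ge_if_vanishes_to_order by blast

lemma vanishes_to_order_mono: "vanishes_to_order f x k \<Longrightarrow> j \<le> k \<Longrightarrow> vanishes_to_order f x j"
  unfolding vanishes_to_order_def
proof (intro allI)
  fix y assume h: "\<forall>y. \<exists>Q. \<forall>t. f (\<lambda>i. x i + t * y i) = t ^ k * poly Q t" and jk: "j \<le> k"
  then obtain Q where Q: "\<forall>t. f (\<lambda>i. x i + t * y i) = t ^ k * poly Q t" by blast
  show "\<exists>Q. \<forall>t. f (\<lambda>i. x i + t * y i) = t ^ j * poly Q t"
    by (rule exI[of _ "monom 1 (k - j) * Q"])
      (use Q jk in \<open>simp add: poly_monom mult.assoc[symmetric] power_add[symmetric]\<close>)
qed

lemma not_vanishes_to_order_Suc: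
  fixes f :: "(nat \<Rightarrow> complex) \<Rightarrow> complex"
  assumes "poly R 0 \<noteq> 0" "\<forall>t. f (\<lambda>i. q i + t * y i) = t ^ k * poly R t"
  shows "\<not> vanishes_to_order f q (Suc k)"
proof
  assume "vanishes_to_order f q (Suc k)"
  then obtain Q where Q: "\<forall>t. f (\<lambda>i. q i + t * y i) = t ^ Suc k * poly Q t" unfolding vanishes_to_order_def by blast
  let ?P = "R - [:0,1:] * Q"
  have roots: "UNIV - {0} \<subseteq> {t. poly ?P t = 0}"
  proof
    fix t :: complex assume "t \<in> UNIV - {0}"
    then have t: "t \<noteq> 0" by simp
    have "t ^ k * poly R t = t ^ k * (t * poly Q t)" using Q assms(2) by (metis mult.assoc power_Suc2)
    then have "poly R t = t * poly Q t" using t by simp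
    then show "t \<in> {t. poly ?P t = 0}" by simp
  qed
  have "?P = 0"
  proof (rule ccontr)
    assume "?P \<noteq> 0"
    then have "finite {t. poly ?P t = 0}" by (rule poly_roots_finite)
    then have "finite (UNIV - {0::complex})" using roots finite_subset by blast
    then show False using infinite_UNIV_char_0[where 'a=complex] by simp
  qed
  then have "R = [:0,1:] * Q" by simp
  then have "poly R 0 = 0" by simp
  then show False using assms(1) by simp
qed

lemma dpeval_cong: "(\<And>i. i \<le> n \<Longrightarrow> x i = x' i) \<Longrightarrow> dpeval n d c \<beta> x = dpeval n d c \<beta> x'"
  unfolding dpeval_def by (intro sum.cong refl arg_cong2[where f="(*)"] prod.cong) auto

lemma mult_ge_cong: "(\<And>i. i \<le> n \<Longrightarrow> x i = x' i) \<Longrightarrow> mult_ge n d c x k \<longleftrightarrow> mult_ge n d c x' k"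
  unfolding mult_ge_def using dpeval_cong by metis

lemma mult_ge_0: "mult_ge n d c x 0"
  unfolding mult_ge_def by simp

lemma dpeval_eq_0_if_degree_gt:
  assumes "(\<Sum>i\<le>n. \<beta> i) > d"
  shows "dpeval n d c \<beta> x = 0"
  unfolding dpeval_def
proof (rule sum.neutral, intro ballI)
  fix \<alpha> assume a: "\<alpha> \<in> hmonos n d"
  have "\<exists>i\<le>n. \<alpha> i < \<beta> i"
  proof (rule ccontr)
    assume "\<not> (\<exists>i\<le>n. \<alpha> i < \<beta> i)"
    then have "(\<Sum>i\<le>n. \<beta> i) \<le> (\<Sum>i\<le>n. \<alpha> i)" by (intro sum_mono) (auto simp: not_less)
    then show False using a assms unfolding hmonos_def by simp
  qed
  then obtain i where "i \<le> n" "\<alpha> i < \<beta> i" by blast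
  then have "(\<Prod>i\<le>n. of_nat ((\<alpha> i choose \<beta> i) * fact (\<beta> i)) * x i ^ (\<alpha> i - \<beta> i)) = (0::complex)"
    by (intro prod_zero bexI[of _ i]) auto
  then show "c \<alpha> * (\<Prod>i\<le>n. of_nat ((\<alpha> i choose \<beta> i) * fact (\<beta> i)) * x i ^ (\<alpha> i - \<beta> i)) = 0" by simp
qed

lemma form_eval_eq_0_if_mult_gt_degree:
  assumes "mult_ge n d c x k" "k > d"
  shows "form_eval n d c z = 0"
proof -
  have "\<forall>\<beta>\<in>exp_box n d. dpeval n d c \<beta> x = 0"
  proof
    fix \<beta> assume b: "\<beta> \<in> exp_box n d"
    show "dpeval n d c \<beta> x = 0"
    proof (cases "(\<Sum>i\<le>n. \<beta> i) < k")
      case True then show ?thesis using assms(1) b unfolding mult_ge_def exp_box_def by auto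
    next
      case False then show ?thesis using assms(2) by (intro dpeval_eq_0_if_degree_gt) simp
    qed
  qed
  then have "form_eval n d c (\<lambda>i. x i + (z i - x i)) = 0" unfolding form_eval_taylor by simp
  then show ?thesis by simp
qed

section \<open>Products of linear forms and linear changes of coordinates\<close>

definition lin_form :: "nat \<Rightarrow> (nat \<Rightarrow> complex) \<Rightarrow> (nat \<Rightarrow> complex) \<Rightarrow> complex" where
  "lin_form n a x = (\<Sum>i\<le>n. a i * x i)"

definition is_form :: "nat \<Rightarrow> nat \<Rightarrow> ((nat \<Rightarrow> complex) \<Rightarrow> complex) \<Rightarrow> bool" where
  "is_form n d f \<longleftrightarrow> (\<exists>c. \<forall>x. f x = form_eval n d c x)"

lemma lin_form_line: "lin_form n a (\<lambda>i. x i + t * y i) = lin_form n a x + t * lin_form n a y"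
  unfolding lin_form_def by (simp add: sum.distrib sum_distrib_left distrib_left mult_ac)

lemma hmonos_0: "hmonos n 0 = {\<lambda>_. 0}"
  unfolding hmonos_def by (auto simp: fun_eq_iff) (metis atMost_iff not_le)

lemma is_form_const: "is_form n 0 (\<lambda>x. k)"
  unfolding is_form_def form_eval_def hmonos_0 by (rule exI[of _ "\<lambda>_. k"]) (simp add: mono_eval_def)

lemma is_form_add: "is_form n d f \<Longrightarrow> is_form n d g \<Longrightarrow> is_form n d (\<lambda>x. f x + g x)"
  unfolding is_form_def form_eval_def
proof -
  assume "\<exists>c. \<forall>x. f x = (\<Sum>\<alpha>\<in>hmonos n d. c \<alpha> * mono_eval n \<alpha> x)" "\<exists>c. \<forall>x. g x = (\<Sum>\<alpha>\<in>hmonos n d. c \<alpha> * mono_eval n \<alpha> x)"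
  then obtain c c' where "\<forall>x. f x = (\<Sum>\<alpha>\<in>hmonos n d. c \<alpha> * mono_eval n \<alpha> x)" "\<forall>x. g x = (\<Sum>\<alpha>\<in>hmonos n d. c' \<alpha> * mono_eval n \<alpha> x)"
    by blast
  then have "\<forall>x. f x + g x = (\<Sum>\<alpha>\<in>hmonos n d. (\<lambda>\<alpha>. c \<alpha> + c' \<alpha>) \<alpha> * mono_eval n \<alpha> x)"
    by (simp add: sum.distrib distrib_right)
  then show "\<exists>c. \<forall>x. f x + g x = (\<Sum>\<alpha>\<in>hmonos n d. c \<alpha> * mono_eval n \<alpha> x)"
    by (intro exI[of _ "\<lambda>\<alpha>. c \<alpha> + c' \<alpha>"]) simp
qed

lemma is_form_smult: "is_form n d f \<Longrightarrow> is_form n d (\<lambda>x. a * f x)"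
  unfolding is_form_def form_eval_def
proof -
  assume "\<exists>c. \<forall>x. f x = (\<Sum>\<alpha>\<in>hmonos n d. c \<alpha> * mono_eval n \<alpha> x)"
  then obtain c where "\<forall>x. f x = (\<Sum>\<alpha>\<in>hmonos n d. c \<alpha> * mono_eval n \<alpha> x)" by blast
  then have "\<forall>x. a * f x = (\<Sum>\<alpha>\<in>hmonos n d. (\<lambda>\<alpha>. a * c \<alpha>) \<alpha> * mono_eval n \<alpha> x)"
    by (simp add: sum_distrib_left mult_ac)
  then show "\<exists>c. \<forall>x. a * f x = (\<Sum>\<alpha>\<in>hmonos n d. c \<alpha> * mono_eval n \<alpha> x)"
    by (intro exI[of _ "\<lambda>\<alpha>. a * c \<alpha>"]) (simp add: mult_ac)
qed

lemma is_form_zero: "is_form n d (\<lambda>x. 0)"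
  unfolding is_form_def form_eval_def by (rule exI[of _ "\<lambda>_. 0"]) simp

lemma is_form_sum: "finite A \<Longrightarrow> (\<And>j. j \<in> A \<Longrightarrow> is_form n d (F j)) \<Longrightarrow> is_form n d (\<lambda>x. \<Sum>j\<in>A. F j x)"
proof (induction A rule: finite_induct)
  case empty then show ?case by (simp add: is_form_zero)
next
  case (insert a A)
  then show ?case by (simp add: is_form_add)
qed

lemma mono_eval_incr: "i \<le> n \<Longrightarrow> mono_eval n (\<beta>(i := Suc (\<beta> i))) x = x i * mono_eval n \<beta> x"
proof -
  assume i: "i \<le> n"
  have "mono_eval n (\<beta>(i := Suc (\<beta> i))) x = (\<Prod>j\<le>n. x j ^ \<beta> j * (if j = i then x i else 1))"
    unfolding mono_eval_def by (rule prod.cong) auto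
  also have "\<dots> = mono_eval n \<beta> x * (\<Prod>j\<le>n. if j = i then x i else 1)"
    unfolding mono_eval_def by (simp add: prod.distrib)
  also have "\<dots> = mono_eval n \<beta> x * x i" using i by (simp add: prod.delta)
  finally show ?thesis by simp
qed

lemma is_form_mult_var: assumes "is_form n d f" "i \<le> n" shows "is_form n (Suc d) (\<lambda>x. x i * f x)"
proof -
  obtain c where c: "\<forall>x. f x = form_eval n d c x" using assms(1) unfolding is_form_def by blast
  define c' where "c' = (\<lambda>\<alpha>. if 1 \<le> \<alpha> i then c (\<alpha>(i := \<alpha> i - 1)) else 0)"
  let ?h = "\<lambda>\<beta>::nat\<Rightarrow>nat. \<beta>(i := Suc (\<beta> i))"
  let ?T = "{\<alpha>\<in>hmonos n (Suc d). 1 \<le> \<alpha> i}"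
  have bij: "bij_betw ?h (hmonos n d) ?T"
  proof (rule bij_betw_byWitness[where f' = "\<lambda>\<alpha>. \<alpha>(i := \<alpha> i - 1)"])
    show "\<forall>a\<in>hmonos n d. (?h a)(i := ?h a i - 1) = a" by (simp add: fun_eq_iff)
    show "\<forall>a'\<in>?T. ?h (a'(i := a' i - 1)) = a'" by (auto simp: fun_eq_iff)
    show "?h ` hmonos n d \<subseteq> ?T"
    proof
      fix \<alpha> assume "\<alpha> \<in> ?h ` hmonos n d"
      then obtain \<beta> where b: "\<beta> \<in> hmonos n d" and a: "\<alpha> = ?h \<beta>" by blast
      have "(\<Sum>j\<le>n. \<alpha> j) = (\<Sum>j\<le>n. \<beta> j + (if j = i then 1 else 0))"
        unfolding a by (rule sum.cong) auto
      also have "\<dots> = Suc d" using b assms(2) unfolding hmonos_def by (simp add: sum.distrib)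
      finally show "\<alpha> \<in> ?T" using b assms(2) unfolding a hmonos_def by auto
    qed
    show "(\<lambda>\<alpha>. \<alpha>(i := \<alpha> i - 1)) ` ?T \<subseteq> hmonos n d"
    proof
      fix \<beta> assume "\<beta> \<in> (\<lambda>\<alpha>. \<alpha>(i := \<alpha> i - 1)) ` ?T"
      then obtain \<alpha> where a: "\<alpha> \<in> ?T" and b: "\<beta> = \<alpha>(i := \<alpha> i - 1)" by blast
      have "(\<Sum>j\<le>n. \<alpha> j) = (\<Sum>j\<le>n. \<beta> j + (if j = i then 1 else 0))"
        unfolding b by (rule sum.cong) (use a in auto)
      then have "Suc d = (\<Sum>j\<le>n. \<beta> j) + 1" using a assms(2) unfolding hmonos_def by (simp add: sum.distrib)
      then show "\<beta> \<in> hmonos n d" using a assms(2) unfolding b hmonos_def by auto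
    qed
  qed
  have "\<forall>x. x i * f x = form_eval n (Suc d) c' x"
  proof
    fix x
    have "form_eval n (Suc d) c' x = (\<Sum>\<alpha>\<in>?T. c' \<alpha> * mono_eval n \<alpha> x)"
      unfolding form_eval_def by (rule sum.mono_neutral_right) (auto simp: finite_hmonos c'_def)
    also have "\<dots> = (\<Sum>\<beta>\<in>hmonos n d. c' (?h \<beta>) * mono_eval n (?h \<beta>) x)"
      using sum.reindex_bij_betw[OF bij, of "\<lambda>\<alpha>. c' \<alpha> * mono_eval n \<alpha> x"] by simp
    also have "\<dots> = (\<Sum>\<beta>\<in>hmonos n d. x i * (c \<beta> * mono_eval n \<beta> x))"
      by (rule sum.cong[OF refl]) (simp add: c'_def mono_eval_incr[OF assms(2)] fun_upd_idem)
    also have "\<dots> = x i * f x" using c by (simp add: form_eval_def sum_distrib_left)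
    finally show "x i * f x = form_eval n (Suc d) c' x" by simp
  qed
  then show ?thesis unfolding is_form_def by blast
qed

lemma is_form_mult_lin_form: assumes "is_form n d f" shows "is_form n (Suc d) (\<lambda>x. lin_form n a x * f x)"
proof -
  have "is_form n (Suc d) (\<lambda>x. \<Sum>i\<le>n. a i * (x i * f x))"
    by (rule is_form_sum) (auto intro!: is_form_smult is_form_mult_var assms)
  moreover have "(\<lambda>x. \<Sum>i\<le>n. a i * (x i * f x)) = (\<lambda>x. lin_form n a x * f x)"
    unfolding lin_form_def by (simp add: fun_eq_iff sum_distrib_left sum_distrib_right mult_ac)
  ultimately show ?thesis by simp
qed

lemma is_form_mult_power: "is_form n d f \<Longrightarrow> is_form n (k + d) (\<lambda>x. lin_form n a x ^ k * f x)"
proof (induction k)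
  case 0 then show ?case by simp
next
  case (Suc k)
  from is_form_mult_lin_form[OF Suc.IH[OF Suc.prems], of a] show ?case by (simp add: mult_ac)
qed

lemma is_form_prod_powers: fixes N :: nat shows "is_form n (\<Sum>i<N. e i) (\<lambda>x. \<Prod>i<N. lin_form n (L i) x ^ e i)"
proof (induction N)
  case 0 then show ?case using is_form_const[of n 1] by simp
next
  case (Suc N)
  from is_form_mult_power[OF Suc.IH, of "e N" "L N"] show ?case by (simp add: add.commute mult.commute)
qed

definition lin_map :: "nat \<Rightarrow> (nat \<Rightarrow> nat \<Rightarrow> complex) \<Rightarrow> (nat \<Rightarrow> complex) \<Rightarrow> (nat \<Rightarrow> complex)" where
  "lin_map n A x = (\<lambda>i. lin_form n (A i) x)"

lemma is_form_comp_lin_map: "is_form n d (\<lambda>x. form_eval n d c (lin_map n A x))"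
proof -
  have "is_form n d (\<lambda>x. \<Sum>\<alpha>\<in>hmonos n d. c \<alpha> * (\<Prod>i<Suc n. lin_form n (A i) x ^ \<alpha> i))"
  proof (rule is_form_sum[OF finite_hmonos])
    fix \<alpha> assume a: "\<alpha> \<in> hmonos n d"
    have "(\<Sum>i<Suc n. \<alpha> i) = d" using a unfolding hmonos_def by (simp add: lessThan_Suc_atMost)
    then show "is_form n d (\<lambda>x. c \<alpha> * (\<Prod>i<Suc n. lin_form n (A i) x ^ \<alpha> i))"
      using is_form_smult[OF is_form_prod_powers[where n=n and N="Suc n" and e=\<alpha> and L=A]] by simp
  qed
  then show ?thesis unfolding form_eval_def lin_map_def mono_eval_def by (simp add: lessThan_Suc_atMost)
qed

definition prod_lin_forms :: "nat \<Rightarrow> (nat \<Rightarrow> complex) list \<Rightarrow> (nat \<Rightarrow> complex) \<Rightarrow> complex" where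
  "prod_lin_forms n ls x = prod_list (map (\<lambda>a. lin_form n a x) ls)"

lemma is_form_prod_lin_forms: "is_form n (length ls) (prod_lin_forms n ls)"
proof (induction ls)
  case Nil then show ?case using is_form_const[of n 1] by (simp add: prod_lin_forms_def)
next
  case (Cons a ls)
  from is_form_mult_lin_form[OF Cons.IH, of a] show ?case by (simp add: prod_lin_forms_def)
qed

lemma vanishes_to_order_prod_lin_forms: "vanishes_to_order (prod_lin_forms n ls) x (length (filter (\<lambda>a. lin_form n a x = 0) ls))"
  unfolding vanishes_to_order_def
proof
  fix y
  show "\<exists>Q. \<forall>t. prod_lin_forms n ls (\<lambda>i. x i + t * y i) = t ^ length (filter (\<lambda>a. lin_form n a x = 0) ls) * poly Q t"
  proof (induction ls)
    case Nil then show ?case by (rule exI[of _ 1]) (simp add: prod_lin_forms_def)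
  next
    case (Cons a ls)
    then obtain Q where Q: "\<forall>t. prod_lin_forms n ls (\<lambda>i. x i + t * y i) = t ^ length (filter (\<lambda>a. lin_form n a x = 0) ls) * poly Q t"
      by blast
    show ?case
    proof (cases "lin_form n a x = 0")
      case True
      show ?thesis
        by (rule exI[of _ "smult (lin_form n a y) Q"]) (use Q True in \<open>simp add: prod_lin_forms_def lin_form_line mult_ac\<close>)
    next
      case False
      show ?thesis
        by (rule exI[of _ "[:lin_form n a x, lin_form n a y:] * Q"]) (use Q False in \<open>simp add: prod_lin_forms_def lin_form_line algebra_simps\<close>)
    qed
  qed
qed

lemma prod_lin_forms_line_exact_order:
  assumes "\<forall>a\<in>set ls. lin_form n a q \<noteq> 0 \<or> lin_form n a y \<noteq> 0"
  shows "\<exists>R. poly R 0 \<noteq> 0 \<and> (\<forall>t. prod_lin_forms n ls (\<lambda>i. q i + t * y i) = t ^ length (filter (\<lambda>a. lin_form n a q = 0) ls) * poly R t)"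
  using assms
proof (induction ls)
  case Nil then show ?case by (intro exI[of _ 1]) (simp add: prod_lin_forms_def)
next
  case (Cons a ls)
  then obtain R where R: "poly R 0 \<noteq> 0" "\<forall>t. prod_lin_forms n ls (\<lambda>i. q i + t * y i) = t ^ length (filter (\<lambda>a. lin_form n a q = 0) ls) * poly R t"
    by auto
  show ?case
  proof (cases "lin_form n a q = 0")
    case True
    then have "lin_form n a y \<noteq> 0" using Cons.prems by auto
    then show ?thesis
      by (intro exI[of _ "smult (lin_form n a y) R"]) (use R True in \<open>simp add: prod_lin_forms_def lin_form_line mult_ac\<close>)
  next
    case False
    show ?thesis
      by (intro exI[of _ "[:lin_form n a q, lin_form n a y:] * R"]) (use R False in \<open>simp add: prod_lin_forms_def lin_form_line algebra_simps\<close>)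
  qed
qed

lemma lin_map_line: "lin_map n A (\<lambda>i. x i + t * y i) = (\<lambda>i. lin_map n A x i + t * lin_map n A y i)"
  unfolding lin_map_def by (simp add: lin_form_line)

lemma vanishes_to_order_comp: "vanishes_to_order f (lin_map n A x) k \<Longrightarrow> vanishes_to_order (\<lambda>x. f (lin_map n A x)) x k"
  unfolding vanishes_to_order_def lin_map_line by blast

lemma vanishes_to_order_comp_surj:
  assumes surj: "\<forall>y. \<exists>y'. \<forall>i\<le>n. lin_map n A y' i = y i"
    and h: "vanishes_to_order (\<lambda>x. form_eval n d c (lin_map n A x)) x k"
  shows "vanishes_to_order (form_eval n d c) (lin_map n A x) k"
  unfolding vanishes_to_order_def
proof
  fix y
  obtain y' where y': "\<forall>i\<le>n. lin_map n A y' i = y i" using surj by blast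
  obtain Q where Q: "\<forall>t. form_eval n d c (lin_map n A (\<lambda>i. x i + t * y' i)) = t ^ k * poly Q t"
    using h unfolding vanishes_to_order_def by blast
  have "\<forall>t. form_eval n d c (\<lambda>i. lin_map n A x i + t * y i) = t ^ k * poly Q t"
  proof
    fix t
    have "form_eval n d c (\<lambda>i. lin_map n A x i + t * y i) = form_eval n d c (lin_map n A (\<lambda>i. x i + t * y' i))"
      unfolding lin_map_line by (rule form_eval_cong) (simp add: y')
    then show "form_eval n d c (\<lambda>i. lin_map n A x i + t * y i) = t ^ k * poly Q t" using Q by simp
  qed
  then show "\<exists>Q. \<forall>t. form_eval n d c (\<lambda>i. lin_map n A x i + t * y i) = t ^ k * poly Q t" by blast
qed

definition mat_mult_id :: "nat \<Rightarrow> (nat \<Rightarrow> nat \<Rightarrow> complex) \<Rightarrow> (nat \<Rightarrow> nat \<Rightarrow> complex) \<Rightarrow> bool" where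
  "mat_mult_id n A B \<longleftrightarrow> (\<forall>i\<le>n. \<forall>j\<le>n. (\<Sum>l\<le>n. A i l * B l j) = (if i = j then 1 else 0))"

lemma lin_map_inverse:
  assumes AB: "mat_mult_id n A B"
  shows "\<forall>i\<le>n. lin_map n A (lin_map n B y) i = y i"
proof (intro allI impI)
  fix i assume i: "i \<le> n"
  have "lin_map n A (lin_map n B y) i = (\<Sum>l\<le>n. A i l * (\<Sum>j\<le>n. B l j * y j))"
    unfolding lin_map_def lin_form_def by simp
  also have "\<dots> = (\<Sum>l\<le>n. \<Sum>j\<le>n. A i l * B l j * y j)"
    by (simp add: sum_distrib_left mult.assoc)
  also have "\<dots> = (\<Sum>j\<le>n. \<Sum>l\<le>n. A i l * B l j * y j)"
    by (rule sum.swap)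
  also have "\<dots> = (\<Sum>j\<le>n. (\<Sum>l\<le>n. A i l * B l j) * y j)"
    by (simp add: sum_distrib_right)
  also have "\<dots> = (\<Sum>j\<le>n. (if i = j then y j else 0))"
    using AB i unfolding mat_mult_id_def by (intro sum.cong) auto
  also have "\<dots> = y i" using i by simp
  finally show "lin_map n A (lin_map n B y) i = y i" .
qed

lemma mult_ge_comp_lin_map:
  assumes c': "\<forall>x. form_eval n d c' x = form_eval n d c (lin_map n A x)"
  shows "mult_ge n d c (lin_map n A x) k \<Longrightarrow> mult_ge n d c' x k"
proof -
  assume "mult_ge n d c (lin_map n A x) k"
  then have "vanishes_to_order (\<lambda>x. form_eval n d c (lin_map n A x)) x k" using mult_ge_iff_vanishes_to_order vanishes_to_order_comp by blast
  moreover have "(\<lambda>x. form_eval n d c (lin_map n A x)) = form_eval n d c'" using c' by auto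
  ultimately show ?thesis using mult_ge_iff_vanishes_to_order by simp
qed

lemma mult_ge_comp_lin_map_rev:
  assumes c': "\<forall>x. form_eval n d c' x = form_eval n d c (lin_map n A x)"
    and surj: "\<forall>y. \<exists>y'. \<forall>i\<le>n. lin_map n A y' i = y i"
  shows "mult_ge n d c' x k \<Longrightarrow> mult_ge n d c (lin_map n A x) k"
proof -
  assume "mult_ge n d c' x k"
  then have "vanishes_to_order (form_eval n d c') x k" using mult_ge_iff_vanishes_to_order by blast
  moreover have "(\<lambda>x. form_eval n d c (lin_map n A x)) = form_eval n d c'" using c' by auto
  ultimately have "vanishes_to_order (\<lambda>x. form_eval n d c (lin_map n A x)) x k" by simp
  then show ?thesis using vanishes_to_order_comp_surj[OF surj] mult_ge_iff_vanishes_to_order by blast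
qed

lemma mult_ge_pullback_iff:
  assumes "mat_mult_id n A B" "\<forall>x. form_eval n d c' x = form_eval n d c (lin_map n A x)"
  shows "mult_ge n d c (lin_map n A x) k \<longleftrightarrow> mult_ge n d c' x k"
  using mult_ge_comp_lin_map[OF assms(2)] mult_ge_comp_lin_map_rev[OF assms(2)] lin_map_inverse[OF assms(1)]
  by blast

lemma exists_pullback: "\<exists>c'. \<forall>x. form_eval n d c' x = form_eval n d c (lin_map n A x)"
  using is_form_comp_lin_map[of n d c A] unfolding is_form_def by metis

definition unit_vec :: "nat \<Rightarrow> nat \<Rightarrow> complex" where
  "unit_vec l = (\<lambda>i. if i = l then 1 else 0)"

lemma lin_form_unit_vec: "l \<le> n \<Longrightarrow> lin_form n (unit_vec l) x = x l"
proof -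
  assume l: "l \<le> n"
  have "lin_form n (unit_vec l) x = (\<Sum>i\<le>n. if i = l then x l else 0)"
    unfolding lin_form_def unit_vec_def by (intro sum.cong) auto
  then show ?thesis using l by simp
qed

lemma lin_map_unit_vec: "l \<le> n \<Longrightarrow> lin_map n A (unit_vec l) j = A j l"
  unfolding lin_map_def by (simp add: lin_form_def unit_vec_def if_distrib cong: if_cong)

section \<open>Forms with prescribed multiplicities at the coordinate points\<close>

lemma hmonos_eq_if_eq_off:
  assumes "\<alpha> \<in> hmonos n d" "\<alpha>' \<in> hmonos n d" "l \<le> n" "\<forall>i\<le>n. i \<noteq> l \<longrightarrow> \<alpha>' i = \<alpha> i"
  shows "\<alpha>' = \<alpha>"
proof -
  have s: "(\<Sum>i\<le>n. \<alpha> i) = d" "(\<Sum>i\<le>n. \<alpha>' i) = d" using assms unfolding hmonos_def by auto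
  have "(\<Sum>i\<le>n. \<alpha> i) = \<alpha> l + (\<Sum>i\<in>{..n}-{l}. \<alpha> i)" using sum.remove[of "{..n}" l] assms(3) by simp
  moreover have "(\<Sum>i\<le>n. \<alpha>' i) = \<alpha>' l + (\<Sum>i\<in>{..n}-{l}. \<alpha>' i)" using sum.remove[of "{..n}" l] assms(3) by simp
  moreover have "(\<Sum>i\<in>{..n}-{l}. \<alpha>' i) = (\<Sum>i\<in>{..n}-{l}. \<alpha> i)" using assms(4) by (intro sum.cong) auto
  ultimately have "\<alpha>' l = \<alpha> l" using s by simp
  then show ?thesis using assms unfolding hmonos_def by (auto simp: fun_eq_iff) (metis not_le)
qed

text \<open>At \<open>e\<^sub>l\<close>, the derivative \<open>\<partial>\<^sup>\<beta>\<close> with \<open>\<beta>\<close> obtained from \<open>\<alpha>\<close> by dropping the exponent of \<open>x\<^sub>l\<close>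
  only sees the monomial \<open>x\<^sup>\<alpha>\<close>.\<close>

lemma dpeval_unit_vec_nonzero:
  assumes a: "\<alpha> \<in> hmonos n d" and l: "l \<le> n" and c: "c \<alpha> \<noteq> 0"
  shows "dpeval n d c (\<alpha>(l := 0)) (unit_vec l) \<noteq> 0"
proof -
  define \<beta> where "\<beta> = \<alpha>(l := 0)"
  let ?T = "\<lambda>\<alpha>'. c \<alpha>' * (\<Prod>i\<le>n. of_nat ((\<alpha>' i choose \<beta> i) * fact (\<beta> i)) * unit_vec l i ^ (\<alpha>' i - \<beta> i))"
  have e1: "dpeval n d c \<beta> (unit_vec l) = ?T \<alpha> + (\<Sum>\<alpha>'\<in>hmonos n d - {\<alpha>}. ?T \<alpha>')"
    unfolding dpeval_def using sum.remove[OF finite_hmonos a, of ?T] by simp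
  have "(\<Sum>\<alpha>'\<in>hmonos n d - {\<alpha>}. ?T \<alpha>') = 0"
  proof (rule sum.neutral, intro ballI)
    fix \<alpha>' assume a': "\<alpha>' \<in> hmonos n d - {\<alpha>}"
    then have "\<exists>i\<le>n. i \<noteq> l \<and> \<alpha>' i \<noteq> \<alpha> i" using hmonos_eq_if_eq_off[OF a _ l] by blast
    then obtain i where i: "i \<le> n" "i \<noteq> l" "\<alpha>' i \<noteq> \<alpha> i" by blast
    have "of_nat ((\<alpha>' i choose \<beta> i) * fact (\<beta> i)) * unit_vec l i ^ (\<alpha>' i - \<beta> i) = (0::complex)"
    proof (cases "\<alpha>' i < \<beta> i")
      case False
      then have "\<alpha>' i - \<beta> i > 0" using i unfolding \<beta>_def by auto
      then show ?thesis using i unfolding unit_vec_def by simp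
    qed simp
    then show "?T \<alpha>' = 0"
      using i by (metis (no_types, lifting) atMost_iff finite_atMost mult_zero_right prod_zero)
  qed
  moreover have "of_nat ((\<alpha> i choose \<beta> i) * fact (\<beta> i)) * unit_vec l i ^ (\<alpha> i - \<beta> i) \<noteq> (0::complex)" for i
    by (cases "i = l") (auto simp: \<beta>_def unit_vec_def)
  ultimately show ?thesis using e1 c unfolding \<beta>_def[symmetric] by (simp add: prod_zero_iff)
qed

lemma exp_cap_if_mult_ge_unit_vec:
  assumes mg: "mult_ge n d c (unit_vec l) m" and l: "l \<le> n" and a: "\<alpha> \<in> hmonos n d" and c: "c \<alpha> \<noteq> 0"
  shows "\<alpha> l + m \<le> d"
proof (rule ccontr)
  assume h: "\<not> \<alpha> l + m \<le> d"
  have "(\<Sum>i\<le>n. \<alpha> i) = \<alpha> l + (\<Sum>i\<in>{..n}-{l}. \<alpha> i)" using sum.remove[of "{..n}" l] l by simp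
  moreover have "(\<Sum>i\<le>n. (\<alpha>(l := 0)) i) = (\<Sum>i\<in>{..n}-{l}. (\<alpha>(l := 0)) i)"
    using sum.remove[of "{..n}" l "\<alpha>(l := 0)"] l by simp
  moreover have "(\<Sum>i\<in>{..n}-{l}. (\<alpha>(l := 0)) i) = (\<Sum>i\<in>{..n}-{l}. \<alpha> i)" by (intro sum.cong) auto
  ultimately have "(\<Sum>i\<le>n. (\<alpha>(l := 0)) i) < m" using a h unfolding hmonos_def by auto
  moreover have "\<forall>i>n. (\<alpha>(l := 0)) i = 0" using a l unfolding hmonos_def by auto
  ultimately have "dpeval n d c (\<alpha>(l := 0)) (unit_vec l) = 0" using mg unfolding mult_ge_def by blast
  then show False using dpeval_unit_vec_nonzero[of \<alpha> n d l c] a l c by blast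
qed

lemma mult_ge_on_coord_subspace:
  assumes caps: "\<forall>l\<in>I. \<forall>\<alpha>\<in>hmonos n d. c \<alpha> \<noteq> 0 \<longrightarrow> \<alpha> l + mm l \<le> d"
    and I: "I \<subseteq> {..n}" and q: "\<forall>i\<le>n. i \<notin> I \<longrightarrow> q i = 0"
    and k: "k \<le> d - (\<Sum>l\<in>I. d - mm l)"
  shows "mult_ge n d c q k"
  unfolding mult_ge_def
proof (intro allI impI)
  fix \<beta> assume b0: "\<forall>i>n. \<beta> i = 0" and bk: "(\<Sum>i\<le>n. \<beta> i) < k"
  have fI: "finite I" using I finite_subset by blast
  show "dpeval n d c \<beta> q = 0"
    unfolding dpeval_def
  proof (rule sum.neutral, intro ballI)
    fix \<alpha> assume a: "\<alpha> \<in> hmonos n d"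
    show "c \<alpha> * (\<Prod>i\<le>n. of_nat ((\<alpha> i choose \<beta> i) * fact (\<beta> i)) * q i ^ (\<alpha> i - \<beta> i)) = 0"
    proof (rule ccontr)
      assume nz: "c \<alpha> * (\<Prod>i\<le>n. of_nat ((\<alpha> i choose \<beta> i) * fact (\<beta> i)) * q i ^ (\<alpha> i - \<beta> i)) \<noteq> 0"
      then have ca: "c \<alpha> \<noteq> 0" by auto
      have fac: "\<forall>i\<le>n. of_nat ((\<alpha> i choose \<beta> i) * fact (\<beta> i)) * q i ^ (\<alpha> i - \<beta> i) \<noteq> (0::complex)"
        using nz by (auto simp: prod_zero_iff)
      have eqJ: "\<forall>i\<le>n. i \<notin> I \<longrightarrow> \<alpha> i = \<beta> i"
      proof (intro allI impI)
        fix i assume i: "i \<le> n" "i \<notin> I"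
        have f: "of_nat ((\<alpha> i choose \<beta> i) * fact (\<beta> i)) * q i ^ (\<alpha> i - \<beta> i) \<noteq> (0::complex)"
          using fac i by auto
        then have "\<beta> i \<le> \<alpha> i" by (auto simp: binomial_eq_0_iff)
        moreover have "\<alpha> i - \<beta> i = 0" using f q i by (cases "\<alpha> i - \<beta> i") auto
        ultimately show "\<alpha> i = \<beta> i" by simp
      qed
      have s1: "(\<Sum>i\<in>{..n}-I. \<alpha> i) \<le> (\<Sum>i\<le>n. \<beta> i)"
      proof -
        have "(\<Sum>i\<in>{..n}-I. \<alpha> i) = (\<Sum>i\<in>{..n}-I. \<beta> i)" using eqJ by (intro sum.cong) auto
        also have "\<dots> \<le> (\<Sum>i\<le>n. \<beta> i)" by (intro sum_mono2) auto
        finally show ?thesis .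
      qed
      have s2: "(\<Sum>i\<in>I. \<alpha> i) \<le> (\<Sum>l\<in>I. d - mm l)"
        using caps a ca by (intro sum_mono) force
      have "d = (\<Sum>i\<in>I. \<alpha> i) + (\<Sum>i\<in>{..n}-I. \<alpha> i)"
        using a sum.subset_diff[OF I, of \<alpha>] unfolding hmonos_def by (simp add: add.commute)
      then show False using s1 s2 bk k by linarith
    qed
  qed
qed

lemma mult_ge_on_coord_span:
  assumes "\<forall>l\<le>n. mult_ge n d c (unit_vec l) (mm l)" "I \<subseteq> {..n}" "\<forall>i\<le>n. i \<notin> I \<longrightarrow> q i = 0"
  shows "mult_ge n d c q (d - (\<Sum>l\<in>I. d - mm l))"
proof (rule mult_ge_on_coord_subspace[OF _ assms(2,3) order_refl])
  show "\<forall>l\<in>I. \<forall>\<alpha>\<in>hmonos n d. c \<alpha> \<noteq> 0 \<longrightarrow> \<alpha> l + mm l \<le> d"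
    using assms(1,2) exp_cap_if_mult_ge_unit_vec by blast
qed

section \<open>Restriction to a rational normal curve\<close>

lemma poly_eq_if_eq_off_0:
  fixes p q :: "complex poly"
  assumes "\<forall>t. t \<noteq> 0 \<longrightarrow> poly p t = poly q t"
  shows "p = q"
proof (rule ccontr)
  assume "p \<noteq> q"
  then have "p - q \<noteq> 0" by simp
  then have "finite {t. poly (p - q) t = 0}" by (rule poly_roots_finite)
  moreover have "UNIV - {0} \<subseteq> {t. poly (p - q) t = 0}" using assms by auto
  ultimately have "finite (UNIV - {0::complex})" using finite_subset by blast
  then show False using infinite_UNIV_char_0[where 'a=complex] by simp
qed

definition form_on_curve :: "nat \<Rightarrow> nat \<Rightarrow> ((nat\<Rightarrow>nat)\<Rightarrow>complex) \<Rightarrow> (nat \<Rightarrow> complex poly) \<Rightarrow> complex poly" where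
  "form_on_curve n d c \<phi> = (\<Sum>\<alpha>\<in>hmonos n d. smult (c \<alpha>) (\<Prod>l\<le>n. \<phi> l ^ \<alpha> l))"

lemma poly_form_on_curve: "poly (form_on_curve n d c \<phi>) t = form_eval n d c (\<lambda>l. poly (\<phi> l) t)"
  unfolding form_on_curve_def form_eval_def mono_eval_def by (simp add: poly_sum poly_prod)

lemma degree_form_on_curve:
  assumes "\<forall>l\<le>n. degree (\<phi> l) \<le> e"
  shows "degree (form_on_curve n d c \<phi>) \<le> e * d"
  unfolding form_on_curve_def
proof (rule degree_sum_le[OF finite_hmonos])
  fix \<alpha> assume a: "\<alpha> \<in> hmonos n d"
  have "degree (\<Prod>l\<le>n. \<phi> l ^ \<alpha> l) \<le> (\<Sum>l\<le>n. degree (\<phi> l ^ \<alpha> l))"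
    using degree_prod_sum_le[of "{..n}" "\<lambda>l. \<phi> l ^ \<alpha> l"] by (simp add: comp_def)
  also have "\<dots> \<le> (\<Sum>l\<le>n. \<alpha> l * e)"
  proof (rule sum_mono)
    fix l assume "l \<in> {..n}"
    then have "degree (\<phi> l ^ \<alpha> l) \<le> \<alpha> l * degree (\<phi> l)" by (metis degree_power_le mult.commute)
    also have "\<dots> \<le> \<alpha> l * e" using assms \<open>l \<in> {..n}\<close> by simp
    finally show "degree (\<phi> l ^ \<alpha> l) \<le> \<alpha> l * e" .
  qed
  also have "\<dots> = e * (\<Sum>l\<le>n. \<alpha> l)" by (simp add: sum_distrib_left mult.commute)
  also have "\<dots> = e * d" using a unfolding hmonos_def by simp
  finally show "degree (smult (c \<alpha>) (\<Prod>l\<le>n. \<phi> l ^ \<alpha> l)) \<le> e * d"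
    using degree_smult_le order_trans by blast
qed

lemma prod_linear_powers_dvd:
  fixes hp :: "complex poly"
  assumes "finite S" "hp \<noteq> 0" "inj_on a S" "\<forall>i\<in>S. [:-a i, 1:] ^ e i dvd hp"
  shows "(\<Prod>i\<in>S. [:-a i, 1:] ^ e i) dvd hp"
  using assms
proof (induction S rule: finite_induct)
  case empty then show ?case by simp
next
  case (insert k S)
  then obtain q where q: "hp = (\<Prod>i\<in>S. [:-a i, 1:] ^ e i) * q" by (auto elim!: dvdE)
  let ?P = "\<Prod>i\<in>S. [:-a i, 1:] ^ e i"
  have nz: "?P * q \<noteq> 0" using q insert.prems by simp
  have "poly ?P (a k) \<noteq> 0"
  proof -
    have "\<forall>i\<in>S. a k - a i \<noteq> 0" using insert.prems insert.hyps by (auto simp: inj_on_def)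
    then show ?thesis by (simp add: poly_prod prod_zero_iff insert.hyps)
  qed
  then have o0: "order (a k) ?P = 0" by (simp add: order_root)
  have "e k \<le> order (a k) hp" using insert.prems order_divides by auto
  then have "e k \<le> order (a k) q" using order_mult[OF nz, of "a k"] o0 q by simp
  then have "[:-a k, 1:] ^ e k dvd q" using order_divides by blast
  then have "[:-a k, 1:] ^ e k * ?P dvd ?P * q" by (simp add: mult.commute mult_dvd_mono)
  then show ?case using q insert.hyps by simp
qed

text \<open>\<open>z\<close> is taken on the line \<open>z0 + s v\<close>: each required property is the nonvanishing at \<open>s\<close> of a
  nonzero polynomial, and only finitely many \<open>s\<close> are excluded.\<close>

lemma exists_separating_point:
  assumes nz: "form_eval n d c z0 \<noteq> 0" and w: "\<forall>l\<le>n. w l \<noteq> 0"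
  shows "\<exists>z. form_eval n d c z \<noteq> 0 \<and> (\<forall>l\<le>n. z l \<noteq> 0) \<and> (\<forall>l\<le>n. \<forall>j\<le>n. l \<noteq> j \<longrightarrow> w l * z j \<noteq> w j * z l)"
proof -
  define v where "v = (\<lambda>l. of_nat (Suc l) * w l)"
  define E where "E = line_poly n d c z0 v"
  have E0: "poly E 0 \<noteq> 0" unfolding E_def poly_line_poly using nz by simp
  then have Enz: "E \<noteq> 0" by auto
  define CP where "CP = (\<Prod>l\<le>n. [:z0 l, v l:])"
  have CPnz: "CP \<noteq> 0" unfolding CP_def using w by (auto simp: v_def simp del: of_nat_Suc)
  define PS where "PS = {(l,j). l \<le> n \<and> j \<le> n \<and> l \<noteq> j}"
  have fPS: "finite PS" unfolding PS_def by (rule finite_subset[of _ "{..n} \<times> {..n}"]) auto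
  define pf where "pf = (\<lambda>(l,j). [:w l * z0 j - w j * z0 l, w l * v j - w j * v l:])"
  define PP where "PP = (\<Prod>x\<in>PS. pf x)"
  have PPnz: "PP \<noteq> 0" unfolding PP_def
  proof (rule ccontr)
    assume "\<not> (\<Prod>x\<in>PS. pf x) \<noteq> 0"
    then obtain x where x: "x \<in> PS" "pf x = 0" using fPS by (auto simp: prod_zero_iff)
    obtain l j where lj: "x = (l,j)" by (cases x)
    have "w l * v j - w j * v l = w l * w j * (of_nat (Suc j) - of_nat (Suc l))"
      unfolding v_def by (simp add: algebra_simps)
    moreover have "(of_nat (Suc j) - of_nat (Suc l) :: complex) \<noteq> 0" using x lj unfolding PS_def by auto
    ultimately have "w l * v j - w j * v l \<noteq> 0" using x lj w unfolding PS_def by auto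
    then show False using x lj unfolding pf_def by auto
  qed
  define P where "P = E * CP * PP"
  have "P \<noteq> 0" unfolding P_def using Enz CPnz PPnz by simp
  then have "finite {s. poly P s = 0}" by (rule poly_roots_finite)
  then obtain s0 where s0: "s0 \<notin> {s. poly P s = 0}" using ex_new_if_finite[OF infinite_UNIV_char_0[where 'a=complex]] by blast
  define z where "z = (\<lambda>i. z0 i + s0 * v i)"
  have p: "poly E s0 \<noteq> 0" "poly CP s0 \<noteq> 0" "poly PP s0 \<noteq> 0" using s0 unfolding P_def by auto
  have "form_eval n d c z \<noteq> 0" using p(1) unfolding E_def poly_line_poly z_def .
  moreover have "\<forall>l\<le>n. z l \<noteq> 0"
  proof (intro allI impI)
    fix l assume "l \<le> n"
    then show "z l \<noteq> 0" using p(2) unfolding CP_def z_def by (auto simp: poly_prod prod_zero_iff)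
  qed
  moreover have "\<forall>l\<le>n. \<forall>j\<le>n. l \<noteq> j \<longrightarrow> w l * z j \<noteq> w j * z l"
  proof (intro allI impI)
    fix l j assume lj: "l \<le> n" "j \<le> n" "l \<noteq> j"
    then have "(l,j) \<in> PS" unfolding PS_def by auto
    then have "poly (pf (l,j)) s0 \<noteq> 0" using p(3) fPS unfolding PP_def by (auto simp: poly_prod prod_zero_iff)
    then show "w l * z j \<noteq> w j * z l" unfolding pf_def z_def by (auto simp: algebra_simps)
  qed
  ultimately show ?thesis by blast
qed

lemma poly_altdef_atMost:
  fixes p :: "complex poly"
  assumes "degree p \<le> N"
  shows "poly p x = (\<Sum>i\<le>N. coeff p i * x ^ i)"
  by (subst poly_altdef, rule sum.mono_neutral_left) (use assms in \<open>auto simp: coeff_eq_0\<close>)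

lemma coeff_x_power_mult: "i < k \<Longrightarrow> coeff ([:0, 1::complex:] ^ k * q) i = 0"
proof (induction k arbitrary: i)
  case 0 then show ?case by simp
next
  case (Suc k)
  have e: "[:0, 1::complex:] ^ Suc k * q = pCons 0 ([:0, 1:] ^ k * q)"
    by (simp add: mult.assoc)
  show ?case
  proof (cases i)
    case 0 then show ?thesis unfolding e by simp
  next
    case (Suc j) then show ?thesis unfolding e using Suc.IH Suc.prems by simp
  qed
qed

lemma degree_plus_order_le_if_reflected:
  fixes h R :: "complex poly"
  assumes "h \<noteq> 0" "degree R \<le> N" "[:0, 1:] ^ \<mu> dvd R"
    and reflect: "\<And>t. t \<noteq> 0 \<Longrightarrow> poly h t = t ^ N * poly R (1 / t)"
  shows "degree h + \<mu> \<le> N"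
proof -
  have coeffR: "coeff R i = 0" if "i < \<mu>" for i
  proof -
    obtain q where "R = [:0, 1:] ^ \<mu> * q" using assms(3) by (auto elim!: dvdE)
    then show ?thesis using that by (simp add: coeff_x_power_mult)
  qed
  define h' where "h' = (\<Sum>i\<le>N. monom (coeff R i) (N - i))"
  have "h = h'"
  proof (rule poly_eq_if_eq_off_0, intro allI impI)
    fix t :: complex assume t: "t \<noteq> 0"
    have "t ^ N * poly R (1 / t) = t ^ N * (\<Sum>i\<le>N. coeff R i * (1 / t) ^ i)"
      using poly_altdef_atMost[OF assms(2)] by simp
    also have "\<dots> = (\<Sum>i\<le>N. coeff R i * t ^ (N - i))"
      unfolding sum_distrib_left
    proof (rule sum.cong[OF refl])
      fix i assume "i \<in> {..N}"
      then have "t ^ N = t ^ (N - i) * t ^ i" by (simp add: power_add[symmetric])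
      then show "t ^ N * (coeff R i * (1 / t) ^ i) = coeff R i * t ^ (N - i)"
        using t by (simp add: field_simps)
    qed
    also have "\<dots> = poly h' t" unfolding h'_def by (simp add: poly_sum poly_monom)
    finally show "poly h t = poly h' t" using reflect t by simp
  qed
  have coeff_h: "coeff h j = 0" if "N < j + \<mu>" for j
  proof -
    have "coeff h j = (\<Sum>i\<le>N. if N - i = j then coeff R i else 0)"
      unfolding \<open>h = h'\<close> h'_def by (simp add: coeff_sum coeff_monom)
    also have "\<dots> = 0" using coeffR that by (intro sum.neutral) auto
    finally show ?thesis .
  qed
  show ?thesis
  proof (rule ccontr)
    assume "\<not> degree h + \<mu> \<le> N"
    then have "coeff h (degree h) = 0" using coeff_h by simp
    then show False using assms(1) by simp
  qed
qed

lemma x_power_dvd_form_on_curve: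
  assumes "mult_ge n d c w \<mu>" "\<forall>l. poly (\<psi> l) 0 = w l"
  shows "[:0, 1:] ^ \<mu> dvd form_on_curve n d c \<psi>"
proof -
  define T where "T = (\<Sum>\<beta>\<in>exp_box n d. smult (dpeval n d c \<beta> w / fact_prod n \<beta>) (\<Prod>l\<le>n. (\<psi> l - [:w l:]) ^ \<beta> l))"
  have "poly T = poly (form_on_curve n d c \<psi>)"
  proof
    fix s
    have "poly T s = (\<Sum>\<beta>\<in>exp_box n d. mono_eval n \<beta> (\<lambda>l. poly (\<psi> l) s - w l) / fact_prod n \<beta> * dpeval n d c \<beta> w)"
      unfolding T_def mono_eval_def by (simp add: poly_sum poly_prod mult.commute)
    also have "\<dots> = form_eval n d c (\<lambda>l. w l + (poly (\<psi> l) s - w l))" by (rule form_eval_taylor[symmetric])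
    finally show "poly T s = poly (form_on_curve n d c \<psi>) s" unfolding poly_form_on_curve by simp
  qed
  then have "form_on_curve n d c \<psi> = T" by (simp add: poly_eq_poly_eq_iff)
  moreover have term_dvd: "[:0, 1:] ^ \<mu> dvd smult (dpeval n d c \<beta> w / fact_prod n \<beta>) (\<Prod>l\<le>n. (\<psi> l - [:w l:]) ^ \<beta> l)"
    if b: "\<beta> \<in> exp_box n d" for \<beta>
  proof (cases "(\<Sum>i\<le>n. \<beta> i) < \<mu>")
    case True
    then have "dpeval n d c \<beta> w = 0" using assms(1) b unfolding mult_ge_def exp_box_def by auto
    then show ?thesis by simp
  next
    case False
    have "[:0, 1:] dvd (\<psi> l - [:w l:])" for l
      using assms(2) poly_eq_0_iff_dvd[of "\<psi> l - [:w l:]" 0] by simp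
    then have "(\<Prod>l\<le>n. [:0, 1:] ^ \<beta> l) dvd (\<Prod>l\<le>n. (\<psi> l - [:w l:]) ^ \<beta> l)"
      by (intro prod_dvd_prod dvd_power_same)
    moreover have "[:0, 1::complex:] ^ \<mu> dvd [:0, 1:] ^ (\<Sum>l\<le>n. \<beta> l)"
      using False by (intro le_imp_power_dvd) simp
    then have "[:0, 1::complex:] ^ \<mu> dvd (\<Prod>l\<le>n. [:0, 1:] ^ \<beta> l)" by (simp add: power_sum)
    ultimately show ?thesis using dvd_trans dvd_smult by blast
  qed
  moreover have "[:0, 1:] ^ \<mu> dvd T" unfolding T_def by (rule dvd_sum) (rule term_dvd)
  ultimately show ?thesis by simp
qed

text \<open>The rational normal curve \<open>t \<mapsto> (w\<^sub>l \<Prod>\<^sub>j\<^sub>\<noteq>\<^sub>l (t - a\<^sub>j))\<^sub>l\<close> passes through \<open>e\<^sub>i\<close> at \<open>t = a\<^sub>i\<close> and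
  through \<open>w\<close> at \<open>t = \<infinity>\<close>; \<open>rnc_rev\<close> is its reparametrisation by \<open>1 / t\<close>.\<close>

definition rnc :: "nat \<Rightarrow> (nat \<Rightarrow> complex) \<Rightarrow> (nat \<Rightarrow> complex) \<Rightarrow> nat \<Rightarrow> complex poly" where
  "rnc n w a l = smult (w l) (\<Prod>j\<in>{..n}-{l}. [:-a j, 1:])"

definition rnc_rev :: "nat \<Rightarrow> (nat \<Rightarrow> complex) \<Rightarrow> (nat \<Rightarrow> complex) \<Rightarrow> nat \<Rightarrow> complex poly" where
  "rnc_rev n w a l = smult (w l) (\<Prod>j\<in>{..n}-{l}. [:1, -a j:])"

lemma poly_rnc_reflect:
  assumes "l \<le> n" "t \<noteq> 0"
  shows "poly (rnc n w a l) t = t ^ n * poly (rnc_rev n w a l) (1 / t)"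
proof -
  have "t ^ n * poly (rnc_rev n w a l) (1 / t) = w l * (t ^ card ({..n}-{l}) * (\<Prod>j\<in>{..n}-{l}. 1 - a j / t))"
    unfolding rnc_rev_def using assms(1) by (simp add: poly_prod mult_ac)
  also have "\<dots> = w l * (\<Prod>j\<in>{..n}-{l}. t * (1 - a j / t))"
    by (simp add: prod.distrib)
  also have "(\<Prod>j\<in>{..n}-{l}. t * (1 - a j / t)) = (\<Prod>j\<in>{..n}-{l}. t - a j)"
    by (rule prod.cong[OF refl]) (use assms(2) in \<open>simp add: field_simps\<close>)
  finally show ?thesis unfolding rnc_def by (simp add: poly_prod)
qed

lemma degree_rnc_rev_le:
  assumes "l \<le> n"
  shows "degree (rnc_rev n w a l) \<le> n"
proof -
  have "degree (\<Prod>j\<in>{..n}-{l}. [:1, -a j:]) \<le> (\<Sum>j\<in>{..n}-{l}. degree [:1, -a j:])"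
    using degree_prod_sum_le[of "{..n}-{l}" "\<lambda>j. [:1, -a j:]"] by (simp add: comp_def)
  also have "\<dots> \<le> card ({..n}-{l})" using sum_mono[of "{..n}-{l}" "\<lambda>j. degree [:1, -a j:]" "\<lambda>_. 1"] by simp
  also have "\<dots> = n" using assms by simp
  finally show ?thesis unfolding rnc_rev_def using degree_smult_le order_trans by blast
qed

lemma degree_form_on_rnc_plus_mult_le:
  assumes "form_on_curve n d c (rnc n w a) \<noteq> 0" "mult_ge n d c w \<mu>"
  shows "degree (form_on_curve n d c (rnc n w a)) + \<mu> \<le> n * d"
proof (rule degree_plus_order_le_if_reflected[OF assms(1)])
  show "degree (form_on_curve n d c (rnc_rev n w a)) \<le> n * d"
    using degree_form_on_curve[of n "rnc_rev n w a" n d c] degree_rnc_rev_le by simp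
  have "\<forall>l. poly (rnc_rev n w a l) 0 = w l" unfolding rnc_rev_def by (simp add: poly_prod)
  then show "[:0, 1:] ^ \<mu> dvd form_on_curve n d c (rnc_rev n w a)"
    by (rule x_power_dvd_form_on_curve[OF assms(2)])
  fix t :: complex assume "t \<noteq> 0"
  then have "poly (form_on_curve n d c (rnc n w a)) t = form_eval n d c (\<lambda>l. t ^ n * poly (rnc_rev n w a l) (1 / t))"
    unfolding poly_form_on_curve by (intro form_eval_cong) (simp add: poly_rnc_reflect)
  also have "\<dots> = t ^ (n * d) * poly (form_on_curve n d c (rnc_rev n w a)) (1 / t)"
    unfolding form_eval_homogeneous poly_form_on_curve by (simp add: power_mult)
  finally show "poly (form_on_curve n d c (rnc n w a)) t = t ^ (n * d) * poly (form_on_curve n d c (rnc_rev n w a)) (1 / t)" .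
qed

text \<open>Multiplicity \<open>m\<^sub>i\<close> at \<open>e\<^sub>i\<close> makes the restriction to the curve vanish to order \<open>m\<^sub>i\<close> at \<open>a\<^sub>i\<close>,
  since every other component of the curve vanishes there.\<close>

lemma sum_mults_le_degree_form_on_rnc:
  assumes caps: "\<forall>l\<le>n. \<forall>\<alpha>\<in>hmonos n d. c \<alpha> \<noteq> 0 \<longrightarrow> \<alpha> l + mm l \<le> d"
    and inj: "inj_on a {..n}" and nz: "form_on_curve n d c (rnc n w a) \<noteq> 0"
  shows "(\<Sum>l\<le>n. mm l) \<le> degree (form_on_curve n d c (rnc n w a))"
proof -
  let ?h = "form_on_curve n d c (rnc n w a)"
  have "[:-a i, 1:] ^ mm i dvd ?h" if i: "i \<le> n" for i
    unfolding form_on_curve_def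
  proof (rule dvd_sum)
    fix \<alpha> assume \<alpha>: "\<alpha> \<in> hmonos n d"
    show "[:-a i, 1:] ^ mm i dvd smult (c \<alpha>) (\<Prod>l\<le>n. rnc n w a l ^ \<alpha> l)"
    proof (cases "c \<alpha> = 0")
      case False
      have "[:-a i, 1:] dvd rnc n w a l" if "l \<in> {..n}-{i}" for l
        using that i unfolding rnc_def by (intro dvd_smult dvd_prodI) auto
      then have f1: "(\<Prod>l\<in>{..n}-{i}. [:-a i, 1:] ^ \<alpha> l) dvd (\<Prod>l\<in>{..n}-{i}. rnc n w a l ^ \<alpha> l)"
        by (intro prod_dvd_prod dvd_power_same)
      have "(\<Sum>l\<in>{..n}-{i}. \<alpha> l) = d - \<alpha> i"
        using \<alpha> sum.remove[of "{..n}" i \<alpha>] i unfolding hmonos_def by auto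
      then have f2: "(\<Prod>l\<in>{..n}-{i}. [:-a i, 1:] ^ \<alpha> l) = [:-a i, 1:] ^ (d - \<alpha> i)"
        using power_sum[of "[:-a i, 1:]" \<alpha> "{..n}-{i}"] by simp
      have "\<alpha> i + mm i \<le> d" using caps i \<alpha> False by blast
      then have f3: "[:-a i, 1:] ^ mm i dvd [:-a i, 1:] ^ (d - \<alpha> i)" by (intro le_imp_power_dvd) linarith
      have "[:-a i, 1:] ^ mm i dvd (\<Prod>l\<in>{..n}-{i}. rnc n w a l ^ \<alpha> l)"
        using dvd_trans[OF f3[folded f2] f1] .
      moreover have "(\<Prod>l\<le>n. rnc n w a l ^ \<alpha> l) = rnc n w a i ^ \<alpha> i * (\<Prod>l\<in>{..n}-{i}. rnc n w a l ^ \<alpha> l)"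
        using prod.remove[of "{..n}" i] i by simp
      ultimately show ?thesis by (simp add: dvd_smult dvd_mult)
    qed simp
  qed
  then have "(\<Prod>i\<le>n. [:-a i, 1:] ^ mm i) dvd ?h" by (intro prod_linear_powers_dvd[OF _ nz inj]) auto
  then have "degree (\<Prod>i\<le>n. [:-a i, 1:] ^ mm i) \<le> degree ?h" using nz by (rule dvd_imp_degree_le)
  moreover have "degree (\<Prod>i\<le>n. [:-a i, 1:] ^ mm i) = (\<Sum>i\<le>n. mm i)"
    by (subst degree_prod_sum_eq) (auto simp: degree_linear_power)
  ultimately show ?thesis by simp
qed

lemma form_on_rnc_at_0:
  assumes "\<forall>l\<le>n. z l \<noteq> 0"
  shows "poly (form_on_curve n d c (rnc n w (\<lambda>l. - w l / z l))) 0 = (\<Prod>j\<le>n. w j / z j) ^ d * form_eval n d c z"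
proof -
  have "poly (rnc n w (\<lambda>l. - w l / z l) l) 0 = (\<Prod>j\<le>n. w j / z j) * z l" if l: "l \<le> n" for l
  proof -
    have "(\<Prod>j\<le>n. w j / z j) = (w l / z l) * (\<Prod>j\<in>{..n}-{l}. w j / z j)"
      using prod.remove[of "{..n}" l "\<lambda>j. w j / z j"] l by auto
    then show ?thesis using assms l unfolding rnc_def by (simp add: poly_prod field_simps)
  qed
  then have "poly (form_on_curve n d c (rnc n w (\<lambda>l. - w l / z l))) 0 = form_eval n d c (\<lambda>l. (\<Prod>j\<le>n. w j / z j) * z l)"
    unfolding poly_form_on_curve by (intro form_eval_cong) simp
  then show ?thesis by (simp add: form_eval_homogeneous)
qed

text \<open>Restricting to the rational normal curve through all the points, chosen so that the restriction
  is nonzero, the multiplicities at the \<open>n + 2\<close> points give at least \<open>\<Sum> m\<^sub>l + \<mu>\<close> zeros of a binary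
  form of degree \<open>n d\<close>.\<close>

lemma sum_mults_le_n_times_degree:
  assumes caps: "\<forall>l\<le>n. \<forall>\<alpha>\<in>hmonos n d. c \<alpha> \<noteq> 0 \<longrightarrow> \<alpha> l + mm l \<le> d"
    and w: "\<forall>l\<le>n. w l \<noteq> 0" and mg: "mult_ge n d c w \<mu>" and nz: "form_eval n d c z0 \<noteq> 0"
  shows "(\<Sum>l\<le>n. mm l) + \<mu> \<le> n * d"
proof -
  obtain z where z: "form_eval n d c z \<noteq> 0" "\<forall>l\<le>n. z l \<noteq> 0" "\<forall>l\<le>n. \<forall>j\<le>n. l \<noteq> j \<longrightarrow> w l * z j \<noteq> w j * z l"
    using exists_separating_point[OF nz w] by blast
  define a where "a = (\<lambda>l. - w l / z l)"
  have inj: "inj_on a {..n}"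
  proof (rule inj_onI)
    fix l j assume lj: "l \<in> {..n}" "j \<in> {..n}" "a l = a j"
    then have "w l * z j = w j * z l" using z(2) unfolding a_def by (simp add: field_simps)
    then show "l = j" using z(3) lj by auto
  qed
  have "poly (form_on_curve n d c (rnc n w a)) 0 \<noteq> 0"
    using form_on_rnc_at_0[OF z(2), of d c w] z(1) w z(2) unfolding a_def by (simp add: prod_zero_iff)
  then have nz': "form_on_curve n d c (rnc n w a) \<noteq> 0" by auto
  show ?thesis
    using sum_mults_le_degree_form_on_rnc[OF caps inj nz'] degree_form_on_rnc_plus_mult_le[OF nz' mg] by linarith
qed

lemma coord_mults_feasible:
  assumes mults: "\<forall>l\<le>n. mult_ge n d c (unit_vec l) (mm l)" and w: "mult_ge n d c w \<mu>" "\<forall>l\<le>n. w l \<noteq> 0"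
    and "hs_nonzero n d c"
  shows "(\<forall>l\<le>n. mm l \<le> d) \<and> \<mu> \<le> d \<and> (\<Sum>l\<le>n. mm l) + \<mu> \<le> n * d"
proof -
  have caps: "\<forall>l\<le>n. \<forall>\<alpha>\<in>hmonos n d. c \<alpha> \<noteq> 0 \<longrightarrow> \<alpha> l + mm l \<le> d"
    using mults exp_cap_if_mult_ge_unit_vec by blast
  obtain \<alpha>0 where "\<alpha>0 \<in> hmonos n d" "c \<alpha>0 \<noteq> 0" using assms(4) unfolding hs_nonzero_def by blast
  then have "\<forall>l\<le>n. mm l \<le> d" using caps by fastforce
  moreover obtain x0 where x0: "form_eval n d c x0 \<noteq> 0" using hs_nonzeroD[OF assms(4)] by blast
  then have "\<mu> \<le> d" using form_eval_eq_0_if_mult_gt_degree[OF w(1)] by (meson not_le)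
  moreover have "(\<Sum>l\<le>n. mm l) + \<mu> \<le> n * d" by (rule sum_mults_le_n_times_degree[OF caps w(2,1) x0])
  ultimately show ?thesis by blast
qed

section \<open>Counting hyperplanes\<close>

lemma exists_bounded_summands:
  fixes cp :: "nat \<Rightarrow> nat"
  assumes "finite K" "T \<le> (\<Sum>j\<in>K. cp j)"
  shows "\<exists>w. (\<forall>j\<in>K. w j \<le> cp j) \<and> (\<Sum>j\<in>K. w j) = T"
  using assms
proof (induction K arbitrary: T rule: finite_induct)
  case empty then show ?case by simp
next
  case (insert a K)
  define t where "t = min T (cp a)"
  have "T - t \<le> (\<Sum>j\<in>K. cp j)" using insert.prems insert.hyps unfolding t_def by auto
  then obtain w where w: "\<forall>j\<in>K. w j \<le> cp j" "(\<Sum>j\<in>K. w j) = T - t" using insert.IH by blast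
  define w' where "w' = w(a := t)"
  have "(\<Sum>j\<in>K. w' j) = (\<Sum>j\<in>K. w j)" unfolding w'_def using insert.hyps by (intro sum.cong) auto
  then have "(\<Sum>j\<in>insert a K. w' j) = T" using insert.hyps w(2) unfolding w'_def t_def by auto
  moreover have "\<forall>j\<in>insert a K. w' j \<le> cp j" using w(1) unfolding w'_def t_def by auto
  ultimately show ?case by blast
qed

lemma length_filter_mono: "(\<And>x. P x \<Longrightarrow> Q x) \<Longrightarrow> length (filter P xs) \<le> length (filter Q xs)"
  by (induction xs) auto

lemma length_filter_zip_or_and:
  "length xs = length ys \<Longrightarrow> length (filter (\<lambda>(a,b). P a \<or> P b) (zip xs ys)) + length (filter (\<lambda>(a,b). P a \<and> P b) (zip xs ys))
     = length (filter P xs) + length (filter P ys)"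
  by (induction xs ys rule: list_induct2) auto

lemma length_filter_zip_right_true:
  "length xs = length ys \<Longrightarrow> \<forall>x\<in>set ys. P x \<Longrightarrow> length (filter (\<lambda>(a,b). Q a \<and> P b) (zip xs ys)) = length (filter Q xs)"
  by (induction xs ys rule: list_induct2) auto

lemma length_filter_zip_left_false:
  "\<forall>x\<in>set xs. \<not> Q x \<Longrightarrow> length (filter (\<lambda>(a,b). Q a \<and> R b) (zip xs ys)) = 0"
proof (induction xs arbitrary: ys)
  case Nil then show ?case by simp
next
  case (Cons a xs) then show ?case by (cases ys) auto
qed

lemma sum_min_ge_double:
  fixes c :: "nat \<Rightarrow> nat"
  assumes "finite K" "\<forall>l\<in>K. c l \<le> d" "(\<Sum>l\<in>K. c l) \<ge> d + \<mu>" "\<mu> \<le> d"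
  shows "(\<Sum>l\<in>K. min (c l) \<mu>) \<ge> 2 * \<mu>"
proof (cases "\<exists>l\<in>K. c l \<ge> \<mu>")
  case False
  then have "(\<Sum>l\<in>K. min (c l) \<mu>) = (\<Sum>l\<in>K. c l)" by (intro sum.cong) auto
  then show ?thesis using assms by simp
next
  case True
  then obtain l0 where l0: "l0 \<in> K" "c l0 \<ge> \<mu>" by blast
  have s: "(\<Sum>l\<in>K. min (c l) \<mu>) = \<mu> + (\<Sum>l\<in>K - {l0}. min (c l) \<mu>)"
    using sum.remove[OF assms(1) l0(1), of "\<lambda>l. min (c l) \<mu>"] l0 by simp
  show ?thesis
  proof (cases "\<exists>l\<in>K - {l0}. c l \<ge> \<mu>")
    case True
    then obtain l1 where l1: "l1 \<in> K - {l0}" "c l1 \<ge> \<mu>" by blast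
    have "(\<Sum>l\<in>K - {l0}. min (c l) \<mu>) \<ge> min (c l1) \<mu>"
      using l1 assms(1) by (intro member_le_sum) auto
    then show ?thesis using s l1 by simp
  next
    case False
    then have "(\<Sum>l\<in>K - {l0}. min (c l) \<mu>) = (\<Sum>l\<in>K - {l0}. c l)" by (intro sum.cong) (auto simp: not_le)
    moreover have "(\<Sum>l\<in>K. c l) = c l0 + (\<Sum>l\<in>K - {l0}. c l)"
      using sum.remove[OF assms(1) l0(1)] by simp
    moreover have "c l0 \<le> d" using assms(2) l0 by auto
    ultimately show ?thesis using s assms(3) by simp
  qed
qed

lemma sum_min_ge_min:
  fixes c :: "nat \<Rightarrow> nat"
  assumes "finite K"
  shows "(\<Sum>l\<in>K. min (c l) \<mu>) \<ge> min \<mu> (\<Sum>l\<in>K. c l)"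
proof (cases "\<exists>l\<in>K. c l \<ge> \<mu>")
  case True
  then obtain l where "l \<in> K" "c l \<ge> \<mu>" by blast
  then have "min (c l) \<mu> \<le> (\<Sum>l\<in>K. min (c l) \<mu>)" using assms by (intro member_le_sum) auto
  then show ?thesis using \<open>c l \<ge> \<mu>\<close> by simp
next
  case False
  then have "(\<Sum>l\<in>K. min (c l) \<mu>) = (\<Sum>l\<in>K. c l)" by (intro sum.cong) (auto simp: not_le)
  then show ?thesis by simp
qed

definition rep_list :: "(nat \<Rightarrow> nat) \<Rightarrow> nat list \<Rightarrow> nat list" where
  "rep_list f js = concat (map (\<lambda>j. replicate (f j) j) js)"

lemma rep_list_append [simp]: "rep_list f (xs @ ys) = rep_list f xs @ rep_list f ys"
  unfolding rep_list_def by simp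

lemma set_rep_list_subset: "set (rep_list f js) \<subseteq> set js"
  unfolding rep_list_def by auto

lemma length_filter_rep_list:
  assumes "distinct js"
  shows "length (filter Q (rep_list f js)) = (\<Sum>j\<in>{j\<in>set js. Q j}. f j)"
  using assms
proof (induction js)
  case Nil then show ?case by (simp add: rep_list_def)
next
  case (Cons a js)
  have "a \<notin> {j \<in> set js. Q j}" using Cons.prems by auto
  moreover have "{j \<in> set (a # js). Q j} = (if Q a then insert a {j \<in> set js. Q j} else {j \<in> set js. Q j})"
    by auto
  ultimately show ?case using Cons by (simp add: rep_list_def)
qed

lemma length_rep_list: "distinct js \<Longrightarrow> length (rep_list f js) = (\<Sum>j\<in>set js. f j)"
  using length_filter_rep_list[of js "\<lambda>_. True" f] by simp

text \<open>Since every entry occurs in one block of at most \<open>\<mu>\<close> consecutive positions, positions \<open>\<mu>\<close> apart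
  carry different entries.\<close>

lemma rep_list_nth_neq_shift:
  assumes "distinct js" "\<forall>j\<in>set js. f j \<le> \<mu>" "i + \<mu> < length (rep_list f js)"
  shows "rep_list f js ! i \<noteq> rep_list f js ! (i + \<mu>)"
  using assms
proof (induction js arbitrary: i)
  case Nil then show ?case by (simp add: rep_list_def)
next
  case (Cons a js)
  let ?L = "rep_list f js"
  have L: "rep_list f (a # js) = replicate (f a) a @ ?L" by (simp add: rep_list_def)
  have anot: "a \<notin> set ?L" using Cons.prems(1) set_rep_list_subset by fastforce
  have fa: "f a \<le> \<mu>" using Cons.prems by auto
  show ?case
  proof (cases "i < f a")
    case True
    have "i + \<mu> - f a < length ?L" using Cons.prems(3) fa unfolding L by simp
    then have "?L ! (i + \<mu> - f a) \<noteq> a" using anot nth_mem by fastforce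
    then show ?thesis unfolding L using True fa by (simp add: nth_append)
  next
    case False
    have "i - f a + \<mu> < length ?L" using Cons.prems(3) False unfolding L by simp
    then have "?L ! (i - f a) \<noteq> ?L ! (i - f a + \<mu>)" using Cons.IH Cons.prems(1,2) by simp
    moreover have "i + \<mu> - f a = i - f a + \<mu>" using False by linarith
    moreover have "(replicate (f a) a @ ?L) ! i = ?L ! (i - f a)"
      using False by (simp only: nth_append length_replicate if_False)
    moreover have "(replicate (f a) a @ ?L) ! (i + \<mu>) = ?L ! (i + \<mu> - f a)"
      using False by (simp only: nth_append length_replicate) simp
    ultimately show ?thesis unfolding L by metis
  qed
qed

lemma split_budget:
  fixes SI SJ MI MJ d \<mu> :: nat
  assumes "MI + MJ \<ge> 2 * \<mu>" "MI \<ge> min \<mu> SI" "MJ \<ge> min \<mu> SJ" "MI \<le> SI" "MJ \<le> SJ"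
    "SI + SJ \<ge> d + \<mu>" "\<mu> \<le> d"
  shows "\<exists>PI ZI ZJ. PI \<le> MI \<and> 2 * \<mu> - PI \<le> MJ \<and> PI \<le> 2 * \<mu> \<and> ZI + PI \<le> SI
     \<and> ZJ + (2 * \<mu> - PI) \<le> SJ \<and> ZI + ZJ + \<mu> = d \<and> ZJ + (\<mu> - PI) = d - SI"
proof (cases "d \<le> SI")
  case True
  define PI where "PI = max \<mu> (2 * \<mu> - MJ)"
  show ?thesis
    by (rule exI[of _ PI], rule exI[of _ "d - \<mu>"], rule exI[of _ 0])
       (use assms True in \<open>auto simp: PI_def max_def min_def split: if_splits\<close>)
next
  case False
  define PI where "PI = max (SI + \<mu> - d) (2 * \<mu> - MJ)"
  have "MJ \<ge> \<mu>" using assms False by (auto simp: min_def split: if_splits)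
  show ?thesis
    by (rule exI[of _ PI], rule exI[of _ "SI - PI"], rule exI[of _ "d - \<mu> - (SI - PI)"])
       (use assms False \<open>MJ \<ge> \<mu>\<close> in \<open>auto simp: PI_def max_def min_def split: if_splits\<close>)
qed

text \<open>The numbers of hyperplanes of each kind in the extremal form: \<open>p l\<close> pair hyperplanes and \<open>z l\<close>
  coordinate hyperplanes avoid \<open>e\<^sub>l\<close>, within the budget \<open>c l = d - m\<^sub>l\<close>; the last equation makes
  exactly \<open>d - \<Sum>\<^sub>I c\<close> of them contain \<open>L\<^sub>I\<close>.\<close>

lemma exists_hyperplane_counts:
  fixes c :: "nat \<Rightarrow> nat" and I J :: "nat set"
  assumes fin: "finite I" "finite J" and disj: "I \<inter> J = {}"
    and c_le: "\<forall>l\<in>I \<union> J. c l \<le> d" and \<mu>: "\<mu> \<le> d" and tot: "d + \<mu> \<le> (\<Sum>l\<in>I \<union> J. c l)"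
  obtains p z where "\<forall>l\<in>I \<union> J. p l \<le> \<mu> \<and> z l + p l \<le> c l" "(\<Sum>l\<in>I \<union> J. p l) = 2 * \<mu>"
    "(\<Sum>l\<in>I \<union> J. z l) + \<mu> = d" "(\<Sum>l\<in>J. z l) + (\<mu> - (\<Sum>l\<in>I. p l)) = d - (\<Sum>l\<in>I. c l)"
proof -
  have split: "(\<Sum>l\<in>I \<union> J. f l) = (\<Sum>l\<in>I. f l) + (\<Sum>l\<in>J. f l)" for f :: "nat \<Rightarrow> nat"
    using sum.union_disjoint[OF fin disj] .
  define M where "M = (\<lambda>l. min (c l) \<mu>)"
  define SI where "SI = (\<Sum>l\<in>I. c l)"
  define SJ where "SJ = (\<Sum>l\<in>J. c l)"
  define MI where "MI = (\<Sum>l\<in>I. M l)"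
  define MJ where "MJ = (\<Sum>l\<in>J. M l)"
  have "2 * \<mu> \<le> MI + MJ"
    using sum_min_ge_double[of "I \<union> J" c d \<mu>] fin c_le tot \<mu> split[of M] unfolding M_def MI_def MJ_def by simp
  moreover have "MI \<ge> min \<mu> SI" "MJ \<ge> min \<mu> SJ"
    unfolding MI_def SI_def MJ_def SJ_def M_def using sum_min_ge_min fin by blast+
  moreover have "MI \<le> SI" "MJ \<le> SJ" unfolding MI_def SI_def MJ_def SJ_def M_def by (auto intro: sum_mono)
  moreover have "SI + SJ \<ge> d + \<mu>" using tot split[of c] unfolding SI_def SJ_def by simp
  ultimately obtain PI ZI ZJ where ch: "PI \<le> MI" "2 * \<mu> - PI \<le> MJ" "PI \<le> 2 * \<mu>" "ZI + PI \<le> SI"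
     "ZJ + (2 * \<mu> - PI) \<le> SJ" "ZI + ZJ + \<mu> = d" "ZJ + (\<mu> - PI) = d - SI"
    using split_budget \<mu> by metis
  obtain pI where pI: "\<forall>l\<in>I. pI l \<le> M l" "(\<Sum>l\<in>I. pI l) = PI"
    using exists_bounded_summands[OF fin(1), of PI M] ch(1) unfolding MI_def by blast
  obtain pJ where pJ: "\<forall>l\<in>J. pJ l \<le> M l" "(\<Sum>l\<in>J. pJ l) = 2 * \<mu> - PI"
    using exists_bounded_summands[OF fin(2), of "2 * \<mu> - PI" M] ch(2) unfolding MJ_def by blast
  define p where "p = (\<lambda>l. if l \<in> I then pI l else pJ l)"
  have "(\<Sum>l\<in>I. p l) = (\<Sum>l\<in>I. pI l)" "(\<Sum>l\<in>J. p l) = (\<Sum>l\<in>J. pJ l)"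
    unfolding p_def using disj by (auto intro!: sum.cong)
  then have sum_pI: "(\<Sum>l\<in>I. p l) = PI" and sum_pJ: "(\<Sum>l\<in>J. p l) = 2 * \<mu> - PI"
    using pI(2) pJ(2) by simp_all
  have p_le: "\<forall>l\<in>I \<union> J. p l \<le> M l" using pI pJ unfolding p_def by auto
  have "ZI \<le> (\<Sum>l\<in>I. c l - p l)"
    using ch(4) p_le sum_subtractf_nat[of I p c] sum_pI unfolding SI_def M_def by auto
  then obtain zI where zI: "\<forall>l\<in>I. zI l \<le> c l - p l" "(\<Sum>l\<in>I. zI l) = ZI"
    using exists_bounded_summands[OF fin(1)] by blast
  have "ZJ \<le> (\<Sum>l\<in>J. c l - p l)"
    using ch(5) p_le sum_subtractf_nat[of J p c] sum_pJ unfolding SJ_def M_def by auto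
  then obtain zJ where zJ: "\<forall>l\<in>J. zJ l \<le> c l - p l" "(\<Sum>l\<in>J. zJ l) = ZJ"
    using exists_bounded_summands[OF fin(2)] by blast
  define z where "z = (\<lambda>l. if l \<in> I then zI l else zJ l)"
  have "(\<Sum>l\<in>I. z l) = (\<Sum>l\<in>I. zI l)" "(\<Sum>l\<in>J. z l) = (\<Sum>l\<in>J. zJ l)"
    unfolding z_def using disj by (auto intro!: sum.cong)
  then have sum_zI: "(\<Sum>l\<in>I. z l) = ZI" and sum_zJ: "(\<Sum>l\<in>J. z l) = ZJ"
    using zI(2) zJ(2) by (metis trans)+
  show thesis
  proof (rule that)
    show "\<forall>l\<in>I \<union> J. p l \<le> \<mu> \<and> z l + p l \<le> c l"
    proof
      fix l assume l: "l \<in> I \<union> J"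
      then have "p l \<le> \<mu>" "p l \<le> c l" using p_le unfolding M_def by auto
      moreover have "z l \<le> c l - p l" using l zI(1) zJ(1) unfolding z_def by (cases "l \<in> I") auto
      ultimately show "p l \<le> \<mu> \<and> z l + p l \<le> c l" by simp
    qed
    show "(\<Sum>l\<in>I \<union> J. p l) = 2 * \<mu>" using split[of p] sum_pI sum_pJ ch(3) by simp
    show "(\<Sum>l\<in>I \<union> J. z l) + \<mu> = d" using split[of z] sum_zI sum_zJ ch(6) by simp
    show "(\<Sum>l\<in>J. z l) + (\<mu> - (\<Sum>l\<in>I. p l)) = d - (\<Sum>l\<in>I. c l)"
      using sum_zJ sum_pI ch(7) unfolding SI_def by simp
  qed
qed

text \<open>A tag names a hyperplane of the extremal form: \<open>Inl l\<close> the coordinate hyperplane \<open>x\<^sub>l = 0\<close>, and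
  \<open>Inr (a, b)\<close> the hyperplane through \<open>w\<close> and all coordinate points except \<open>e\<^sub>a\<close> and \<open>e\<^sub>b\<close>.\<close>

definition tag_vanishes_at :: "nat \<Rightarrow> nat + nat \<times> nat \<Rightarrow> bool" where
  "tag_vanishes_at j t = (case t of Inl l \<Rightarrow> l \<noteq> j | Inr (a,b) \<Rightarrow> a \<noteq> j \<and> b \<noteq> j)"

definition tag_vanishes_on :: "nat set \<Rightarrow> nat + nat \<times> nat \<Rightarrow> bool" where
  "tag_vanishes_on I t = (case t of Inl l \<Rightarrow> l \<notin> I | Inr (a,b) \<Rightarrow> a \<notin> I \<and> b \<notin> I)"

definition tag_wf :: "nat \<Rightarrow> nat + nat \<times> nat \<Rightarrow> bool" where
  "tag_wf n t = (case t of Inl l \<Rightarrow> l \<le> n | Inr (a,b) \<Rightarrow> a \<le> n \<and> b \<le> n \<and> a \<noteq> b)"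

text \<open>\<open>z j\<close> coordinate hyperplanes \<open>x\<^sub>j = 0\<close>, and \<open>\<mu>\<close> pair hyperplanes obtained by matching the first half
  of the list in which each \<open>j\<close> occurs \<open>p j\<close> times with its second half.\<close>

definition tag_list :: "(nat \<Rightarrow> nat) \<Rightarrow> (nat \<Rightarrow> nat) \<Rightarrow> nat list \<Rightarrow> nat \<Rightarrow> (nat + nat \<times> nat) list" where
  "tag_list z p js \<mu> = map Inl (rep_list z js) @
     map Inr (zip (take \<mu> (rep_list p js)) (drop \<mu> (rep_list p js)))"

lemma pair_tags_distinct:
  assumes "distinct js" "\<forall>j\<in>set js. p j \<le> \<mu>" "(\<Sum>j\<in>set js. p j) = 2 * \<mu>"
    and "(a, b) \<in> set (zip (take \<mu> (rep_list p js)) (drop \<mu> (rep_list p js)))"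
  shows "a \<noteq> b"
proof -
  have len: "length (rep_list p js) = 2 * \<mu>" using length_rep_list assms(1,3) by simp
  obtain i where i: "i < \<mu>" "a = rep_list p js ! i" "b = rep_list p js ! (i + \<mu>)"
    using assms(4) len by (auto simp: in_set_zip add.commute)
  then show ?thesis using rep_list_nth_neq_shift[OF assms(1,2)] len by simp
qed

lemma length_tag_list:
  assumes "distinct js" "(\<Sum>j\<in>set js. p j) = 2 * \<mu>"
  shows "length (tag_list z p js \<mu>) = (\<Sum>j\<in>set js. z j) + \<mu>"
  using assms by (simp add: tag_list_def length_rep_list)

lemma length_filter_pair_tags:
  assumes "distinct js" "(\<Sum>j\<in>set js. p j) = 2 * \<mu>"
  shows "length (filter (\<lambda>t. \<not> isl t) (tag_list z p js \<mu>)) = \<mu>"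
  using assms by (simp add: tag_list_def length_rep_list filter_map comp_def)

lemma tag_wf_tag_list:
  assumes "distinct js" "\<forall>j\<in>set js. p j \<le> \<mu>" "(\<Sum>j\<in>set js. p j) = 2 * \<mu>" "set js \<subseteq> {..n}"
    and "t \<in> set (tag_list z p js \<mu>)"
  shows "tag_wf n t"
proof -
  have sub: "set (rep_list f js) \<subseteq> {..n}" for f using set_rep_list_subset assms(4) by blast
  consider (coord) l where "l \<in> set (rep_list z js)" "t = Inl l"
    | (pair) a b where "(a, b) \<in> set (zip (take \<mu> (rep_list p js)) (drop \<mu> (rep_list p js)))" "t = Inr (a, b)"
    using assms(5) unfolding tag_list_def by auto
  then show ?thesis
  proof cases
    case coord then show ?thesis using sub unfolding tag_wf_def by auto
  next
    case pair
    then have "a \<in> set (rep_list p js)" "b \<in> set (rep_list p js)"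
      by (auto dest: set_zip_leftD set_zip_rightD in_set_takeD in_set_dropD)
    then show ?thesis using pair pair_tags_distinct[OF assms(1-3)] sub unfolding tag_wf_def by auto
  qed
qed

lemma length_filter_tag_vanishes_at:
  assumes "distinct js" "\<forall>j\<in>set js. p j \<le> \<mu>" "(\<Sum>j\<in>set js. p j) = 2 * \<mu>" "j \<in> set js"
  shows "length (filter (tag_vanishes_at j) (tag_list z p js \<mu>)) = (\<Sum>l\<in>set js. z l) - z j + (\<mu> - p j)"
proof -
  let ?L = "rep_list p js"
  let ?Z = "zip (take \<mu> ?L) (drop \<mu> ?L)"
  have len: "length ?L = 2 * \<mu>" using length_rep_list assms(1,3) by simp
  have coord: "length (filter (\<lambda>l. l \<noteq> j) (rep_list z js)) = (\<Sum>l\<in>set js. z l) - z j"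
    using length_filter_rep_list[OF assms(1), of "\<lambda>l. l \<noteq> j" z] sum_diff1_nat[of z "set js" j] assms(4)
    by (simp add: set_diff_eq)
  have "length (filter (\<lambda>(a,b). a = j \<or> b = j) ?Z) = p j"
  proof -
    have "length (filter (\<lambda>(a,b). a = j \<and> b = j) ?Z) = 0"
      using pair_tags_distinct[OF assms(1-3)] by (auto simp: filter_empty_conv)
    moreover have "length (filter (\<lambda>x. x = j) (take \<mu> ?L)) + length (filter (\<lambda>x. x = j) (drop \<mu> ?L))
        = length (filter (\<lambda>x. x = j) ?L)"
      by (metis append_take_drop_id filter_append length_append)
    moreover have "{x \<in> set js. x = j} = {j}" using assms(4) by auto
    ultimately show ?thesis
      using length_filter_zip_or_and[of "take \<mu> ?L" "drop \<mu> ?L" "\<lambda>x. x = j"] len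
        length_filter_rep_list[OF assms(1), of "\<lambda>x. x = j" p] by simp
  qed
  moreover have "filter (\<lambda>x. \<not> (\<lambda>(a,b). a \<noteq> j \<and> b \<noteq> j) x) ?Z = filter (\<lambda>(a,b). a = j \<or> b = j) ?Z"
    by (intro filter_cong) auto
  moreover have "length (filter (\<lambda>(a,b). a \<noteq> j \<and> b \<noteq> j) ?Z)
      + length (filter (\<lambda>x. \<not> (\<lambda>(a,b). a \<noteq> j \<and> b \<noteq> j) x) ?Z) = \<mu>"
    using sum_length_filter_compl[of "\<lambda>(a,b). a \<noteq> j \<and> b \<noteq> j" ?Z] len by simp
  ultimately have "length (filter (\<lambda>(a,b). a \<noteq> j \<and> b \<noteq> j) ?Z) = \<mu> - p j" by simp
  then show ?thesis using coord
    unfolding tag_list_def by (simp add: filter_map comp_def tag_vanishes_at_def split_def)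
qed

lemma length_filter_tag_vanishes_on:
  assumes "distinct (lI @ lJ)" "\<forall>j\<in>set (lI @ lJ). p j \<le> \<mu>" "(\<Sum>j\<in>set (lI @ lJ). p j) = 2 * \<mu>"
    and "set lI \<subseteq> I" "set lJ \<inter> I = {}"
  shows "length (filter (tag_vanishes_on I) (tag_list z p (lI @ lJ) \<mu>))
    = (\<Sum>l\<in>set lJ. z l) + (\<mu> - (\<Sum>l\<in>set lI. p l))"
proof -
  let ?LI = "rep_list p lI" and ?LJ = "rep_list p lJ"
  let ?L = "?LI @ ?LJ"
  have dist: "distinct lI" "distinct lJ" "set lI \<inter> set lJ = {}" using assms(1) by auto
  have lenI: "length ?LI = (\<Sum>l\<in>set lI. p l)" using length_rep_list dist(1) by blast
  have len: "length ?L = 2 * \<mu>" using length_rep_list assms(1,3) by (metis rep_list_append)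
  have LI: "set ?LI \<subseteq> I" and LJ: "set ?LJ \<inter> I = {}"
    using set_rep_list_subset assms(4,5) by blast+
  have coord: "length (filter (\<lambda>l. l \<notin> I) (rep_list z (lI @ lJ))) = (\<Sum>l\<in>set lJ. z l)"
  proof -
    have "{l \<in> set (lI @ lJ). l \<notin> I} = set lJ" using assms(4,5) by auto
    then show ?thesis using length_filter_rep_list[OF assms(1), of "\<lambda>l. l \<notin> I" z] by simp
  qed
  have "length (filter (\<lambda>(a,b). a \<notin> I \<and> b \<notin> I) (zip (take \<mu> ?L) (drop \<mu> ?L)))
      = \<mu> - length ?LI"
  proof (cases "\<mu> \<le> length ?LI")
    case True
    then have "take \<mu> ?L = take \<mu> ?LI" by simp
    moreover have "\<forall>x\<in>set (take \<mu> ?LI). \<not> x \<notin> I" using LI by (auto dest: in_set_takeD)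
    ultimately show ?thesis
      using length_filter_zip_left_false[of "take \<mu> ?LI" "\<lambda>x. x \<notin> I" "\<lambda>x. x \<notin> I" "drop \<mu> ?L"] True
      by simp
  next
    case False
    have "\<forall>x\<in>set (drop \<mu> ?L). x \<notin> I" using False LJ by (auto dest: in_set_dropD)
    then have zip: "length (filter (\<lambda>(a,b). a \<notin> I \<and> b \<notin> I) (zip (take \<mu> ?L) (drop \<mu> ?L)))
        = length (filter (\<lambda>x. x \<notin> I) (take \<mu> ?L))"
      using length_filter_zip_right_true[of "take \<mu> ?L" "drop \<mu> ?L" "\<lambda>x. x \<notin> I" "\<lambda>x. x \<notin> I"] len
      by simp
    have "filter (\<lambda>x. x \<notin> I) ?LI = []" using LI by (auto simp: filter_empty_conv)
    moreover have "filter (\<lambda>x. x \<notin> I) (take (\<mu> - length ?LI) ?LJ) = take (\<mu> - length ?LI) ?LJ"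
      using LJ by (auto intro!: filter_True dest: in_set_takeD)
    moreover have "take \<mu> ?L = ?LI @ take (\<mu> - length ?LI) ?LJ" using False by simp
    ultimately show ?thesis using zip False len by simp
  qed
  then show ?thesis using coord lenI
    unfolding tag_list_def by (simp add: filter_map comp_def tag_vanishes_on_def split_def)
qed

lemma exists_tag_list:
  fixes n d \<mu> :: nat and mm :: "nat \<Rightarrow> nat" and I :: "nat set"
  assumes mm_le: "\<forall>l\<le>n. mm l \<le> d" and \<mu>: "\<mu> \<le> d" and feasible: "(\<Sum>l\<le>n. mm l) + \<mu> \<le> n * d"
    and I: "I \<subseteq> {..n}"
  shows "\<exists>tags. length tags = d \<and> (\<forall>t\<in>set tags. tag_wf n t)
     \<and> (\<forall>j\<le>n. mm j \<le> length (filter (tag_vanishes_at j) tags))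
     \<and> length (filter (\<lambda>t. \<not> isl t) tags) = \<mu>
     \<and> length (filter (tag_vanishes_on I) tags) = d - (\<Sum>l\<in>I. d - mm l)"
proof -
  define J where "J = {..n} - I"
  define c where "c = (\<lambda>l. d - mm l)"
  have fin: "finite I" "finite J" using I finite_subset unfolding J_def by auto
  have IJ: "I \<union> J = {..n}" "I \<inter> J = {}" using I unfolding J_def by auto
  have "(\<Sum>l\<le>n. c l) + (\<Sum>l\<le>n. mm l) = (\<Sum>l\<le>n. d)"
    unfolding c_def sum.distrib[symmetric] using mm_le by (intro sum.cong) auto
  then have "d + \<mu> \<le> (\<Sum>l\<in>I \<union> J. c l)" using feasible IJ(1) by simp
  then obtain p z where pz: "\<forall>l\<in>I \<union> J. p l \<le> \<mu> \<and> z l + p l \<le> c l" "(\<Sum>l\<in>I \<union> J. p l) = 2 * \<mu>"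
      "(\<Sum>l\<in>I \<union> J. z l) + \<mu> = d" "(\<Sum>l\<in>J. z l) + (\<mu> - (\<Sum>l\<in>I. p l)) = d - (\<Sum>l\<in>I. c l)"
    using exists_hyperplane_counts[OF fin IJ(2), of c d \<mu>] \<mu> IJ(1) unfolding c_def by auto
  define lI where "lI = sorted_list_of_set I"
  define lJ where "lJ = sorted_list_of_set J"
  have js: "distinct (lI @ lJ)" "set (lI @ lJ) = I \<union> J" "set lI = I" "set lJ = J"
    using fin IJ(2) unfolding lI_def lJ_def by auto
  define tags where "tags = tag_list z p (lI @ lJ) \<mu>"
  have p: "\<forall>j\<in>set (lI @ lJ). p j \<le> \<mu>" "(\<Sum>j\<in>set (lI @ lJ). p j) = 2 * \<mu>" using pz js(2) by auto
  have "length tags = d" using length_tag_list[OF js(1) p(2)] pz(3) js(2) unfolding tags_def by simp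
  moreover have "\<forall>t\<in>set tags. tag_wf n t"
    using tag_wf_tag_list[OF js(1) p] js(2) IJ(1) unfolding tags_def by blast
  moreover have "mm j \<le> length (filter (tag_vanishes_at j) tags)" if j: "j \<le> n" for j
  proof -
    have "j \<in> I \<union> J" using j IJ(1) by auto
    then have "j \<in> set (lI @ lJ)" using js(2) by simp
    from length_filter_tag_vanishes_at[OF js(1) p this, of z]
    have "length (filter (tag_vanishes_at j) tags) = (\<Sum>l\<in>I \<union> J. z l) - z j + (\<mu> - p j)"
      by (simp only: js(2) tags_def)
    moreover have "z j + p j \<le> c j" "p j \<le> \<mu>" "z j \<le> (\<Sum>l\<in>I \<union> J. z l)"
      using pz(1) \<open>j \<in> I \<union> J\<close> fin by (auto intro: member_le_sum)
    ultimately show ?thesis using pz(3) mm_le[rule_format, OF j] unfolding c_def by linarith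
  qed
  moreover have "length (filter (\<lambda>t. \<not> isl t) tags) = \<mu>"
    using length_filter_pair_tags[OF js(1) p(2)] unfolding tags_def .
  moreover have "length (filter (tag_vanishes_on I) tags) = d - (\<Sum>l\<in>I. d - mm l)"
  proof -
    have "set lI \<subseteq> I" "set lJ \<inter> I = {}" using js(3,4) IJ(2) by auto
    from length_filter_tag_vanishes_on[OF js(1) p this, of z]
    show ?thesis using js(3,4) pz(4) unfolding tags_def c_def by simp
  qed
  ultimately show ?thesis by blast
qed

section \<open>The extremal product of hyperplanes\<close>

definition pair_form :: "(nat \<Rightarrow> complex) \<Rightarrow> nat \<Rightarrow> nat \<Rightarrow> nat \<Rightarrow> complex" where
  "pair_form w a b = (\<lambda>i. if i = a then w b else if i = b then - w a else 0)"

lemma lin_form_pair_form: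
  assumes "a \<le> n" "b \<le> n" "a \<noteq> b"
  shows "lin_form n (pair_form w a b) x = w b * x a - w a * x b"
proof -
  have "lin_form n (pair_form w a b) x = (\<Sum>i\<le>n. (if i = a then w b * x a else 0) + (if i = b then - w a * x b else 0))"
    unfolding lin_form_def pair_form_def by (intro sum.cong) (use assms in auto)
  also have "\<dots> = w b * x a - w a * x b" using assms by (simp add: sum.distrib)
  finally show ?thesis .
qed

definition tag_form :: "(nat \<Rightarrow> complex) \<Rightarrow> nat + nat \<times> nat \<Rightarrow> nat \<Rightarrow> complex" where
  "tag_form w t = (case t of Inl l \<Rightarrow> unit_vec l | Inr (a,b) \<Rightarrow> pair_form w a b)"

lemma tag_form_unit_vec:
  assumes "tag_wf n t" "j \<le> n" "\<forall>l\<le>n. w l \<noteq> 0"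
  shows "lin_form n (tag_form w t) (unit_vec j) = 0 \<longleftrightarrow> tag_vanishes_at j t"
proof (cases t)
  case (Inl l)
  then have l: "l \<le> n" using assms unfolding tag_wf_def by simp
  have "lin_form n (tag_form w t) (unit_vec j) = unit_vec j l" using Inl l unfolding tag_form_def by (simp add: lin_form_unit_vec)
  then show ?thesis using Inl unfolding tag_vanishes_at_def unit_vec_def by auto
next
  case (Inr ab)
  obtain a b where ab: "ab = (a,b)" by (cases ab)
  have v: "a \<le> n" "b \<le> n" "a \<noteq> b" using assms Inr ab unfolding tag_wf_def by auto
  show ?thesis using assms Inr ab v unfolding tag_form_def tag_vanishes_at_def by (auto simp: lin_form_pair_form unit_vec_def)
qed

lemma tag_form_at_w:
  assumes "tag_wf n t"
  shows "lin_form n (tag_form w t) w = 0 \<longleftrightarrow> (\<not> isl t \<or> w (projl t) = 0)"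
proof (cases t)
  case (Inl l)
  then show ?thesis using assms unfolding tag_form_def tag_wf_def by (auto simp: lin_form_unit_vec)
next
  case (Inr ab)
  obtain a b where ab: "ab = (a,b)" by (cases ab)
  have v: "a \<le> n" "b \<le> n" "a \<noteq> b" using assms Inr ab unfolding tag_wf_def by auto
  show ?thesis using Inr ab v unfolding tag_form_def by (simp add: lin_form_pair_form mult.commute)
qed

lemma tag_form_on_line:
  assumes "tag_wf n t" "\<forall>l\<le>n. w l \<noteq> 0"
    and q: "q = (\<lambda>i. if i \<in> I then of_nat (Suc i) * w i else 0)"
    and y: "y = (\<lambda>i. if i \<notin> I then of_nat (Suc i) * w i else 0)"
  shows "(lin_form n (tag_form w t) q = 0 \<longleftrightarrow> tag_vanishes_on I t) \<and> (lin_form n (tag_form w t) q \<noteq> 0 \<or> lin_form n (tag_form w t) y \<noteq> 0)"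
proof (cases t)
  case (Inl l)
  then have l: "l \<le> n" using assms unfolding tag_wf_def by auto
  show ?thesis using Inl l assms of_nat_neq_0[where 'a=complex, of l] unfolding tag_form_def tag_vanishes_on_def by (auto simp: lin_form_unit_vec)
next
  case (Inr ab)
  obtain a b where ab: "ab = (a,b)" by (cases ab)
  have v: "a \<le> n" "b \<le> n" "a \<noteq> b" using assms Inr ab unfolding tag_wf_def by auto
  have wa: "w a \<noteq> 0" "w b \<noteq> 0" using v assms by auto
  have df: "(of_nat (Suc a) :: complex) - of_nat (Suc b) \<noteq> 0" using v by simp
  have e1: "w b * (of_nat (Suc a) * w a) - w a * (of_nat (Suc b) * w b) = w a * w b * (of_nat (Suc a) - of_nat (Suc b))"
    by (simp add: algebra_simps)
  have nz1: "w b * (of_nat (Suc a) * w a) - w a * (of_nat (Suc b) * w b) \<noteq> 0"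
    unfolding e1 using wa df by simp
  show ?thesis
    using Inr ab v wa nz1 of_nat_neq_0[where 'a=complex, of a] of_nat_neq_0[where 'a=complex, of b] unfolding tag_form_def tag_vanishes_on_def q y
    by (auto simp: lin_form_pair_form)
qed

lemma tag_form_at_generic:
  assumes "tag_wf n t" "\<forall>l\<le>n. w l \<noteq> 0"
  shows "lin_form n (tag_form w t) (\<lambda>i. of_nat (Suc i) * w i) \<noteq> 0"
proof (cases t)
  case (Inl l)
  then have l: "l \<le> n" using assms unfolding tag_wf_def by auto
  show ?thesis using Inl l assms of_nat_neq_0[where 'a=complex, of l] unfolding tag_form_def by (auto simp: lin_form_unit_vec)
next
  case (Inr ab)
  obtain a b where ab: "ab = (a,b)" by (cases ab)
  have v: "a \<le> n" "b \<le> n" "a \<noteq> b" using assms Inr ab unfolding tag_wf_def by auto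
  have wa: "w a \<noteq> 0" "w b \<noteq> 0" using v assms by auto
  have df: "(of_nat (Suc a) :: complex) - of_nat (Suc b) \<noteq> 0" using v by simp
  have e1: "w b * (of_nat (Suc a) * w a) - w a * (of_nat (Suc b) * w b) = w a * w b * (of_nat (Suc a) - of_nat (Suc b))"
    by (simp add: algebra_simps)
  have nz1: "w b * (of_nat (Suc a) * w a) - w a * (of_nat (Suc b) * w b) \<noteq> 0"
    unfolding e1 using wa df by simp
  show ?thesis using Inr ab v nz1 unfolding tag_form_def by (simp add: lin_form_pair_form)
qed

lemma length_filter_lin_forms_tag_forms:
  "(\<forall>t\<in>set tags. P (tag_form w t) \<longleftrightarrow> Q t) \<Longrightarrow>
    length (filter P (map (tag_form w) tags)) = length (filter Q tags)"
  by (simp add: filter_map comp_def cong: filter_cong)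

lemma vanishes_to_order_prod_tag_forms_unit_vec:
  assumes "\<forall>t\<in>set tags. tag_wf n t" "\<forall>l\<le>n. w l \<noteq> 0" "j \<le> n"
  shows "vanishes_to_order (prod_lin_forms n (map (tag_form w) tags)) (unit_vec j)
    (length (filter (tag_vanishes_at j) tags))"
proof -
  have "length (filter (\<lambda>a. lin_form n a (unit_vec j) = 0) (map (tag_form w) tags))
      = length (filter (tag_vanishes_at j) tags)"
    by (rule length_filter_lin_forms_tag_forms) (use assms tag_form_unit_vec in blast)
  then show ?thesis using vanishes_to_order_prod_lin_forms[of n "map (tag_form w) tags" "unit_vec j"] by simp
qed

lemma vanishes_to_order_prod_tag_forms_at_w:
  assumes "\<forall>t\<in>set tags. tag_wf n t"
  shows "vanishes_to_order (prod_lin_forms n (map (tag_form w) tags)) w (length (filter (\<lambda>t. \<not> isl t) tags))"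
proof -
  have "length (filter (\<lambda>a. lin_form n a w = 0) (map (tag_form w) tags))
      = length (filter (\<lambda>t. \<not> isl t \<or> w (projl t) = 0) tags)"
    by (rule length_filter_lin_forms_tag_forms) (use assms tag_form_at_w in blast)
  moreover have "length (filter (\<lambda>t. \<not> isl t) tags) \<le> length (filter (\<lambda>t. \<not> isl t \<or> w (projl t) = 0) tags)"
    by (rule length_filter_mono) auto
  ultimately have "length (filter (\<lambda>t. \<not> isl t) tags)
      \<le> length (filter (\<lambda>a. lin_form n a w = 0) (map (tag_form w) tags))" by simp
  then show ?thesis by (rule vanishes_to_order_mono[OF vanishes_to_order_prod_lin_forms])
qed

lemma prod_tag_forms_nonzero:
  assumes "\<forall>t\<in>set tags. tag_wf n t" "\<forall>l\<le>n. w l \<noteq> 0"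
  shows "prod_lin_forms n (map (tag_form w) tags) (\<lambda>i. of_nat (Suc i) * w i) \<noteq> 0"
  using tag_form_at_generic assms unfolding prod_lin_forms_def by (auto simp: prod_list_zero_iff)

text \<open>Along the line \<open>q + t y\<close>, which meets \<open>L\<^sub>I\<close> only at \<open>q\<close>, the product of the tag forms vanishes to
  order exactly the number of tag hyperplanes containing \<open>L\<^sub>I\<close>.\<close>

lemma not_vanishes_to_order_prod_tag_forms:
  fixes I :: "nat set"
  assumes "\<forall>t\<in>set tags. tag_wf n t" "\<forall>l\<le>n. w l \<noteq> 0"
  defines "q \<equiv> (\<lambda>i. if i \<in> I then of_nat (Suc i) * w i else 0)"
  shows "\<not> vanishes_to_order (prod_lin_forms n (map (tag_form w) tags)) q
    (Suc (length (filter (tag_vanishes_on I) tags)))"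
proof -
  define y where "y = (\<lambda>i. if i \<notin> I then of_nat (Suc i) * w i else (0::complex))"
  let ?ls = "map (tag_form w) tags"
  have facts: "\<forall>t\<in>set tags. (lin_form n (tag_form w t) q = 0 \<longleftrightarrow> tag_vanishes_on I t)
      \<and> (lin_form n (tag_form w t) q \<noteq> 0 \<or> lin_form n (tag_form w t) y \<noteq> 0)"
    using tag_form_on_line[OF _ assms(2) meta_eq_to_obj_eq[OF q_def] y_def] assms(1) by blast
  then have "\<forall>a\<in>set ?ls. lin_form n a q \<noteq> 0 \<or> lin_form n a y \<noteq> 0" by auto
  from prod_lin_forms_line_exact_order[OF this] obtain R where R: "poly R 0 \<noteq> 0"
    "\<forall>t. prod_lin_forms n ?ls (\<lambda>i. q i + t * y i) = t ^ length (filter (\<lambda>a. lin_form n a q = 0) ?ls) * poly R t"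
    by blast
  moreover have "length (filter (\<lambda>a. lin_form n a q = 0) ?ls) = length (filter (tag_vanishes_on I) tags)"
    by (rule length_filter_lin_forms_tag_forms) (use facts in blast)
  ultimately show ?thesis using not_vanishes_to_order_Suc[OF R(1)] by simp
qed

lemma exists_form_exact_on_coord_span:
  assumes w: "\<forall>l\<le>n. w l \<noteq> 0" and feasible: "(\<forall>l\<le>n. mm l \<le> d) \<and> \<mu> \<le> d \<and> (\<Sum>l\<le>n. mm l) + \<mu> \<le> n * d"
    and I: "I \<subseteq> {..n}" "I \<noteq> {}"
  shows "\<exists>c. (\<forall>l\<le>n. mult_ge n d c (unit_vec l) (mm l)) \<and> mult_ge n d c w \<mu> \<and> (\<exists>x. form_eval n d c x \<noteq> 0)
    \<and> (\<exists>q. (\<forall>i\<le>n. i \<notin> I \<longrightarrow> q i = 0) \<and> (\<exists>i\<in>I. q i \<noteq> 0)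
        \<and> \<not> mult_ge n d c q (Suc (d - (\<Sum>l\<in>I. d - mm l))))"
proof -
  obtain tags where tags: "length tags = d" "\<forall>t\<in>set tags. tag_wf n t"
      "\<forall>j\<le>n. mm j \<le> length (filter (tag_vanishes_at j) tags)"
      "length (filter (\<lambda>t. \<not> isl t) tags) = \<mu>"
      "length (filter (tag_vanishes_on I) tags) = d - (\<Sum>l\<in>I. d - mm l)"
    using exists_tag_list[of n mm d \<mu> I] feasible I(1) by blast
  let ?P = "prod_lin_forms n (map (tag_form w) tags)"
  have "is_form n d ?P" using is_form_prod_lin_forms[of n "map (tag_form w) tags"] tags(1) by simp
  then obtain c where c: "\<forall>x. ?P x = form_eval n d c x" unfolding is_form_def by blast
  then have P: "form_eval n d c = ?P" by auto
  define q where "q = (\<lambda>i. if i \<in> I then of_nat (Suc i) * w i else (0::complex))"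
  have "\<forall>l\<le>n. mult_ge n d c (unit_vec l) (mm l)"
    using vanishes_to_order_prod_tag_forms_unit_vec[OF tags(2) w] tags(3) vanishes_to_order_mono
    unfolding mult_ge_iff_vanishes_to_order P by blast
  moreover have "mult_ge n d c w \<mu>"
    using vanishes_to_order_prod_tag_forms_at_w[OF tags(2)] tags(4)
    unfolding mult_ge_iff_vanishes_to_order P by simp
  moreover have "form_eval n d c (\<lambda>i. of_nat (Suc i) * w i) \<noteq> 0"
    using prod_tag_forms_nonzero[OF tags(2) w] P by simp
  moreover have "\<not> mult_ge n d c q (Suc (d - (\<Sum>l\<in>I. d - mm l)))"
    using not_vanishes_to_order_prod_tag_forms[OF tags(2) w, where I = I] tags(5)
    unfolding mult_ge_iff_vanishes_to_order P q_def by simp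
  moreover have "\<forall>i\<le>n. i \<notin> I \<longrightarrow> q i = 0" "\<exists>i\<in>I. q i \<noteq> 0"
    using I w unfolding q_def by (auto simp del: of_nat_Suc)
  ultimately show ?thesis by blast
qed

lemma mult_ge_on_image_coord_span:
  assumes AB: "mat_mult_id n A B" and mults: "\<forall>l\<le>n. mult_ge n d c (lin_map n A (unit_vec l)) (mm l)"
    and "I \<subseteq> {..n}" "\<forall>i\<le>n. i \<notin> I \<longrightarrow> x i = 0"
  shows "mult_ge n d c (lin_map n A x) (d - (\<Sum>l\<in>I. d - mm l))"
proof -
  obtain c' where c': "\<forall>x. form_eval n d c' x = form_eval n d c (lin_map n A x)" using exists_pullback by blast
  have "\<forall>l\<le>n. mult_ge n d c' (unit_vec l) (mm l)" using mults mult_ge_pullback_iff[OF AB c'] by blast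
  then show ?thesis using mult_ge_on_coord_span assms(3,4) mult_ge_pullback_iff[OF AB c'] by blast
qed

lemma exists_form_exact_on_image_coord_span:
  assumes AB: "mat_mult_id n A B" and BA: "mat_mult_id n B A" and w: "\<forall>l\<le>n. w l \<noteq> 0"
    and I: "I \<subseteq> {..n}" "I \<noteq> {}"
    and nonempty: "\<exists>c. (\<forall>l\<le>n. mult_ge n d c (lin_map n A (unit_vec l)) (mm l)) \<and> mult_ge n d c (lin_map n A w) \<mu>
      \<and> hs_nonzero n d c"
  shows "\<exists>c. (\<forall>l\<le>n. mult_ge n d c (lin_map n A (unit_vec l)) (mm l)) \<and> mult_ge n d c (lin_map n A w) \<mu>
      \<and> hs_nonzero n d c \<and> (\<exists>x. (\<forall>i\<le>n. i \<notin> I \<longrightarrow> x i = 0) \<and> (\<exists>i\<in>I. x i \<noteq> 0)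
        \<and> \<not> mult_ge n d c (lin_map n A x) (Suc (d - (\<Sum>l\<in>I. d - mm l))))"
proof -
  obtain c0 where c0: "\<forall>l\<le>n. mult_ge n d c0 (lin_map n A (unit_vec l)) (mm l)"
      "mult_ge n d c0 (lin_map n A w) \<mu>" "hs_nonzero n d c0"
    using nonempty by blast
  obtain c0' where c0': "\<forall>x. form_eval n d c0' x = form_eval n d c0 (lin_map n A x)"
    using exists_pullback by blast
  obtain x0 where "form_eval n d c0 x0 \<noteq> 0" using hs_nonzeroD[OF c0(3)] by blast
  then have "form_eval n d c0' (lin_map n B x0) \<noteq> 0"
    using c0' form_eval_cong[of n "lin_map n A (lin_map n B x0)" x0] lin_map_inverse[OF AB] by simp
  then have "(\<forall>l\<le>n. mm l \<le> d) \<and> \<mu> \<le> d \<and> (\<Sum>l\<le>n. mm l) + \<mu> \<le> n * d"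
    using coord_mults_feasible[of n d c0' mm w \<mu>] c0(1,2) w hs_nonzeroI mult_ge_pullback_iff[OF AB c0'] by blast
  then obtain c1' x1 q where c1': "\<forall>l\<le>n. mult_ge n d c1' (unit_vec l) (mm l)" "mult_ge n d c1' w \<mu>"
      "form_eval n d c1' x1 \<noteq> 0" "\<forall>i\<le>n. i \<notin> I \<longrightarrow> q i = 0" "\<exists>i\<in>I. q i \<noteq> 0"
      "\<not> mult_ge n d c1' q (Suc (d - (\<Sum>l\<in>I. d - mm l)))"
    using exists_form_exact_on_coord_span[OF w _ I] by blast
  obtain c1 where c1: "\<forall>x. form_eval n d c1 x = form_eval n d c1' (lin_map n B x)"
    using exists_pullback by blast
  have pull: "\<forall>x. form_eval n d c1' x = form_eval n d c1 (lin_map n A x)"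
  proof
    fix x
    have "form_eval n d c1' x = form_eval n d c1' (lin_map n B (lin_map n A x))"
      using lin_map_inverse[OF BA] by (intro form_eval_cong) simp
    then show "form_eval n d c1' x = form_eval n d c1 (lin_map n A x)" using c1 by simp
  qed
  show ?thesis
  proof (intro exI conjI)
    show "\<forall>l\<le>n. mult_ge n d c1 (lin_map n A (unit_vec l)) (mm l)" "mult_ge n d c1 (lin_map n A w) \<mu>"
      "\<not> mult_ge n d c1 (lin_map n A q) (Suc (d - (\<Sum>l\<in>I. d - mm l)))"
      using c1' mult_ge_pullback_iff[OF AB pull] by blast+
    show "hs_nonzero n d c1" using hs_nonzeroI[of n d c1 "lin_map n A x1"] c1'(3) pull by simp
  qed (use c1' in auto)
qed

section \<open>Reduction to coordinates\<close>

lemma lin_map_eq_sum_columns: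
  assumes "\<forall>i\<le>n. i \<notin> I' \<longrightarrow> x i = 0" "I' \<subseteq> {..n}" "j \<le> n"
  shows "lin_map n A x j = (\<Sum>l\<in>I'. A j l * x l)"
  unfolding lin_map_def lin_form_def using assms by (intro sum.mono_neutral_right) auto

lemma span_pts_to_coords:
  assumes col: "\<forall>l\<in>I'. \<forall>j\<le>n. A j l = p (\<pi> l) j" and bij: "bij_betw \<pi> I' I" and I': "I' \<subseteq> {..n}"
    and q: "q \<in> span_pts n p I"
  obtains x where "\<forall>i\<le>n. i \<notin> I' \<longrightarrow> x i = 0" "\<forall>j\<le>n. lin_map n A x j = q j"
proof -
  obtain a where a: "\<forall>j\<le>n. q j = (\<Sum>i\<in>I. a i * p i j)" using q unfolding span_pts_def by blast
  define x where "x = (\<lambda>l. if l \<in> I' then a (\<pi> l) else 0)"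
  have "lin_map n A x j = q j" if j: "j \<le> n" for j
  proof -
    have "lin_map n A x j = (\<Sum>l\<in>I'. a (\<pi> l) * p (\<pi> l) j)"
      using lin_map_eq_sum_columns[of n I' x, OF _ I' j] col j unfolding x_def by (simp add: mult.commute)
    also have "\<dots> = (\<Sum>i\<in>I. a i * p i j)" using sum.reindex_bij_betw[OF bij, of "\<lambda>i. a i * p i j"] .
    finally show ?thesis using a j by simp
  qed
  moreover have "\<forall>i\<le>n. i \<notin> I' \<longrightarrow> x i = 0" unfolding x_def by simp
  ultimately show thesis using that by blast
qed

lemma lin_map_coords_in_span_pts:
  assumes BA: "mat_mult_id n B A" and col: "\<forall>l\<in>I'. \<forall>j\<le>n. A j l = p (\<pi> l) j"
    and bij: "bij_betw \<pi> I' I" and I': "I' \<subseteq> {..n}"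
    and x: "\<forall>i\<le>n. i \<notin> I' \<longrightarrow> x i = 0" "\<exists>i\<in>I'. x i \<noteq> 0"
  shows "lin_map n A x \<in> span_pts n p I"
proof -
  define a where "a = (\<lambda>i. x (inv_into I' \<pi> i))"
  have "lin_map n A x j = (\<Sum>i\<in>I. a i * p i j)" if j: "j \<le> n" for j
  proof -
    have "(\<Sum>i\<in>I. a i * p i j) = (\<Sum>l\<in>I'. a (\<pi> l) * p (\<pi> l) j)"
      using sum.reindex_bij_betw[OF bij, of "\<lambda>i. a i * p i j"] by simp
    also have "\<dots> = (\<Sum>l\<in>I'. A j l * x l)"
      using col j bij unfolding a_def by (intro sum.cong) (auto simp: bij_betw_def)
    finally show ?thesis using lin_map_eq_sum_columns[OF x(1) I' j] by simp
  qed
  moreover have "\<exists>j\<le>n. lin_map n A x j \<noteq> 0"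
  proof (rule ccontr)
    assume "\<not> (\<exists>j\<le>n. lin_map n A x j \<noteq> 0)"
    then have "lin_map n B (lin_map n A x) = (\<lambda>_. 0)"
      unfolding lin_map_def lin_form_def by simp
    moreover obtain i where "i \<in> I'" "x i \<noteq> 0" using x(2) by blast
    ultimately show False using lin_map_inverse[OF BA] I' by (metis subsetD atMost_iff)
  qed
  ultimately show ?thesis unfolding span_pts_def by blast
qed

lemma base_mult_exact_in_coords:
  assumes AB: "mat_mult_id n A B" and BA: "mat_mult_id n B A" and w: "\<forall>l\<le>n. w l \<noteq> 0"
    and I': "I' \<subseteq> {..n}" "I' \<noteq> {}" and bij: "bij_betw \<pi> I' I"
    and col: "\<forall>l\<in>I'. \<forall>j\<le>n. A j l = p (\<pi> l) j"
    and sys: "\<And>c. c \<in> linsys n d s m p \<longleftrightarrow>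
      (\<forall>l\<le>n. mult_ge n d c (lin_map n A (unit_vec l)) (mm l)) \<and> mult_ge n d c (lin_map n A w) \<mu>"
    and nonempty: "\<exists>c\<in>linsys n d s m p. hs_nonzero n d c"
  shows "base_mult_exact n d s m p I (d - (\<Sum>l\<in>I'. d - mm l))"
proof -
  let ?k = "d - (\<Sum>l\<in>I'. d - mm l)"
  have "mult_along n d c (span_pts n p I) ?k" if c: "c \<in> linsys n d s m p" for c
    unfolding mult_along_def
  proof
    fix q assume "q \<in> span_pts n p I"
    then obtain x where x: "\<forall>i\<le>n. i \<notin> I' \<longrightarrow> x i = 0" "\<forall>j\<le>n. lin_map n A x j = q j"
      using span_pts_to_coords[OF col bij I'(1)] by blast
    have "mult_ge n d c (lin_map n A x) ?k"
      using mult_ge_on_image_coord_span[OF AB _ I'(1) x(1)] c sys by blast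
    then show "mult_ge n d c q ?k" using mult_ge_cong x(2) by metis
  qed
  moreover obtain c x where c: "\<forall>l\<le>n. mult_ge n d c (lin_map n A (unit_vec l)) (mm l)"
      "mult_ge n d c (lin_map n A w) \<mu>" "hs_nonzero n d c"
      and x: "\<forall>i\<le>n. i \<notin> I' \<longrightarrow> x i = 0" "\<exists>i\<in>I'. x i \<noteq> 0"
      "\<not> mult_ge n d c (lin_map n A x) (Suc ?k)"
    using exists_form_exact_on_image_coord_span[OF AB BA w I'] nonempty sys by blast
  moreover have "lin_map n A x \<in> span_pts n p I"
    by (rule lin_map_coords_in_span_pts[OF BA col bij I'(1) x(1,2)])
  ultimately show ?thesis
    unfolding base_mult_exact_def mult_along_def using sys by blast
qed

lemma kI_eq_d_minus_codefects:
  assumes "finite I" "card I = r + 1" "\<forall>i\<in>I. m i \<le> d"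
  shows "kI d m r I = d - (\<Sum>i\<in>I. d - m i)"
proof -
  have "int (\<Sum>i\<in>I. d - m i) = (\<Sum>i\<in>I. int d - int (m i))"
    using assms(3) by (simp add: of_nat_diff)
  also have "\<dots> = int (card I) * int d - int (\<Sum>i\<in>I. m i)" by (simp add: sum_subtractf)
  finally have e: "int (\<Sum>i\<in>I. d - m i) = (int r + 1) * int d - int (\<Sum>i\<in>I. m i)" using assms(2) by simp
  define X where "X = (\<Sum>i\<in>I. d - m i)"
  define S where "S = (\<Sum>i\<in>I. m i)"
  have e2: "int X = (int r + 1) * int d - int S" using e unfolding X_def S_def .
  have "nat (int S - int r * int d) = d - X"
  proof (cases "X \<le> d")
    case True
    then have "int S - int r * int d = int (d - X)" using e2 by (simp add: of_nat_diff algebra_simps)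
    then show ?thesis by simp
  next
    case False then show ?thesis using e2 by (simp add: algebra_simps)
  qed
  then show ?thesis unfolding kI_def X_def S_def .
qed

lemma mult_le_degree_if_nonempty:
  assumes "c \<in> linsys n d s m p" "hs_nonzero n d c" "i \<in> {1..s}"
  shows "m i \<le> d"
proof (rule ccontr)
  assume "\<not> m i \<le> d"
  moreover have "mult_ge n d c (p i) (m i)" using assms unfolding linsys_def by blast
  ultimately have "\<forall>z. form_eval n d c z = 0" using form_eval_eq_0_if_mult_gt_degree by (metis not_le)
  then show False using hs_nonzeroD[OF assms(2)] by blast
qed

text \<open>The general reduction: \<open>p\<^sub>\<pi>\<^sub>l\<close> is the \<open>l\<close>-th column of \<open>A\<close> whenever \<open>\<pi> l\<close> is the index of a point
  (other columns carry no condition), and the remaining point \<open>p\<^sub>i\<^sub>e\<close>, if any, is \<open>A w\<close>.\<close>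

lemma linsys_iff_in_point_basis:
  assumes cols: "\<forall>l\<le>n. \<pi> l \<in> {1..s} \<longrightarrow> (\<forall>j\<le>n. A j l = p (\<pi> l) j)"
    and extra: "\<mu> = 0 \<or> (ie \<in> {1..s} \<and> (\<forall>j\<le>n. lin_map n A w j = p ie j) \<and> \<mu> = m ie)"
    and cover: "\<forall>i\<in>{1..s}. i \<in> \<pi> ` {..n} \<or> (i = ie \<and> (\<forall>j\<le>n. lin_map n A w j = p i j) \<and> \<mu> = m i)"
  shows "c \<in> linsys n d s m p \<longleftrightarrow>
    (\<forall>l\<le>n. mult_ge n d c (lin_map n A (unit_vec l)) (if \<pi> l \<in> {1..s} then m (\<pi> l) else 0))
    \<and> mult_ge n d c (lin_map n A w) \<mu>"
proof
  assume "c \<in> linsys n d s m p"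
  then have pts: "\<forall>i\<in>{1..s}. mult_ge n d c (p i) (m i)" unfolding linsys_def by blast
  have "mult_ge n d c (lin_map n A (unit_vec l)) (if \<pi> l \<in> {1..s} then m (\<pi> l) else 0)" if l: "l \<le> n" for l
    using pts cols l lin_map_unit_vec[OF l, of A] mult_ge_cong[of n "lin_map n A (unit_vec l)"] mult_ge_0
    by (cases "\<pi> l \<in> {1..s}") auto
  moreover have "mult_ge n d c (lin_map n A w) \<mu>"
    using extra pts mult_ge_cong[of n "lin_map n A w"] mult_ge_0 by metis
  ultimately show "(\<forall>l\<le>n. mult_ge n d c (lin_map n A (unit_vec l)) (if \<pi> l \<in> {1..s} then m (\<pi> l) else 0))
    \<and> mult_ge n d c (lin_map n A w) \<mu>"
    by blast
next
  assume h: "(\<forall>l\<le>n. mult_ge n d c (lin_map n A (unit_vec l)) (if \<pi> l \<in> {1..s} then m (\<pi> l) else 0))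
    \<and> mult_ge n d c (lin_map n A w) \<mu>"
  have "mult_ge n d c (p i) (m i)" if i: "i \<in> {1..s}" for i
  proof (cases "i \<in> \<pi> ` {..n}")
    case True
    then obtain l where l: "l \<le> n" "\<pi> l = i" by blast
    then show ?thesis using h cols i lin_map_unit_vec[OF l(1), of A] mult_ge_cong[of n "lin_map n A (unit_vec l)"]
      by auto
  next
    case False
    then show ?thesis using cover i h mult_ge_cong[of n "lin_map n A w"] by metis
  qed
  then show "c \<in> linsys n d s m p" unfolding linsys_def by blast
qed

lemma base_mult_exact_in_point_basis:
  assumes AB: "mat_mult_id n A B" and BA: "mat_mult_id n B A" and w: "\<forall>l\<le>n. w l \<noteq> 0"
    and inj: "inj_on \<pi> {..n}" and cols: "\<forall>l\<le>n. \<pi> l \<in> {1..s} \<longrightarrow> (\<forall>j\<le>n. A j l = p (\<pi> l) j)"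
    and extra: "\<mu> = 0 \<or> (ie \<in> {1..s} \<and> (\<forall>j\<le>n. lin_map n A w j = p ie j) \<and> \<mu> = m ie)"
    and cover: "\<forall>i\<in>{1..s}. i \<in> \<pi> ` {..n} \<or> (i = ie \<and> (\<forall>j\<le>n. lin_map n A w j = p i j) \<and> \<mu> = m i)"
    and nonempty: "\<exists>c\<in>linsys n d s m p. hs_nonzero n d c"
    and I: "I \<subseteq> {1..s}" "I \<subseteq> \<pi> ` {..n}" "card I = r + 1"
  shows "base_mult_exact n d s m p I (kI d m r I)"
proof -
  define mm where "mm = (\<lambda>l. if \<pi> l \<in> {1..s} then m (\<pi> l) else 0)"
  define I' where "I' = {l \<in> {..n}. \<pi> l \<in> I}"
  have bij: "bij_betw \<pi> I' I"
    unfolding I'_def using I(2) inj by (auto simp: bij_betw_def inj_on_def)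
  have "I \<noteq> {}" using I(3) by auto
  then have I': "I' \<subseteq> {..n}" "I' \<noteq> {}" using bij unfolding I'_def bij_betw_def by auto
  have col: "\<forall>l\<in>I'. \<forall>j\<le>n. A j l = p (\<pi> l) j" using cols I(1) unfolding I'_def by auto
  have sys: "c \<in> linsys n d s m p \<longleftrightarrow>
      (\<forall>l\<le>n. mult_ge n d c (lin_map n A (unit_vec l)) (mm l)) \<and> mult_ge n d c (lin_map n A w) \<mu>" for c
    unfolding mm_def by (rule linsys_iff_in_point_basis[OF cols extra cover])
  have "\<forall>i\<in>I. m i \<le> d" using nonempty mult_le_degree_if_nonempty I(1) by blast
  moreover have "(\<Sum>l\<in>I'. d - mm l) = (\<Sum>l\<in>I'. d - m (\<pi> l))"
    using I(1) unfolding mm_def I'_def by (intro sum.cong) auto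
  then have "(\<Sum>l\<in>I'. d - mm l) = (\<Sum>i\<in>I. d - m i)"
    using sum.reindex_bij_betw[OF bij, of "\<lambda>i. d - m i"] by simp
  ultimately have "kI d m r I = d - (\<Sum>l\<in>I'. d - mm l)"
    using kI_eq_d_minus_codefects I finite_subset[OF I(1)] by simp
  then show ?thesis using base_mult_exact_in_coords[OF AB BA w I' bij col sys nonempty] by simp
qed

section \<open>Polynomial conditions on the points\<close>

definition poly_fun :: "'v set \<Rightarrow> (('v \<Rightarrow> complex) \<Rightarrow> complex) \<Rightarrow> bool" where
  "poly_fun V F \<longleftrightarrow> (\<exists>D g. (\<forall>\<alpha>. g \<alpha> \<noteq> 0 \<longrightarrow> \<alpha> \<in> pmonos V D) \<and> (\<forall>y. F y = peval V D g y))"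

lemma finite_pmonos: "finite V \<Longrightarrow> finite (pmonos V D)"
proof -
  assume fV: "finite V"
  have "pmonos V D \<subseteq> {f. \<forall>x. (x\<in>V \<longrightarrow> f x \<in> {..D}) \<and> (x\<notin>V \<longrightarrow> f x = 0)}"
  proof
    fix \<alpha> assume a: "\<alpha> \<in> pmonos V D"
    have "\<forall>x\<in>V. \<alpha> x \<le> D"
    proof
      fix x assume "x \<in> V"
      then have "\<alpha> x \<le> (\<Sum>v\<in>V. \<alpha> v)" using fV by (intro member_le_sum) auto
      then show "\<alpha> x \<le> D" using a unfolding pmonos_def by simp
    qed
    then show "\<alpha> \<in> {f. \<forall>x. (x\<in>V \<longrightarrow> f x \<in> {..D}) \<and> (x\<notin>V \<longrightarrow> f x = 0)}"
      using a unfolding pmonos_def by auto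
  qed
  then show ?thesis using finite_set_of_finite_funs[OF fV, of "{..D}" 0] finite_subset by blast
qed

lemma pmonos_mono: "D \<le> D' \<Longrightarrow> pmonos V D \<subseteq> pmonos V D'"
  unfolding pmonos_def by auto

lemma peval_mono:
  assumes "finite V" "\<forall>\<alpha>. g \<alpha> \<noteq> 0 \<longrightarrow> \<alpha> \<in> pmonos V D" "D \<le> D'"
  shows "peval V D' g y = peval V D g y"
  unfolding peval_def
proof (rule sum.mono_neutral_right)
  show "finite (pmonos V D')" by (rule finite_pmonos[OF assms(1)])
  show "pmonos V D \<subseteq> pmonos V D'" by (rule pmonos_mono[OF assms(3)])
  show "\<forall>i\<in>pmonos V D' - pmonos V D. g i * (\<Prod>v\<in>V. y v ^ i v) = 0" using assms(2) by auto
qed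

lemma poly_fun_const: assumes "finite V" shows "poly_fun V (\<lambda>y. k)"
proof -
  have pm0: "pmonos V 0 = {\<lambda>_. 0}"
  proof
    show "pmonos V 0 \<subseteq> {\<lambda>_. 0}"
    proof
      fix \<alpha> assume a: "\<alpha> \<in> pmonos V 0"
      then have "\<forall>v\<in>V. \<alpha> v = 0" using assms unfolding pmonos_def by auto
      then show "\<alpha> \<in> {\<lambda>_. 0}" using a unfolding pmonos_def by (auto simp: fun_eq_iff)
    qed
    show "{\<lambda>_. 0} \<subseteq> pmonos V 0" unfolding pmonos_def by auto
  qed
  define g where "g = (\<lambda>\<alpha>::'a \<Rightarrow> nat. if \<alpha> = (\<lambda>_. 0) then k else 0)"
  have "\<forall>\<alpha>. g \<alpha> \<noteq> 0 \<longrightarrow> \<alpha> \<in> pmonos V 0" unfolding g_def pm0 by auto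
  moreover have "\<forall>y. k = peval V 0 g y" unfolding peval_def pm0 g_def by simp
  ultimately show ?thesis unfolding poly_fun_def by blast
qed

lemma poly_fun_var: assumes "finite V" "v \<in> V" shows "poly_fun V (\<lambda>y. y v)"
proof -
  define e where "e = (\<lambda>u. if u = v then 1 else (0::nat))"
  have eV: "e \<in> pmonos V 1" unfolding pmonos_def e_def using assms by (auto simp: sum.delta)
  define g where "g = (\<lambda>\<alpha>. if \<alpha> = e then (1::complex) else 0)"
  have "\<forall>\<alpha>. g \<alpha> \<noteq> 0 \<longrightarrow> \<alpha> \<in> pmonos V 1" unfolding g_def using eV by auto
  moreover have "\<forall>y. y v = peval V 1 g y"
  proof
    fix y :: "'a \<Rightarrow> complex"
    have "peval V 1 g y = (\<Sum>\<alpha>\<in>pmonos V 1. if \<alpha> = e then (\<Prod>u\<in>V. y u ^ \<alpha> u) else 0)"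
      unfolding peval_def g_def by (intro sum.cong) auto
    also have "\<dots> = (\<Prod>u\<in>V. y u ^ e u)"
      using eV finite_pmonos[OF assms(1)] by (simp add: sum.delta)
    also have "\<dots> = (\<Prod>u\<in>V. if u = v then y v else 1)" unfolding e_def by (intro prod.cong) auto
    also have "\<dots> = y v" using assms by simp
    finally show "y v = peval V 1 g y" by simp
  qed
  ultimately show ?thesis unfolding poly_fun_def by blast
qed

lemma poly_fun_add:
  assumes fV: "finite V" and "poly_fun V F1" "poly_fun V F2"
  shows "poly_fun V (\<lambda>y. F1 y + F2 y)"
proof -
  obtain D1 g1 where g1: "\<forall>\<alpha>. g1 \<alpha> \<noteq> 0 \<longrightarrow> \<alpha> \<in> pmonos V D1" "\<forall>y. F1 y = peval V D1 g1 y"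
    using assms(2) unfolding poly_fun_def by blast
  obtain D2 g2 where g2: "\<forall>\<alpha>. g2 \<alpha> \<noteq> 0 \<longrightarrow> \<alpha> \<in> pmonos V D2" "\<forall>y. F2 y = peval V D2 g2 y"
    using assms(3) unfolding poly_fun_def by blast
  define D where "D = max D1 D2"
  have s1: "\<forall>\<alpha>. g1 \<alpha> \<noteq> 0 \<longrightarrow> \<alpha> \<in> pmonos V D" using g1(1) pmonos_mono[of D1 D V] unfolding D_def by auto
  have s2: "\<forall>\<alpha>. g2 \<alpha> \<noteq> 0 \<longrightarrow> \<alpha> \<in> pmonos V D" using g2(1) pmonos_mono[of D2 D V] unfolding D_def by auto
  define g where "g = (\<lambda>\<alpha>. g1 \<alpha> + g2 \<alpha>)"
  have "\<forall>\<alpha>. g \<alpha> \<noteq> 0 \<longrightarrow> \<alpha> \<in> pmonos V D"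
  proof (intro allI impI)
    fix \<alpha> assume h: "g \<alpha> \<noteq> 0"
    show "\<alpha> \<in> pmonos V D"
    proof (cases "g1 \<alpha> = 0")
      case True then have "g2 \<alpha> \<noteq> 0" using h unfolding g_def by simp
      then show ?thesis using s2 by blast
    next
      case False then show ?thesis using s1 by blast
    qed
  qed
  moreover have "\<forall>y. F1 y + F2 y = peval V D g y"
  proof
    fix y
    have "F1 y = peval V D g1 y" using g1(2) peval_mono[OF fV g1(1), of D y] unfolding D_def by simp
    moreover have "F2 y = peval V D g2 y" using g2(2) peval_mono[OF fV g2(1), of D y] unfolding D_def by simp
    ultimately show "F1 y + F2 y = peval V D g y"
      unfolding peval_def g_def by (simp add: sum.distrib distrib_right)
  qed
  ultimately show ?thesis unfolding poly_fun_def by blast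
qed

lemma poly_fun_mult:
  assumes fV: "finite V" and "poly_fun V F1" "poly_fun V F2"
  shows "poly_fun V (\<lambda>y. F1 y * F2 y)"
proof -
  obtain D1 g1 where g1: "\<forall>\<alpha>. g1 \<alpha> \<noteq> 0 \<longrightarrow> \<alpha> \<in> pmonos V D1" "\<forall>y. F1 y = peval V D1 g1 y"
    using assms(2) unfolding poly_fun_def by blast
  obtain D2 g2 where g2: "\<forall>\<alpha>. g2 \<alpha> \<noteq> 0 \<longrightarrow> \<alpha> \<in> pmonos V D2" "\<forall>y. F2 y = peval V D2 g2 y"
    using assms(3) unfolding poly_fun_def by blast
  let ?P = "pmonos V D1 \<times> pmonos V D2"
  have fP: "finite ?P" using finite_pmonos[OF fV] by simp
  let ?pl = "\<lambda>x::('a \<Rightarrow> nat) \<times> ('a \<Rightarrow> nat). (\<lambda>v. fst x v + snd x v)"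
  define g where "g = (\<lambda>\<alpha>. \<Sum>x\<in>{x\<in>?P. ?pl x = \<alpha>}. g1 (fst x) * g2 (snd x))"
  have plP: "\<forall>x\<in>?P. ?pl x \<in> pmonos V (D1 + D2)"
  proof
    fix x assume "x \<in> ?P"
    then show "?pl x \<in> pmonos V (D1 + D2)" unfolding pmonos_def by (auto simp: sum.distrib)
  qed
  have supp: "\<forall>\<alpha>. g \<alpha> \<noteq> 0 \<longrightarrow> \<alpha> \<in> pmonos V (D1 + D2)"
  proof (intro allI impI)
    fix \<alpha> assume "g \<alpha> \<noteq> 0"
    then have "{x\<in>?P. ?pl x = \<alpha>} \<noteq> {}" unfolding g_def by (metis (no_types, lifting) sum.empty)
    then show "\<alpha> \<in> pmonos V (D1 + D2)" using plP by auto
  qed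
  have mon_add: "\<And>x y. (\<Prod>v\<in>V. y v ^ ?pl x v) = (\<Prod>v\<in>V. y v ^ fst x v) * (\<Prod>v\<in>V. y v ^ snd x v)"
    by (simp add: power_add prod.distrib)
  have "\<forall>y. F1 y * F2 y = peval V (D1 + D2) g y"
  proof
    fix y
    have "F1 y * F2 y = (\<Sum>\<beta>\<in>pmonos V D1. g1 \<beta> * (\<Prod>v\<in>V. y v ^ \<beta> v)) * (\<Sum>\<gamma>\<in>pmonos V D2. g2 \<gamma> * (\<Prod>v\<in>V. y v ^ \<gamma> v))"
      using g1(2) g2(2) unfolding peval_def by simp
    also have "\<dots> = (\<Sum>x\<in>?P. g1 (fst x) * (\<Prod>v\<in>V. y v ^ fst x v) * (g2 (snd x) * (\<Prod>v\<in>V. y v ^ snd x v)))"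
      unfolding sum_product sum.cartesian_product by (simp add: case_prod_beta)
    also have "\<dots> = (\<Sum>x\<in>?P. g1 (fst x) * g2 (snd x) * (\<Prod>v\<in>V. y v ^ ?pl x v))"
      unfolding mon_add by (rule sum.cong[OF refl]) (simp add: mult_ac)
    also have "\<dots> = (\<Sum>\<alpha>\<in>?pl ` ?P. \<Sum>x\<in>{x\<in>?P. ?pl x = \<alpha>}. g1 (fst x) * g2 (snd x) * (\<Prod>v\<in>V. y v ^ ?pl x v))"
      by (rule sum.image_gen[OF fP])
    also have "\<dots> = (\<Sum>\<alpha>\<in>?pl ` ?P. g \<alpha> * (\<Prod>v\<in>V. y v ^ \<alpha> v))"
      unfolding g_def sum_distrib_right by (intro sum.cong refl) auto
    also have "\<dots> = peval V (D1 + D2) g y"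
      unfolding peval_def
    proof (rule sum.mono_neutral_left)
      show "finite (pmonos V (D1 + D2))" by (rule finite_pmonos[OF fV])
      show "?pl ` ?P \<subseteq> pmonos V (D1 + D2)" using plP by auto
      show "\<forall>i\<in>pmonos V (D1 + D2) - ?pl ` ?P. g i * (\<Prod>v\<in>V. y v ^ i v) = 0"
      proof
        fix i assume "i \<in> pmonos V (D1 + D2) - ?pl ` ?P"
        then have e: "{x\<in>?P. ?pl x = i} = {}" by blast
        have "g i = 0" unfolding g_def e by simp
        then show "g i * (\<Prod>v\<in>V. y v ^ i v) = 0" by simp
      qed
    qed
    finally show "F1 y * F2 y = peval V (D1 + D2) g y" .
  qed
  then show ?thesis using supp unfolding poly_fun_def by blast
qed

lemma poly_fun_sum:
  assumes fV: "finite V" shows "finite A \<Longrightarrow> (\<And>a. a \<in> A \<Longrightarrow> poly_fun V (F a)) \<Longrightarrow> poly_fun V (\<lambda>y. \<Sum>a\<in>A. F a y)"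
proof (induction A rule: finite_induct)
  case empty then show ?case using poly_fun_const[OF fV, of 0] by simp
next
  case (insert a A) then show ?case using poly_fun_add[OF fV] by simp
qed

lemma poly_fun_prod:
  assumes fV: "finite V" shows "finite A \<Longrightarrow> (\<And>a. a \<in> A \<Longrightarrow> poly_fun V (F a)) \<Longrightarrow> poly_fun V (\<lambda>y. \<Prod>a\<in>A. F a y)"
proof (induction A rule: finite_induct)
  case empty then show ?case using poly_fun_const[OF fV, of 1] by simp
next
  case (insert a A) then show ?case using poly_fun_mult[OF fV] by simp
qed

lemma poly_fun_det:
  assumes fV: "finite V" and M: "\<And>y. M y \<in> carrier_mat N N"
    and entries: "\<forall>i<N. \<forall>l<N. poly_fun V (\<lambda>y. M y $$ (i, l))"
  shows "poly_fun V (\<lambda>y. det (M y))"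
proof -
  have "poly_fun V (\<lambda>y. \<Sum>\<pi>\<in>{\<pi>. \<pi> permutes {0..<N}}. signof \<pi> * (\<Prod>i = 0..<N. M y $$ (i, \<pi> i)))"
  proof (rule poly_fun_sum[OF fV])
    show "finite {\<pi>. \<pi> permutes {0..<N}}" by (rule finite_permutations) simp
    fix \<pi> assume p: "\<pi> \<in> {\<pi>. \<pi> permutes {0..<N}}"
    show "poly_fun V (\<lambda>y. signof \<pi> * (\<Prod>i = 0..<N. M y $$ (i, \<pi> i)))"
    proof (rule poly_fun_mult[OF fV poly_fun_const[OF fV]], rule poly_fun_prod[OF fV])
      fix i assume i: "i \<in> {0..<N}"
      then have "\<pi> i \<in> {0..<N}" using p permutes_in_image by fastforce
      then show "poly_fun V (\<lambda>y. M y $$ (i, \<pi> i))" using entries i by auto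
    qed simp
  qed
  then show ?thesis using det_def'[OF M] by simp
qed

lemma exists_poly_condition:
  assumes "poly_fun V G" "G y0 \<noteq> 0" "\<And>p. G (\<lambda>(i, j). p i j) \<noteq> 0 \<Longrightarrow> P p"
  shows "\<exists>D g. (\<forall>\<alpha>. g \<alpha> \<noteq> 0 \<longrightarrow> \<alpha> \<in> pmonos V D) \<and> (\<exists>\<alpha>. g \<alpha> \<noteq> 0) \<and>
    (\<forall>p. peval V D g (\<lambda>(i, j). p i j) \<noteq> 0 \<longrightarrow> P p)"
proof -
  obtain D g where g: "\<forall>\<alpha>. g \<alpha> \<noteq> 0 \<longrightarrow> \<alpha> \<in> pmonos V D" "\<forall>y. G y = peval V D g y"
    using assms(1) unfolding poly_fun_def by blast
  have "\<exists>\<alpha>. g \<alpha> \<noteq> 0" using assms(2) g(2) unfolding peval_def by (metis (no_types, lifting) mult_eq_0_iff sum.neutral)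
  then show ?thesis using g assms(3) by metis
qed

text \<open>The matrix whose columns are the first \<open>k\<close> points, completed by unit vectors; the point
  coordinates are the variables \<open>y (i, j)\<close>.\<close>

definition point_mat :: "nat \<Rightarrow> nat \<Rightarrow> (nat \<times> nat \<Rightarrow> complex) \<Rightarrow> complex mat" where
  "point_mat n k y = mat (Suc n) (Suc n) (\<lambda>(i, l). if l < k then y (Suc l, i) else of_bool (i = l))"

lemma point_mat_carrier: "point_mat n k y \<in> carrier_mat (Suc n) (Suc n)"
  unfolding point_mat_def by simp

lemma poly_fun_det_point_mat:
  assumes "k \<le> s"
  shows "poly_fun ({1..s} \<times> {..n}) (\<lambda>y. det (point_mat n k y))"
proof (rule poly_fun_det[where M = "point_mat n k" and N = "Suc n"])
  show "\<forall>i<Suc n. \<forall>l<Suc n. poly_fun ({1..s} \<times> {..n}) (\<lambda>y. point_mat n k y $$ (i, l))"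
  proof (intro allI impI)
    fix i l assume "i < Suc n" "l < Suc n"
    then show "poly_fun ({1..s} \<times> {..n}) (\<lambda>y. point_mat n k y $$ (i, l))"
      using assms unfolding point_mat_def by (cases "l < k") (auto intro!: poly_fun_var poly_fun_const)
  qed
qed (simp_all add: point_mat_carrier)

lemma replace_col_carrier_mat: "A \<in> carrier_mat n n \<Longrightarrow> replace_col A b k \<in> carrier_mat n n"
  by (simp add: replace_col_def)

lemma poly_fun_det_replace_col_point_mat:
  assumes "k \<le> s" "i0 \<in> {1..s}"
  shows "poly_fun ({1..s} \<times> {..n}) (\<lambda>y. det (replace_col (point_mat n k y) (vec (Suc n) (\<lambda>j. y (i0, j))) c0))"
proof (rule poly_fun_det[where M = "\<lambda>y. replace_col (point_mat n k y) (vec (Suc n) (\<lambda>j. y (i0, j))) c0"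
      and N = "Suc n"])
  show "\<forall>i<Suc n. \<forall>l<Suc n. poly_fun ({1..s} \<times> {..n})
      (\<lambda>y. replace_col (point_mat n k y) (vec (Suc n) (\<lambda>j. y (i0, j))) c0 $$ (i, l))"
  proof (intro allI impI)
    fix i l assume "i < Suc n" "l < Suc n"
    then show "poly_fun ({1..s} \<times> {..n})
        (\<lambda>y. replace_col (point_mat n k y) (vec (Suc n) (\<lambda>j. y (i0, j))) c0 $$ (i, l))"
      using assms unfolding point_mat_def replace_col_def
      by (cases "l = c0"; cases "l < k") (auto intro!: poly_fun_var poly_fun_const)
  qed
qed (simp_all add: point_mat_carrier replace_col_carrier_mat)

lemma det_point_mat_unit_vecs: "det (point_mat n k (\<lambda>(a, b). of_bool (a = Suc b))) = 1"
proof -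
  have "point_mat n k (\<lambda>(a, b). of_bool (a = Suc b)) = 1\<^sub>m (Suc n)"
    by (rule eq_matI) (auto simp: point_mat_def)
  then show ?thesis by simp
qed

lemma det_replace_col_one:
  assumes "k < N"
  shows "det (replace_col (1\<^sub>m N) (vec N (\<lambda>_. 1)) k) = (1 :: complex)"
  using cramer_lemma_mat[of "1\<^sub>m N" N "vec N (\<lambda>_. 1)" k] assms by simp

text \<open>Cramer's rule: the coordinates of \<open>v\<close> in the basis of columns of \<open>M\<close> are, up to \<open>det M\<close>, the
  determinants of \<open>M\<close> with one column replaced by \<open>v\<close>.\<close>

lemma det_replace_col_eq_coord:
  assumes M: "M \<in> carrier_mat (Suc n) (Suc n)" and AB: "mat_mult_id n (\<lambda>i l. M $$ (i, l)) B" and k: "k \<le> n"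
  shows "det (replace_col M (vec (Suc n) v) k) = lin_map n B v k * det M"
proof -
  have "M *\<^sub>v vec (Suc n) (lin_map n B v) = vec (Suc n) v"
  proof (rule eq_vecI)
    fix i assume "i < dim_vec (vec (Suc n) v)"
    then have "(M *\<^sub>v vec (Suc n) (lin_map n B v)) $ i = lin_map n (\<lambda>i l. M $$ (i, l)) (lin_map n B v) i"
      using M unfolding lin_map_def lin_form_def
      by (simp add: scalar_prod_def atLeast0LessThan lessThan_Suc_atMost)
    also have "\<dots> = v i" using lin_map_inverse[OF AB] \<open>i < dim_vec (vec (Suc n) v)\<close> by simp
    finally show "(M *\<^sub>v vec (Suc n) (lin_map n B v)) $ i = vec (Suc n) v $ i"
      using \<open>i < dim_vec (vec (Suc n) v)\<close> by simp
  qed (use M in simp)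
  then show ?thesis using cramer_lemma_mat[OF M, of "vec (Suc n) (lin_map n B v)" k] k by simp
qed

lemma exists_inverse_if_det_nonzero:
  fixes M :: "complex mat"
  assumes M: "M \<in> carrier_mat (Suc n) (Suc n)" and dM: "det M \<noteq> 0"
  obtains B where "mat_mult_id n (\<lambda>i l. M $$ (i, l)) B" "mat_mult_id n B (\<lambda>i l. M $$ (i, l))"
proof -
  define Ad where "Ad = adj_mat M"
  have Ad: "Ad \<in> carrier_mat (Suc n) (Suc n)" "M * Ad = det M \<cdot>\<^sub>m 1\<^sub>m (Suc n)" "Ad * M = det M \<cdot>\<^sub>m 1\<^sub>m (Suc n)"
    using adj_mat[OF M] unfolding Ad_def by auto
  have entry: "(\<Sum>l\<le>n. X $$ (i, l) * Y $$ (l, j)) = (X * Y) $$ (i, j)"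
    if "X \<in> carrier_mat (Suc n) (Suc n)" "Y \<in> carrier_mat (Suc n) (Suc n)" "i \<le> n" "j \<le> n"
    for X Y :: "complex mat" and i j
    using that by (simp add: scalar_prod_def atLeast0LessThan lessThan_Suc_atMost)
  define B where "B = (\<lambda>l j. Ad $$ (l, j) / det M)"
  have "mat_mult_id n (\<lambda>i l. M $$ (i, l)) B"
    unfolding mat_mult_id_def
  proof (intro allI impI)
    fix i j assume ij: "i \<le> n" "j \<le> n"
    have "(\<Sum>l\<le>n. M $$ (i, l) * B l j) = (\<Sum>l\<le>n. M $$ (i, l) * Ad $$ (l, j)) / det M"
      unfolding B_def by (simp add: sum_divide_distrib)
    then show "(\<Sum>l\<le>n. M $$ (i, l) * B l j) = (if i = j then 1 else 0)"
      using entry[OF M Ad(1) ij] Ad(2) ij dM by simp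
  qed
  moreover have "mat_mult_id n B (\<lambda>i l. M $$ (i, l))"
    unfolding mat_mult_id_def
  proof (intro allI impI)
    fix i j assume ij: "i \<le> n" "j \<le> n"
    have "(\<Sum>l\<le>n. B i l * M $$ (l, j)) = (\<Sum>l\<le>n. Ad $$ (i, l) * M $$ (l, j)) / det M"
      unfolding B_def by (simp add: sum_divide_distrib)
    then show "(\<Sum>l\<le>n. B i l * M $$ (l, j)) = (if i = j then 1 else 0)"
      using entry[OF Ad(1) M ij] Ad(3) ij dM by simp
  qed
  ultimately show thesis using that by blast
qed

section \<open>The generic configurations\<close>

lemma base_mult_exact_few_points:
  assumes s: "s \<le> n + 1" and gen: "det (point_mat n s (\<lambda>(i, j). p i j)) \<noteq> 0"
    and nonempty: "\<exists>c\<in>linsys n d s m p. hs_nonzero n d c" and I: "I \<subseteq> {1..s}" "card I = r + 1"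
  shows "base_mult_exact n d s m p I (kI d m r I)"
proof -
  let ?M = "point_mat n s (\<lambda>(i, j). p i j)"
  obtain B where AB: "mat_mult_id n (\<lambda>i l. ?M $$ (i, l)) B" and BA: "mat_mult_id n B (\<lambda>i l. ?M $$ (i, l))"
    using exists_inverse_if_det_nonzero[OF point_mat_carrier gen] by blast
  have cover: "\<forall>i\<in>{1..s}. i \<in> Suc ` {..n}"
  proof
    fix i assume "i \<in> {1..s}"
    then have "i - 1 \<le> n" "i = Suc (i - 1)" using s by auto
    then show "i \<in> Suc ` {..n}" by blast
  qed
  moreover have "I \<subseteq> Suc ` {..n}" using cover I(1) by blast
  ultimately show ?thesis
    by (intro base_mult_exact_in_point_basis[OF AB BA, where w = "\<lambda>_. 1" and \<pi> = Suc and \<mu> = 0 and ie = 0])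
      (use nonempty I in \<open>auto simp: point_mat_def\<close>)
qed

lemma lin_map_exchange:
  assumes Aw: "\<forall>j\<le>n. lin_map n A w j = v j" and k: "k \<le> n" "w k \<noteq> 0"
    and A': "\<forall>j\<le>n. \<forall>l\<le>n. A' j l = (if l = k then v j else A j l)"
  shows "\<forall>j\<le>n. lin_map n A' (\<lambda>l. if l = k then 1 / w k else - w l / w k) j = A j k"
proof (intro allI impI)
  fix j assume j: "j \<le> n"
  let ?w' = "\<lambda>l. if l = k then 1 / w k else - w l / w k"
  have "(\<Sum>l\<in>{..n}-{k}. A' j l * ?w' l) = (\<Sum>l\<in>{..n}-{k}. - (A j l * w l / w k))"
    using A' j by (intro sum.cong) auto
  also have "\<dots> = - (\<Sum>l\<in>{..n}-{k}. A j l * w l) / w k" by (simp add: sum_negf sum_divide_distrib)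
  finally have "lin_map n A' ?w' j = v j / w k - (\<Sum>l\<in>{..n}-{k}. A j l * w l) / w k"
    using sum.remove[of "{..n}" k "\<lambda>l. A' j l * ?w' l"] k(1) A' j unfolding lin_map_def lin_form_def by simp
  also have "v j = A j k * w k + (\<Sum>l\<in>{..n}-{k}. A j l * w l)"
    using Aw j sum.remove[of "{..n}" k "\<lambda>l. A j l * w l"] k(1) unfolding lin_map_def lin_form_def by simp
  finally show "lin_map n A' ?w' j = A j k" using k(2) by (simp add: field_simps)
qed

text \<open>When \<open>p\<^sub>k\<^sub>+\<^sub>1 \<notin> I\<close>, exchange it with \<open>p\<^sub>n\<^sub>+\<^sub>2\<close> in the basis: the coordinates of
  \<open>p\<^sub>k\<^sub>+\<^sub>1\<close> in the new basis are again all nonzero.\<close>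

lemma base_mult_exact_exchanged_basis:
  assumes s: "s = n + 2"
    and Aw: "\<forall>j\<le>n. lin_map n (\<lambda>i l. point_mat n (Suc n) (\<lambda>(i, j). p i j) $$ (i, l)) w j = p (n + 2) j"
    and w: "\<forall>l\<le>n. w l \<noteq> 0" and k: "k \<le> n" "Suc k \<notin> I"
    and gen: "det (replace_col (point_mat n (Suc n) (\<lambda>(i, j). p i j)) (vec (Suc n) (p (n + 2))) k) \<noteq> 0"
    and nonempty: "\<exists>c\<in>linsys n d s m p. hs_nonzero n d c"
    and I: "I \<subseteq> {1..s}" "card I = r + 1"
  shows "base_mult_exact n d s m p I (kI d m r I)"
proof -
  let ?M = "point_mat n (Suc n) (\<lambda>(i, j). p i j)"
  have M: "?M $$ (j, l) = p (Suc l) j" if "j \<le> n" "l \<le> n" for j l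
    using that unfolding point_mat_def by simp
  let ?M' = "replace_col ?M (vec (Suc n) (p (n + 2))) k"
  obtain B' where AB': "mat_mult_id n (\<lambda>i l. ?M' $$ (i, l)) B'" and BA': "mat_mult_id n B' (\<lambda>i l. ?M' $$ (i, l))"
    using exists_inverse_if_det_nonzero[OF replace_col_carrier_mat[OF point_mat_carrier]] gen by blast
  define \<pi> where "\<pi> = (\<lambda>l. if l = k then n + 2 else Suc l)"
  have M': "?M' $$ (j, l) = p (\<pi> l) j" if "j \<le> n" "l \<le> n" for j l
    using that M unfolding \<pi>_def
    by (simp add: replace_col_def point_mat_carrier[THEN carrier_matD(1)] point_mat_carrier[THEN carrier_matD(2)])
  define w' where "w' = (\<lambda>l. if l = k then 1 / w k else - w l / w k)"
  have "\<forall>j\<le>n. \<forall>l\<le>n. ?M' $$ (j, l) = (if l = k then p (n + 2) j else ?M $$ (j, l))"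
    by (simp add: replace_col_def point_mat_carrier[THEN carrier_matD(1)] point_mat_carrier[THEN carrier_matD(2)])
  from lin_map_exchange[OF Aw k(1) _ this]
  have Aw': "\<forall>j\<le>n. lin_map n (\<lambda>i l. ?M' $$ (i, l)) w' j = p (Suc k) j"
    using w k(1) M unfolding w'_def by simp
  have w': "\<forall>l\<le>n. w' l \<noteq> 0" using w k(1) unfolding w'_def by simp
  have inj: "inj_on \<pi> {..n}" unfolding \<pi>_def inj_on_def by auto
  have points: "{1..s} = insert (Suc k) (\<pi> ` {..n})"
  proof
    show "insert (Suc k) (\<pi> ` {..n}) \<subseteq> {1..s}" using s k(1) unfolding \<pi>_def by auto
    show "{1..s} \<subseteq> insert (Suc k) (\<pi> ` {..n})"
    proof
      fix i assume i: "i \<in> {1..s}"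
      consider "i = n + 2" | "i = Suc k" | "i \<noteq> n + 2" "i \<noteq> Suc k" by blast
      then show "i \<in> insert (Suc k) (\<pi> ` {..n})"
      proof cases
        case 1 then show ?thesis using k(1) unfolding \<pi>_def by (auto intro!: image_eqI[of _ _ k])
      next
        case 3
        then have "\<pi> (i - 1) = i" "i - 1 \<le> n" using i s unfolding \<pi>_def by auto
        then show ?thesis by (metis atMost_iff image_eqI insertCI)
      qed simp
    qed
  qed
  have "I \<subseteq> \<pi> ` {..n}" using I(1) k(2) unfolding points by (simp add: subset_insert)
  moreover have "\<forall>i\<in>{1..s}. i \<in> \<pi> ` {..n} \<or> i = Suc k" using points by blast
  ultimately show ?thesis
    by (intro base_mult_exact_in_point_basis[OF AB' BA' w' inj, where \<mu> = "m (Suc k)" and ie = "Suc k"])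
      (use Aw' M' nonempty I s k(1) in auto)
qed

lemma base_mult_exact_n_plus_2_points:
  assumes s: "s = n + 2"
    and gen: "det (point_mat n (Suc n) (\<lambda>(i, j). p i j)) \<noteq> 0"
      "\<forall>k\<le>n. det (replace_col (point_mat n (Suc n) (\<lambda>(i, j). p i j)) (vec (Suc n) (p (n + 2))) k) \<noteq> 0"
    and nonempty: "\<exists>c\<in>linsys n d s m p. hs_nonzero n d c"
    and I: "I \<subseteq> {1..s}" "card I = r + 1" "r + 1 \<le> n"
  shows "base_mult_exact n d s m p I (kI d m r I)"
proof -
  let ?M = "point_mat n (Suc n) (\<lambda>(i, j). p i j)"
  obtain B where AB: "mat_mult_id n (\<lambda>i l. ?M $$ (i, l)) B" and BA: "mat_mult_id n B (\<lambda>i l. ?M $$ (i, l))"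
    using exists_inverse_if_det_nonzero[OF point_mat_carrier gen(1)] by blast
  have M: "?M $$ (j, l) = p (Suc l) j" if "j \<le> n" "l \<le> n" for j l
    using that unfolding point_mat_def by simp
  define w where "w = lin_map n B (p (n + 2))"
  have Aw: "\<forall>j\<le>n. lin_map n (\<lambda>i l. ?M $$ (i, l)) w j = p (n + 2) j"
    unfolding w_def using lin_map_inverse[OF AB] by blast
  have w: "\<forall>l\<le>n. w l \<noteq> 0"
    using gen det_replace_col_eq_coord[OF point_mat_carrier AB] unfolding w_def by fastforce
  have Suc_range: "Suc ` {..n} = {1..n+1}" by (simp add: atMost_atLeast0)
  show ?thesis
  proof (cases "n + 2 \<in> I")
    case False
    then have "I \<subseteq> {1..s} - {n + 2}" using I(1) by blast
    moreover have "{1..s} - {n + 2} = Suc ` {..n}" using s Suc_range by auto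
    ultimately have "I \<subseteq> Suc ` {..n}" by simp
    moreover have "\<forall>i\<in>{1..s}. i \<in> Suc ` {..n} \<or> i = n + 2" using s Suc_range by auto
    ultimately show ?thesis
      by (intro base_mult_exact_in_point_basis[OF AB BA w, where \<pi> = Suc and \<mu> = "m (n + 2)" and ie = "n + 2"])
        (use Aw M nonempty I s in auto)
  next
    case True
    have "\<exists>i0\<in>{1..n+1}. i0 \<notin> I"
    proof (rule ccontr)
      assume "\<not> (\<exists>i0\<in>{1..n+1}. i0 \<notin> I)"
      then have "insert (n + 2) {1..n+1} \<subseteq> I" using True by auto
      then have "card (insert (n + 2) {1..n+1}) \<le> card I" using I(1) by (intro card_mono) (auto intro: finite_subset)
      then show False using I(2,3) by simp
    qed
    then obtain i0 where "i0 \<in> {1..n+1}" "i0 \<notin> I" by blast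
    then have k: "i0 - 1 \<le> n" "Suc (i0 - 1) \<notin> I" by auto
    show ?thesis
      by (rule base_mult_exact_exchanged_basis[OF s Aw w k gen(2)[rule_format, OF k(1)] nonempty I(1,2)])
  qed
qed

theorem proposition2p5:
  fixes n d s :: nat and m :: "nat \<Rightarrow> nat"
  assumes "s \<le> n + 2"
  shows "\<exists>D g. (\<forall>\<alpha>. g \<alpha> \<noteq> 0 \<longrightarrow> \<alpha> \<in> pmonos ({1..s} \<times> {..n}) D) \<and> (\<exists>\<alpha>. g \<alpha> \<noteq> 0) \<and>
     (\<forall>p :: nat \<Rightarrow> nat \<Rightarrow> complex.
        peval ({1..s} \<times> {..n}) D g (\<lambda>(i, j). p i j) \<noteq> 0 \<longrightarrow>
        (\<exists>c\<in>linsys n d s m p. hs_nonzero n d c) \<longrightarrow>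
        (\<forall>r I. r + 1 \<le> min n s \<longrightarrow> I \<subseteq> {1..s} \<longrightarrow> card I = r + 1 \<longrightarrow>
           base_mult_exact n d s m p I (kI d m r I)))"
proof (cases "s \<le> n + 1")
  case True
  have "det (point_mat n s (\<lambda>(a, b). of_bool (a = Suc b))) \<noteq> 0" by (simp add: det_point_mat_unit_vecs)
  then show ?thesis
    by (rule exists_poly_condition[OF poly_fun_det_point_mat[OF order_refl]])
      (use base_mult_exact_few_points[OF True] in blast)
next
  case False
  then have s: "s = n + 2" using assms by simp
  define G where "G = (\<lambda>y. det (point_mat n (Suc n) y) *
    (\<Prod>k\<le>n. det (replace_col (point_mat n (Suc n) y) (vec (Suc n) (\<lambda>j. y (n + 2, j))) k)))"
  have "poly_fun ({1..s} \<times> {..n}) G"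
    unfolding G_def using s poly_fun_det_point_mat poly_fun_det_replace_col_point_mat
    by (intro poly_fun_mult poly_fun_prod) auto
  moreover have "point_mat n (Suc n) (\<lambda>(a, b). if a = n + 2 then 1 else of_bool (a = Suc b)) = 1\<^sub>m (Suc n)"
    by (rule eq_matI) (auto simp: point_mat_def)
  then have "G (\<lambda>(a, b). if a = n + 2 then 1 else of_bool (a = Suc b)) \<noteq> 0"
    unfolding G_def using det_replace_col_one by simp
  ultimately show ?thesis
  proof (rule exists_poly_condition)
    fix p :: "nat \<Rightarrow> nat \<Rightarrow> complex"
    assume "G (\<lambda>(i, j). p i j) \<noteq> 0"
    then show "(\<exists>c\<in>linsys n d s m p. hs_nonzero n d c) \<longrightarrow>
        (\<forall>r I. r + 1 \<le> min n s \<longrightarrow> I \<subseteq> {1..s} \<longrightarrow> card I = r + 1 \<longrightarrow>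
           base_mult_exact n d s m p I (kI d m r I))"
      using base_mult_exact_n_plus_2_points[OF s] unfolding G_def by auto
  qed
qed

end
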